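(* For a gradient Ricci soliton $(M^n,g,f)$ with $\mathrm{Ric}+\mathrm{Hess} f=\lambda g$, with $\{E_i\}$ an orthonormal frame and sums over $i$ implied, $$\Delta_f\big(\mathrm{Ric}(\nabla f,\nabla f)\big)=4\lambda\,\mathrm{Ric}(\nabla f,\nabla f)-2D_{\nabla f}|\mathrm{Ric}|^2+2\sum_i\mathrm{Ric}(\nabla_{E_i}\nabla f,\nabla_{E_i}\nabla f)+2\sum_i R(\nabla f,E_i,\mathrm{Ric}(E_i),\nabla f),$$ equivalently $$\tfrac12\Delta_f\big(D_{\nabla f}\mathrm{scal}\big)=D_{\nabla f}\big(\Delta_f\mathrm{scal}\big)+2\sum_i\mathrm{Ric}(\nabla_{E_i}\nabla f,\nabla_{E_i}\nabla f)+2\sum_iR(\nabla f,E_i,\mathrm{Ric}(E_i),\nabla f).$$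
   Context: Conventions: $R(X,Y)Z=\nabla_X\nabla_YZ-\nabla_Y\nabla_XZ-\nabla_{[X,Y]}Z$, $R(X,Y,Z,W)=g(R(X,Y)Z,W)$. For a function $u$, $\Delta_fu=\Delta u-g(\nabla f,\nabla u)$, and $D_{\nabla f}u=g(\nabla f,\nabla u)$. $\mathrm{Ric}(X)$ denotes the $(1,1)$ Ricci tensor and $\mathrm{Ric}(X,Y)=g(\mathrm{Ric}(X),Y)$. *)

theory Defs
  imports "HOL-Analysis.Analysis"
begin

text \<open>Local coordinate formalization of Riemannian geometry on an open set
U of R^n (points: real^'n, coordinate indices: the finite type 'n).
A metric is given by its components g i j :: real^'n => real.\<close>

definition pd :: "'n::finite \<Rightarrow> (real^'n \<Rightarrow> real) \<Rightarrow> real^'n \<Rightarrow> real" where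
  "pd k h x = deriv (\<lambda>t. h (x + t *\<^sub>R axis k 1)) 0"

definition iter_pd :: "'n::finite list \<Rightarrow> (real^'n \<Rightarrow> real) \<Rightarrow> real^'n \<Rightarrow> real" where
  "iter_pd ks h = foldr pd ks h"

definition smooth_on_coord :: "(real^'n::finite) set \<Rightarrow> (real^'n \<Rightarrow> real) \<Rightarrow> bool" where
  "smooth_on_coord U h \<longleftrightarrow>
     (\<forall>ks. continuous_on U (iter_pd ks h) \<and>
       (\<forall>k. \<forall>x\<in>U. ((\<lambda>t. iter_pd ks h (x + t *\<^sub>R axis k 1))
                       has_real_derivative iter_pd (k # ks) h x) (at 0)))"

definition riemannian_metric_on :: "(real^'n::finite) set \<Rightarrow> ('n \<Rightarrow> 'n \<Rightarrow> real^'n \<Rightarrow> real) \<Rightarrow> bool" where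
  "riemannian_metric_on U g \<longleftrightarrow>
     (\<forall>i j. smooth_on_coord U (g i j)) \<and>
     (\<forall>i j. \<forall>x\<in>U. g i j x = g j i x) \<and>
     (\<forall>x\<in>U. \<forall>v::real^'n. v \<noteq> 0 \<longrightarrow> (\<Sum>i\<in>UNIV. \<Sum>j\<in>UNIV. v$i * g i j x * v$j) > 0)"

definition ginv :: "('n::finite \<Rightarrow> 'n \<Rightarrow> real^'n \<Rightarrow> real) \<Rightarrow> 'n \<Rightarrow> 'n \<Rightarrow> real^'n \<Rightarrow> real" where
  "ginv g i j x = matrix_inv (\<chi> a b. g a b x) $ i $ j"

text \<open>Christoffel symbols: nabla_{d_i} d_j = sum_k Gamma k i j d_k.\<close>
definition christoffel :: "('n::finite \<Rightarrow> 'n \<Rightarrow> real^'n \<Rightarrow> real) \<Rightarrow> 'n \<Rightarrow> 'n \<Rightarrow> 'n \<Rightarrow> real^'n \<Rightarrow> real" where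
  "christoffel g k i j x = (1/2) * (\<Sum>l\<in>UNIV. ginv g k l x *
      (pd i (g j l) x + pd j (g i l) x - pd l (g i j) x))"

text \<open>R(d_i,d_j)d_k = sum_l riem_up g l i j k d_l, with
 R(X,Y)Z = nabla_X nabla_Y Z - nabla_Y nabla_X Z - nabla_[X,Y] Z.\<close>
definition riem_up :: "('n::finite \<Rightarrow> 'n \<Rightarrow> real^'n \<Rightarrow> real) \<Rightarrow> 'n \<Rightarrow> 'n \<Rightarrow> 'n \<Rightarrow> 'n \<Rightarrow> real^'n \<Rightarrow> real" where
  "riem_up g l i j k x =
     pd i (christoffel g l j k) x - pd j (christoffel g l i k) x
     + (\<Sum>m\<in>UNIV. christoffel g m j k x * christoffel g l i m x
                 - christoffel g m i k x * christoffel g l j m x)"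

text \<open>R(d_i,d_j,d_k,d_l) = g(R(d_i,d_j)d_k, d_l).\<close>
definition riem :: "('n::finite \<Rightarrow> 'n \<Rightarrow> real^'n \<Rightarrow> real) \<Rightarrow> 'n \<Rightarrow> 'n \<Rightarrow> 'n \<Rightarrow> 'n \<Rightarrow> real^'n \<Rightarrow> real" where
  "riem g i j k l x = (\<Sum>p\<in>UNIV. riem_up g p i j k x * g p l x)"

definition ric :: "('n::finite \<Rightarrow> 'n \<Rightarrow> real^'n \<Rightarrow> real) \<Rightarrow> 'n \<Rightarrow> 'n \<Rightarrow> real^'n \<Rightarrow> real" where
  "ric g j k x = (\<Sum>i\<in>UNIV. riem_up g i i j k x)"

text \<open>Ricci as (1,1) tensor: Ric(d_j) = sum_k ric_up g k j d_k.\<close>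
definition ric_up :: "('n::finite \<Rightarrow> 'n \<Rightarrow> real^'n \<Rightarrow> real) \<Rightarrow> 'n \<Rightarrow> 'n \<Rightarrow> real^'n \<Rightarrow> real" where
  "ric_up g k j x = (\<Sum>l\<in>UNIV. ginv g k l x * ric g l j x)"

definition scal :: "('n::finite \<Rightarrow> 'n \<Rightarrow> real^'n \<Rightarrow> real) \<Rightarrow> real^'n \<Rightarrow> real" where
  "scal g x = (\<Sum>i\<in>UNIV. \<Sum>j\<in>UNIV. ginv g i j x * ric g i j x)"

definition ric_norm2 :: "('n::finite \<Rightarrow> 'n \<Rightarrow> real^'n \<Rightarrow> real) \<Rightarrow> real^'n \<Rightarrow> real" where
  "ric_norm2 g x = (\<Sum>i\<in>UNIV. \<Sum>j\<in>UNIV. \<Sum>a\<in>UNIV. \<Sum>b\<in>UNIV.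
       ginv g i a x * ginv g j b x * ric g i j x * ric g a b x)"

definition hess :: "('n::finite \<Rightarrow> 'n \<Rightarrow> real^'n \<Rightarrow> real) \<Rightarrow> (real^'n \<Rightarrow> real) \<Rightarrow> 'n \<Rightarrow> 'n \<Rightarrow> real^'n \<Rightarrow> real" where
  "hess g u i j x = pd i (pd j u) x - (\<Sum>k\<in>UNIV. christoffel g k i j x * pd k u x)"

definition grad :: "('n::finite \<Rightarrow> 'n \<Rightarrow> real^'n \<Rightarrow> real) \<Rightarrow> (real^'n \<Rightarrow> real) \<Rightarrow> 'n \<Rightarrow> real^'n \<Rightarrow> real" where
  "grad g u i x = (\<Sum>j\<in>UNIV. ginv g i j x * pd j u x)"

text \<open>nabla_{d_i} nabla u = sum_k hess_up g u k i d_k.\<close>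
definition hess_up :: "('n::finite \<Rightarrow> 'n \<Rightarrow> real^'n \<Rightarrow> real) \<Rightarrow> (real^'n \<Rightarrow> real) \<Rightarrow> 'n \<Rightarrow> 'n \<Rightarrow> real^'n \<Rightarrow> real" where
  "hess_up g u k i x = (\<Sum>l\<in>UNIV. ginv g k l x * hess g u i l x)"

definition laplacian :: "('n::finite \<Rightarrow> 'n \<Rightarrow> real^'n \<Rightarrow> real) \<Rightarrow> (real^'n \<Rightarrow> real) \<Rightarrow> real^'n \<Rightarrow> real" where
  "laplacian g u x = (\<Sum>i\<in>UNIV. \<Sum>j\<in>UNIV. ginv g i j x * hess g u i j x)"

definition dir_grad :: "('n::finite \<Rightarrow> 'n \<Rightarrow> real^'n \<Rightarrow> real) \<Rightarrow> (real^'n \<Rightarrow> real) \<Rightarrow> (real^'n \<Rightarrow> real) \<Rightarrow> real^'n \<Rightarrow> real" where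
  "dir_grad g f u x = (\<Sum>i\<in>UNIV. grad g f i x * pd i u x)"

definition f_laplacian :: "('n::finite \<Rightarrow> 'n \<Rightarrow> real^'n \<Rightarrow> real) \<Rightarrow> (real^'n \<Rightarrow> real) \<Rightarrow> (real^'n \<Rightarrow> real) \<Rightarrow> real^'n \<Rightarrow> real" where
  "f_laplacian g f u x = laplacian g u x - dir_grad g f u x"

definition gradient_ricci_soliton_on :: "(real^'n::finite) set \<Rightarrow> ('n \<Rightarrow> 'n \<Rightarrow> real^'n \<Rightarrow> real) \<Rightarrow> (real^'n \<Rightarrow> real) \<Rightarrow> real \<Rightarrow> bool" where
  "gradient_ricci_soliton_on U g f lam \<longleftrightarrow>
     riemannian_metric_on U g \<and> smooth_on_coord U f \<and>
     (\<forall>x\<in>U. \<forall>i j. ric g i j x + hess g f i j x = lam * g i j x)"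

definition ric_grad_grad :: "('n::finite \<Rightarrow> 'n \<Rightarrow> real^'n \<Rightarrow> real) \<Rightarrow> (real^'n \<Rightarrow> real) \<Rightarrow> real^'n \<Rightarrow> real" where
  "ric_grad_grad g f x = (\<Sum>i\<in>UNIV. \<Sum>j\<in>UNIV. ric g i j x * grad g f i x * grad g f j x)"

text \<open>sum_i Ric(nabla_{E_i} nabla f, nabla_{E_i} nabla f) over an orthonormal frame,
 written invariantly via the inverse metric.\<close>
definition ric_hess_term :: "('n::finite \<Rightarrow> 'n \<Rightarrow> real^'n \<Rightarrow> real) \<Rightarrow> (real^'n \<Rightarrow> real) \<Rightarrow> real^'n \<Rightarrow> real" where
  "ric_hess_term g f x = (\<Sum>i\<in>UNIV. \<Sum>j\<in>UNIV. \<Sum>k\<in>UNIV. \<Sum>l\<in>UNIV.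
      ginv g i j x * ric g k l x * hess_up g f k i x * hess_up g f l j x)"

text \<open>sum_i R(nabla f, E_i, Ric(E_i), nabla f) over an orthonormal frame.\<close>
definition riem_ric_term :: "('n::finite \<Rightarrow> 'n \<Rightarrow> real^'n \<Rightarrow> real) \<Rightarrow> (real^'n \<Rightarrow> real) \<Rightarrow> real^'n \<Rightarrow> real" where
  "riem_ric_term g f x = (\<Sum>i\<in>UNIV. \<Sum>j\<in>UNIV. \<Sum>a\<in>UNIV. \<Sum>k\<in>UNIV. \<Sum>b\<in>UNIV.
      ginv g i j x * riem g a i k b x * grad g f a x * ric_up g k j x * grad g f b x)"

end

theory Submission
  imports Defs
begin

(*
  The identity is a local computation in one chart U of R^n, in index notation
  with the inverse metric g^{ij} (so no orthonormal frame is needed).  The route: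

  From Ric + Hess f = lambda g:  dR = 2 Ric(df),
     Delta_f R = 2 lambda R - 2 |Ric|^2  and  D_{grad f} R = 2 Ric(grad f, grad f).
     Bochner's formula with u = R, w = f gives  Delta_f(D_{grad f} R)
     = D_{grad f}(Delta_f R) + 2 <Hess R, Hess f>, and expanding
     Hess R = 2 nabla(Ric(df)) turns <Hess R, Hess f> into the Ricci-Hessian
     term, the curvature term and derivatives of R and |Ric|^2.
  The theorem combines the two resulting identities.
*)

lemma iter_pd_Nil[simp]: "iter_pd [] h = h" by (simp add: iter_pd_def)
lemma iter_pd_Cons[simp]: "iter_pd (k#ks) h = pd k (iter_pd ks h)" by (simp add: iter_pd_def)
lemma iter_pd_snoc: "iter_pd (ks@[k]) h = iter_pd ks (pd k h)" by (simp add: iter_pd_def)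

(* C^n on U: all partial derivatives of order at most n exist along coordinate
   lines and are continuous.  Smoothness is C^n for every n, which lets us prove
   closure properties by induction on n. *)
definition smooth_upto :: "(real^'n::finite) set \<Rightarrow> nat \<Rightarrow> (real^'n \<Rightarrow> real) \<Rightarrow> bool" where
 "smooth_upto U n h \<longleftrightarrow> (\<forall>ks. length ks \<le> n \<longrightarrow> continuous_on U (iter_pd ks h) \<and>
   (\<forall>k. \<forall>x\<in>U. ((\<lambda>t. iter_pd ks h (x + t *\<^sub>R axis k 1)) has_real_derivative iter_pd (k#ks) h x) (at 0)))"

lemma smooth_upto_0: "smooth_upto U 0 h \<longleftrightarrow> continuous_on U h \<and>
   (\<forall>k. \<forall>x\<in>U. ((\<lambda>t. h (x + t *\<^sub>R axis k 1)) has_real_derivative pd k h x) (at 0))"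
  by (simp add: smooth_upto_def)

lemma smooth_upto_Suc: "smooth_upto U (Suc n) h \<longleftrightarrow> smooth_upto U 0 h \<and> (\<forall>k. smooth_upto U n (pd k h))"
proof
  assume a: "smooth_upto U (Suc n) h"
  show "smooth_upto U 0 h \<and> (\<forall>k. smooth_upto U n (pd k h))"
  proof (intro conjI allI)
    show "smooth_upto U 0 h" using a[unfolded smooth_upto_def, rule_format, of "[]"] unfolding smooth_upto_0 by simp
    fix k show "smooth_upto U n (pd k h)"
      unfolding smooth_upto_def
    proof (intro allI impI)
      fix ks :: "'a list" assume "length ks \<le> n"
      hence "length (ks@[k]) \<le> Suc n" by simp
      thus "continuous_on U (iter_pd ks (pd k h)) \<and>
        (\<forall>ka. \<forall>x\<in>U. ((\<lambda>t. iter_pd ks (pd k h) (x + t *\<^sub>R axis ka 1)) has_real_derivative iter_pd (ka # ks) (pd k h) x) (at 0))"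
        using a[unfolded smooth_upto_def, rule_format, of "ks@[k]"] by (simp add: iter_pd_snoc)
    qed
  qed
next
  assume a: "smooth_upto U 0 h \<and> (\<forall>k. smooth_upto U n (pd k h))"
  show "smooth_upto U (Suc n) h" unfolding smooth_upto_def
  proof (intro allI impI)
    fix ks :: "'a list" assume l: "length ks \<le> Suc n"
    show "continuous_on U (iter_pd ks h) \<and>
        (\<forall>k. \<forall>x\<in>U. ((\<lambda>t. iter_pd ks h (x + t *\<^sub>R axis k 1)) has_real_derivative iter_pd (k # ks) h x) (at 0))"
    proof (cases ks rule: rev_cases)
      case Nil thus ?thesis using a unfolding smooth_upto_def by auto
    next
      case (snoc ys y)
      hence "length ys \<le> n" using l by simp
      thus ?thesis using a[THEN conjunct2, rule_format, of y, unfolded smooth_upto_def, rule_format, of ys] unfolding snoc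
        by (simp add: iter_pd_snoc)
    qed
  qed
qed

lemma smooth_iff_smooth_upto: "smooth_on_coord U h \<longleftrightarrow> (\<forall>n. smooth_upto U n h)"
proof
  assume "smooth_on_coord U h" thus "\<forall>n. smooth_upto U n h" unfolding smooth_on_coord_def smooth_upto_def by blast
next
  assume a: "\<forall>n. smooth_upto U n h"
  show "smooth_on_coord U h" unfolding smooth_on_coord_def
  proof
    fix ks :: "'a list" show "continuous_on U (iter_pd ks h) \<and>
       (\<forall>k. \<forall>x\<in>U. ((\<lambda>t. iter_pd ks h (x + t *\<^sub>R axis k 1)) has_real_derivative iter_pd (k # ks) h x) (at 0))"
      using a[rule_format, of "length ks", unfolded smooth_upto_def, rule_format, of ks] by simp
  qed
qed

lemma smooth_upto_mono: "m \<le> n \<Longrightarrow> smooth_upto U n h \<Longrightarrow> smooth_upto U m h"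
  unfolding smooth_upto_def by (meson order_trans)

lemma smooth_upto_Suc_mono: "smooth_upto U (Suc n) h \<Longrightarrow> smooth_upto U n h"
  by (rule smooth_upto_mono[of n "Suc n"]) auto

locale open_domain =
  fixes U :: "(real^'n::finite) set"
  assumes open_U: "open U"
begin

(* Points near x on a coordinate line stay in U, so partial derivatives at
   points of U only depend on values in U. *)
lemma eventually_on_line:
  assumes "x \<in> U"
  shows "eventually (\<lambda>t. x + t *\<^sub>R axis k 1 \<in> U) (nhds (0::real))"
proof -
  obtain e where e: "e > 0" "ball x e \<subseteq> U" using open_U assms open_contains_ball by blast
  have "eventually (\<lambda>t::real. t \<in> ball 0 e) (nhds 0)"
    using e(1) by (intro eventually_nhds_in_open) auto
  thus ?thesis
  proof (rule eventually_mono)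
    fix t :: real assume "t \<in> ball 0 e"
    hence "norm (t *\<^sub>R axis k (1::real)) < e" by simp
    hence "x + t *\<^sub>R axis k 1 \<in> ball x e" by (simp add: dist_norm)
    thus "x + t *\<^sub>R axis k 1 \<in> U" using e by blast
  qed
qed

lemma pd_cong:
  assumes "\<And>y. y \<in> U \<Longrightarrow> h1 y = h2 y" "x \<in> U"
  shows "pd k h1 x = pd k h2 x"
  unfolding pd_def
  by (rule deriv_cong_ev[OF _ refl]) (use eventually_on_line[OF assms(2), of k] assms(1) in \<open>auto elim: eventually_mono\<close>)

lemma smooth0_cong:
  assumes "smooth_upto U 0 h1" "\<And>y. y \<in> U \<Longrightarrow> h1 y = h2 y"
  shows "smooth_upto U 0 h2"
proof -
  have c: "continuous_on U h2" using assms continuous_on_cong[of U U h1 h2] unfolding smooth_upto_0 by auto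
  have "((\<lambda>t. h2 (x + t *\<^sub>R axis k 1)) has_real_derivative pd k h2 x) (at 0)" if "x \<in> U" for k x
  proof -
    have "((\<lambda>t. h1 (x + t *\<^sub>R axis k 1)) has_real_derivative pd k h1 x) (at 0)"
      using assms that unfolding smooth_upto_0 by auto
    moreover have e1: "pd k h1 x = pd k h2 x" using pd_cong assms that by blast
    moreover have ev: "eventually (\<lambda>t. h1 (x + t *\<^sub>R axis k 1) = h2 (x + t *\<^sub>R axis k 1)) (nhds 0)"
      using eventually_on_line[OF that, of k] assms(2) by (auto elim: eventually_mono)
    ultimately show ?thesis
      using DERIV_cong_ev[OF refl ev e1] by simp
  qed
  with c show ?thesis unfolding smooth_upto_0 by auto
qed

lemma smooth_upto_cong:
  assumes "smooth_upto U n h1" "\<And>y. y \<in> U \<Longrightarrow> h1 y = h2 y"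
  shows "smooth_upto U n h2"
  using assms
proof (induction n arbitrary: h1 h2)
  case 0 thus ?case using smooth0_cong by blast
next
  case (Suc n)
  have "smooth_upto U 0 h2" using smooth0_cong Suc.prems smooth_upto_Suc by blast
  moreover have "smooth_upto U n (pd k h2)" for k
    using Suc.IH[of "pd k h1" "pd k h2"] Suc.prems pd_cong smooth_upto_Suc by blast
  ultimately show ?case using smooth_upto_Suc by blast
qed

abbreviation "smooth h \<equiv> smooth_on_coord U h"

lemma smooth_smooth_upto: "smooth h \<Longrightarrow> smooth_upto U n h" by (simp add: smooth_iff_smooth_upto)

lemma smooth_upto_deriv: "smooth_upto U n h \<Longrightarrow> x \<in> U \<Longrightarrow>
   ((\<lambda>t. h (x + t *\<^sub>R axis k 1)) has_real_derivative pd k h x) (at 0)"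
  using smooth_upto_mono[of 0 n U h] unfolding smooth_upto_0 by auto

lemma smooth_upto_cont: "smooth_upto U n h \<Longrightarrow> continuous_on U h"
  using smooth_upto_mono[of 0 n U h] unfolding smooth_upto_0 by auto

lemma pd_eq: "((\<lambda>t. h (x + t *\<^sub>R axis k 1)) has_real_derivative D) (at 0) \<Longrightarrow> pd k h x = D"
  unfolding pd_def by (rule DERIV_imp_deriv)

lemma pd_add_upto: "smooth_upto U n h1 \<Longrightarrow> smooth_upto U m h2 \<Longrightarrow> x \<in> U \<Longrightarrow>
   pd k (\<lambda>y. h1 y + h2 y) x = pd k h1 x + pd k h2 x"
  by (rule pd_eq, rule DERIV_add) (auto intro: smooth_upto_deriv)

lemma pd_diff_upto: "smooth_upto U n h1 \<Longrightarrow> smooth_upto U m h2 \<Longrightarrow> x \<in> U \<Longrightarrow>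
   pd k (\<lambda>y. h1 y - h2 y) x = pd k h1 x - pd k h2 x"
  by (rule pd_eq, rule DERIV_diff) (auto intro: smooth_upto_deriv)

lemma pd_mult_upto: "smooth_upto U n h1 \<Longrightarrow> smooth_upto U m h2 \<Longrightarrow> x \<in> U \<Longrightarrow>
   pd k (\<lambda>y. h1 y * h2 y) x = pd k h1 x * h2 x + h1 x * pd k h2 x"
proof -
  assume a: "smooth_upto U n h1" "smooth_upto U m h2" "x \<in> U"
  have d1: "((\<lambda>t. h1 (x + t *\<^sub>R axis k 1)) has_real_derivative pd k h1 x) (at 0)"
    using a smooth_upto_deriv by blast
  have d2: "((\<lambda>t. h2 (x + t *\<^sub>R axis k 1)) has_real_derivative pd k h2 x) (at 0)"
    using a smooth_upto_deriv by blast
  show ?thesis using DERIV_mult[OF d1 d2] by (intro pd_eq) (simp add: mult.commute)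
qed

lemma pd_const: "pd k (\<lambda>y. c) x = 0"
  by (rule pd_eq) simp

lemma pd_cmult_upto: "smooth_upto U n h \<Longrightarrow> x \<in> U \<Longrightarrow> pd k (\<lambda>y. c * h y) x = c * pd k h x"
  by (rule pd_eq, rule DERIV_cmult) (auto intro: smooth_upto_deriv)

lemma pd_uminus_upto: "smooth_upto U n h \<Longrightarrow> x \<in> U \<Longrightarrow> pd k (\<lambda>y. - h y) x = - pd k h x"
  by (rule pd_eq, rule DERIV_minus) (auto intro: smooth_upto_deriv)

lemma pd_sum_upto: "finite S \<Longrightarrow> (\<And>i. i \<in> S \<Longrightarrow> smooth_upto U n (h i)) \<Longrightarrow> x \<in> U \<Longrightarrow>
   pd k (\<lambda>y. \<Sum>i\<in>S. h i y) x = (\<Sum>i\<in>S. pd k (h i) x)"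
  by (rule pd_eq, rule DERIV_sum) (auto intro: smooth_upto_deriv)

lemma pd_inverse_upto: "smooth_upto U n h \<Longrightarrow> x \<in> U \<Longrightarrow> h x \<noteq> 0 \<Longrightarrow>
   pd k (\<lambda>y. inverse (h y)) x = - (inverse (h x) * pd k h x * inverse (h x))"
proof -
  assume a: "smooth_upto U n h" "x \<in> U" "h x \<noteq> 0"
  have d1: "((\<lambda>t. h (x + t *\<^sub>R axis k 1)) has_real_derivative pd k h x) (at 0)"
    using a smooth_upto_deriv by blast
  show ?thesis using DERIV_inverse_fun[OF d1] a by (intro pd_eq) (simp add: power2_eq_square field_simps)
qed

(* C^0 functions (continuous with first partials) are closed under the
   algebraic operations; the C^n versions follow by induction on n. *)
lemma smooth0_intro:
  assumes "continuous_on U h"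
    "\<And>k x. x \<in> U \<Longrightarrow> ((\<lambda>t. h (x + t *\<^sub>R axis k 1)) has_real_derivative D k x) (at 0)"
  shows "smooth_upto U 0 h"
  unfolding smooth_upto_0 using assms pd_eq by metis

lemma smooth0_const: "smooth_upto U 0 (\<lambda>y. c)"
  by (rule smooth0_intro[where D="\<lambda>_ _. 0"]) auto

lemma smooth0_add: "smooth_upto U 0 h1 \<Longrightarrow> smooth_upto U 0 h2 \<Longrightarrow> smooth_upto U 0 (\<lambda>y. h1 y + h2 y)"
proof (rule smooth0_intro[where D="\<lambda>k x. pd k h1 x + pd k h2 x"])
  assume a: "smooth_upto U 0 h1" "smooth_upto U 0 h2"
  show "continuous_on U (\<lambda>y. h1 y + h2 y)" using a by (intro continuous_on_add smooth_upto_cont)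
  fix k x assume "x \<in> U"
  thus "((\<lambda>t. h1 (x + t *\<^sub>R axis k 1) + h2 (x + t *\<^sub>R axis k 1)) has_real_derivative pd k h1 x + pd k h2 x) (at 0)"
    using a by (intro DERIV_add smooth_upto_deriv)
qed

lemma smooth0_mult: "smooth_upto U 0 h1 \<Longrightarrow> smooth_upto U 0 h2 \<Longrightarrow> smooth_upto U 0 (\<lambda>y. h1 y * h2 y)"
proof (rule smooth0_intro[where D="\<lambda>k x. pd k h1 x * h2 x + pd k h2 x * h1 x"])
  assume a: "smooth_upto U 0 h1" "smooth_upto U 0 h2"
  show "continuous_on U (\<lambda>y. h1 y * h2 y)" using a by (intro continuous_on_mult smooth_upto_cont)
  fix k x assume "x \<in> U"
  thus "((\<lambda>t. h1 (x + t *\<^sub>R axis k 1) * h2 (x + t *\<^sub>R axis k 1)) has_real_derivative pd k h1 x * h2 x + pd k h2 x * h1 x) (at 0)"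
    using DERIV_mult[OF smooth_upto_deriv[OF a(1)] smooth_upto_deriv[OF a(2)]] by simp
qed

lemma smooth_upto_const: "smooth_upto U n (\<lambda>y. c)"
proof (induction n arbitrary: c)
  case 0 show ?case by (rule smooth0_const)
next
  case (Suc n)
  have "smooth_upto U n (pd k (\<lambda>y. c))" for k
    by (rule smooth_upto_cong[OF Suc.IH[of 0]]) (simp add: pd_const)
  thus ?case using smooth_upto_Suc smooth0_const by blast
qed

lemma smooth_upto_add: "smooth_upto U n h1 \<Longrightarrow> smooth_upto U n h2 \<Longrightarrow> smooth_upto U n (\<lambda>y. h1 y + h2 y)"
proof (induction n arbitrary: h1 h2)
  case 0 thus ?case by (rule smooth0_add)
next
  case (Suc n)
  have s0: "smooth_upto U 0 (\<lambda>y. h1 y + h2 y)"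
    using Suc.prems smooth_upto_Suc smooth0_add by blast
  have "smooth_upto U n (pd k (\<lambda>y. h1 y + h2 y))" for k
    by (rule smooth_upto_cong[OF Suc.IH[of "pd k h1" "pd k h2"]])
       (use Suc.prems smooth_upto_Suc in \<open>auto simp: pd_add_upto\<close>)
  thus ?case using smooth_upto_Suc s0 by blast
qed

lemma smooth_upto_mult: "smooth_upto U n h1 \<Longrightarrow> smooth_upto U n h2 \<Longrightarrow> smooth_upto U n (\<lambda>y. h1 y * h2 y)"
proof (induction n arbitrary: h1 h2)
  case 0 thus ?case by (rule smooth0_mult)
next
  case (Suc n)
  have s0: "smooth_upto U 0 (\<lambda>y. h1 y * h2 y)"
    using Suc.prems smooth_upto_Suc smooth0_mult by blast
  have "smooth_upto U n (pd k (\<lambda>y. h1 y * h2 y))" for k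
  proof -
    have a: "smooth_upto U n (pd k h1)" "smooth_upto U n (pd k h2)" "smooth_upto U n h1" "smooth_upto U n h2"
      using Suc.prems smooth_upto_Suc smooth_upto_Suc_mono by blast+
    show ?thesis
      by (rule smooth_upto_cong[OF smooth_upto_add[OF Suc.IH[OF a(1) a(4)] Suc.IH[OF a(3) a(2)]]])
         (use Suc.prems in \<open>auto simp: pd_mult_upto\<close>)
  qed
  thus ?case using smooth_upto_Suc s0 by blast
qed

lemma smooth_upto_uminus: "smooth_upto U n h \<Longrightarrow> smooth_upto U n (\<lambda>y. - h y)"
  using smooth_upto_mult[OF smooth_upto_const[of n "-1"]] by simp

lemma smooth_upto_diff: "smooth_upto U n h1 \<Longrightarrow> smooth_upto U n h2 \<Longrightarrow> smooth_upto U n (\<lambda>y. h1 y - h2 y)"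
  using smooth_upto_add[OF _ smooth_upto_uminus] by simp

lemma smooth_upto_sum: "finite S \<Longrightarrow> (\<And>i. i \<in> S \<Longrightarrow> smooth_upto U n (h i)) \<Longrightarrow> smooth_upto U n (\<lambda>y. \<Sum>i\<in>S. h i y)"
proof (induction S rule: finite_induct)
  case empty thus ?case using smooth_upto_const[of n 0] by simp
next
  case (insert a S) thus ?case using smooth_upto_add[of n "h a" "\<lambda>y. \<Sum>i\<in>S. h i y"] by simp
qed

lemma smooth_upto_prod: "finite S \<Longrightarrow> (\<And>i. i \<in> S \<Longrightarrow> smooth_upto U n (h i)) \<Longrightarrow> smooth_upto U n (\<lambda>y. \<Prod>i\<in>S. h i y)"
proof (induction S rule: finite_induct)
  case empty thus ?case using smooth_upto_const[of n 1] by simp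
next
  case (insert a S) thus ?case using smooth_upto_mult[of n "h a" "\<lambda>y. \<Prod>i\<in>S. h i y"] by simp
qed

lemma smooth0_inverse: "smooth_upto U 0 h \<Longrightarrow> (\<And>y. y \<in> U \<Longrightarrow> h y \<noteq> 0) \<Longrightarrow> smooth_upto U 0 (\<lambda>y. inverse (h y))"
proof (rule smooth0_intro[where D="\<lambda>k x. - (pd k h x * inverse (h x ^ Suc (Suc 0)))"])
  assume a: "smooth_upto U 0 h" "\<And>y. y \<in> U \<Longrightarrow> h y \<noteq> 0"
  show "continuous_on U (\<lambda>y. inverse (h y))" using a by (intro continuous_on_inverse smooth_upto_cont) auto
  fix k x assume x: "x \<in> U"
  thus "((\<lambda>t. inverse (h (x + t *\<^sub>R axis k 1))) has_real_derivative - (pd k h x * inverse (h x ^ Suc (Suc 0)))) (at 0)"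
    using DERIV_inverse_fun[OF smooth_upto_deriv[OF a(1) x]] a(2)[OF x] by simp
qed

lemma smooth_upto_inverse: "smooth_upto U n h \<Longrightarrow> (\<And>y. y \<in> U \<Longrightarrow> h y \<noteq> 0) \<Longrightarrow> smooth_upto U n (\<lambda>y. inverse (h y))"
proof (induction n arbitrary: h)
  case 0 thus ?case by (rule smooth0_inverse)
next
  case (Suc n)
  have s0: "smooth_upto U 0 (\<lambda>y. inverse (h y))"
    using Suc.prems smooth_upto_Suc smooth0_inverse by blast
  have "smooth_upto U n (pd k (\<lambda>y. inverse (h y)))" for k
  proof -
    have a: "smooth_upto U n (pd k h)" "smooth_upto U n h" using Suc.prems smooth_upto_Suc smooth_upto_Suc_mono by blast+
    have i: "smooth_upto U n (\<lambda>y. inverse (h y))" using Suc.IH[OF a(2)] Suc.prems by blast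
    show ?thesis
      by (rule smooth_upto_cong[OF smooth_upto_uminus[OF smooth_upto_mult[OF smooth_upto_mult[OF i a(1)] i]]])
         (use Suc.prems in \<open>auto simp: pd_inverse_upto\<close>)
  qed
  thus ?case using smooth_upto_Suc s0 by blast
qed

lemma smooth_upto_pd: "smooth_upto U (Suc n) h \<Longrightarrow> smooth_upto U n (pd k h)"
  using smooth_upto_Suc by blast

lemma smooth_const: "smooth (\<lambda>y. c)" by (simp add: smooth_iff_smooth_upto smooth_upto_const)
lemma smooth_add: "smooth h1 \<Longrightarrow> smooth h2 \<Longrightarrow> smooth (\<lambda>y. h1 y + h2 y)" by (simp add: smooth_iff_smooth_upto smooth_upto_add)
lemma smooth_diff: "smooth h1 \<Longrightarrow> smooth h2 \<Longrightarrow> smooth (\<lambda>y. h1 y - h2 y)" by (simp add: smooth_iff_smooth_upto smooth_upto_diff)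
lemma smooth_mult: "smooth h1 \<Longrightarrow> smooth h2 \<Longrightarrow> smooth (\<lambda>y. h1 y * h2 y)" by (simp add: smooth_iff_smooth_upto smooth_upto_mult)
lemma smooth_sum: "finite S \<Longrightarrow> (\<And>i. i \<in> S \<Longrightarrow> smooth (h i)) \<Longrightarrow> smooth (\<lambda>y. \<Sum>i\<in>S. h i y)"
  by (simp add: smooth_iff_smooth_upto smooth_upto_sum)
lemma smooth_prod: "finite S \<Longrightarrow> (\<And>i. i \<in> S \<Longrightarrow> smooth (h i)) \<Longrightarrow> smooth (\<lambda>y. \<Prod>i\<in>S. h i y)"
  by (simp add: smooth_iff_smooth_upto smooth_upto_prod)
lemma smooth_inverse: "smooth h \<Longrightarrow> (\<And>y. y \<in> U \<Longrightarrow> h y \<noteq> 0) \<Longrightarrow> smooth (\<lambda>y. inverse (h y))"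
  by (simp add: smooth_iff_smooth_upto smooth_upto_inverse)
lemma smooth_pd: "smooth h \<Longrightarrow> smooth (pd k h)" by (simp add: smooth_iff_smooth_upto smooth_upto_pd)
lemma smooth_cong: "smooth h1 \<Longrightarrow> (\<And>y. y \<in> U \<Longrightarrow> h1 y = h2 y) \<Longrightarrow> smooth h2"
  by (meson smooth_upto_cong smooth_iff_smooth_upto)
lemma smooth_UNIV_sum: "(\<And>i. smooth (h i)) \<Longrightarrow> smooth (\<lambda>y. \<Sum>i\<in>(UNIV::'b::finite set). h i y)"
  by (rule smooth_sum) auto

lemma pd_add: "smooth h1 \<Longrightarrow> smooth h2 \<Longrightarrow> x \<in> U \<Longrightarrow> pd k (\<lambda>y. h1 y + h2 y) x = pd k h1 x + pd k h2 x"
  using pd_add_upto smooth_smooth_upto by blast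
lemma pd_diff: "smooth h1 \<Longrightarrow> smooth h2 \<Longrightarrow> x \<in> U \<Longrightarrow> pd k (\<lambda>y. h1 y - h2 y) x = pd k h1 x - pd k h2 x"
  using pd_diff_upto smooth_smooth_upto by blast
lemma pd_mult: "smooth h1 \<Longrightarrow> smooth h2 \<Longrightarrow> x \<in> U \<Longrightarrow> pd k (\<lambda>y. h1 y * h2 y) x = pd k h1 x * h2 x + h1 x * pd k h2 x"
  using pd_mult_upto smooth_smooth_upto by blast
lemma pd_cmult: "smooth h \<Longrightarrow> x \<in> U \<Longrightarrow> pd k (\<lambda>y. c * h y) x = c * pd k h x"
  using pd_cmult_upto smooth_smooth_upto by blast
lemma pd_uminus: "smooth h \<Longrightarrow> x \<in> U \<Longrightarrow> pd k (\<lambda>y. - h y) x = - pd k h x"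
  using pd_uminus_upto smooth_smooth_upto by blast
lemma pd_sum: "(\<And>i. smooth (h i)) \<Longrightarrow> x \<in> U \<Longrightarrow> pd k (\<lambda>y. \<Sum>i\<in>(UNIV::'b::finite set). h i y) x = (\<Sum>i\<in>UNIV. pd k (h i) x)"
  by (rule pd_sum_upto[where n=0]) (auto intro: smooth_smooth_upto)

lemma coord_line_deriv: "((\<lambda>t. (x + t *\<^sub>R axis k (1::real)) $ p) has_real_derivative (if p = k then 1 else 0)) (at 0)"
proof -
  have "(\<lambda>t. (x + t *\<^sub>R axis k (1::real)) $ p) = (\<lambda>t. x $ p + t * (if p = k then 1 else 0))"
    by (auto simp: axis_def)
  moreover have "((\<lambda>t. x $ p + t * (if p = k then 1 else 0)) has_real_derivative (if p = k then 1 else 0)) (at 0)"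
    by (auto intro!: derivative_eq_intros)
  ultimately show ?thesis by simp
qed

lemma pd_coord: "pd k (\<lambda>y. y $ p) x = (if p = k then 1 else 0)"
  by (rule pd_eq) (rule coord_line_deriv)

lemma smooth_upto_coord: "smooth_upto U n (\<lambda>y. y $ p)"
proof (induction n)
  case 0
  show ?case
    by (rule smooth0_intro[where D="\<lambda>k x. if p = k then 1 else 0"], intro continuous_intros, rule coord_line_deriv)
next
  case (Suc n)
  have "smooth_upto U n (pd k (\<lambda>y. y $ p))" for k
    by (rule smooth_upto_cong[OF smooth_upto_const[of n "if p = k then 1 else 0"]]) (simp add: pd_coord)
  moreover have "smooth_upto U 0 (\<lambda>y. y $ p)" using Suc smooth_upto_mono by blast
  ultimately show ?case using smooth_upto_Suc by blast
qed

lemma smooth_coord: "smooth (\<lambda>y. y $ p)" by (simp add: smooth_iff_smooth_upto smooth_upto_coord)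

(* The mixed second difference of h over a small square
   equals s^2 times a mixed partial at an interior point (two applications of the
   mean-value theorem); continuity of both mixed partials then forces them to agree. *)
lemma line_deriv:
  assumes "smooth_upto U n h" "y0 + s0 *\<^sub>R axis i 1 \<in> U"
  shows "((\<lambda>s. h (y0 + s *\<^sub>R axis i 1)) has_real_derivative pd i h (y0 + s0 *\<^sub>R axis i 1)) (at s0)"
proof -
  have "((\<lambda>t. h ((y0 + s0 *\<^sub>R axis i 1) + t *\<^sub>R axis i 1)) has_real_derivative pd i h (y0 + s0 *\<^sub>R axis i 1)) (at 0)"
    using smooth_upto_deriv[OF assms] .
  hence "((\<lambda>t. h (y0 + (t + s0) *\<^sub>R axis i 1)) has_real_derivative pd i h (y0 + s0 *\<^sub>R axis i 1)) (at 0)"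
    by (simp add: scaleR_add_left algebra_simps)
  thus ?thesis using DERIV_shift[of "\<lambda>s. h (y0 + s *\<^sub>R axis i 1)" _ 0 s0] by simp
qed

lemma mixed_mvt:
  assumes h: "smooth_upto U 2 h" and s: "s > 0"
    and inU: "\<And>a b. 0 \<le> a \<Longrightarrow> a \<le> s \<Longrightarrow> 0 \<le> b \<Longrightarrow> b \<le> s \<Longrightarrow> x + a *\<^sub>R axis i 1 + b *\<^sub>R axis j 1 \<in> U"
  shows "\<exists>a b. 0 < a \<and> a < s \<and> 0 < b \<and> b < s \<and>
     h (x + s *\<^sub>R axis i 1 + s *\<^sub>R axis j 1) - h (x + s *\<^sub>R axis i 1) - h (x + s *\<^sub>R axis j 1) + h x
       = s * s * pd j (pd i h) (x + a *\<^sub>R axis i 1 + b *\<^sub>R axis j 1)"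
proof -
  have h1: "smooth_upto U 1 (pd i h)" using h smooth_upto_Suc[of U 1 h] by (simp add: numeral_2_eq_2)
  define \<psi> where "\<psi> a = h (x + s *\<^sub>R axis j 1 + a *\<^sub>R axis i 1) - h (x + a *\<^sub>R axis i 1)" for a
  have "\<exists>a. 0 < a \<and> a < s \<and> \<psi> s - \<psi> 0 = (s - 0) *
      (pd i h (x + s *\<^sub>R axis j 1 + a *\<^sub>R axis i 1) - pd i h (x + a *\<^sub>R axis i 1))"
    unfolding \<psi>_def
  proof (rule MVT2[OF s])
    fix a assume a: "0 \<le> a" "a \<le> s"
    have u1: "x + s *\<^sub>R axis j 1 + a *\<^sub>R axis i 1 \<in> U" using inU[of a s] a s
      by (simp add: algebra_simps)
    have u2: "x + a *\<^sub>R axis i 1 \<in> U" using inU[of a 0] a s by simp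
    show "((\<lambda>a. h (x + s *\<^sub>R axis j 1 + a *\<^sub>R axis i 1) - h (x + a *\<^sub>R axis i 1)) has_real_derivative
      pd i h (x + s *\<^sub>R axis j 1 + a *\<^sub>R axis i 1) - pd i h (x + a *\<^sub>R axis i 1)) (at a)"
      by (intro DERIV_diff line_deriv[OF h] u1 u2)
  qed
  then obtain a where a: "0 < a" "a < s" and
    e1: "\<psi> s - \<psi> 0 = s * (pd i h (x + a *\<^sub>R axis i 1 + s *\<^sub>R axis j 1) - pd i h (x + a *\<^sub>R axis i 1 + 0 *\<^sub>R axis j 1))"
    by (auto simp: algebra_simps)
  have "\<exists>b. 0 < b \<and> b < s \<and> pd i h (x + a *\<^sub>R axis i 1 + s *\<^sub>R axis j 1) - pd i h (x + a *\<^sub>R axis i 1 + 0 *\<^sub>R axis j 1)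
     = (s - 0) * pd j (pd i h) (x + a *\<^sub>R axis i 1 + b *\<^sub>R axis j 1)"
  proof (rule MVT2[OF s])
    fix b assume b: "0 \<le> b" "b \<le> s"
    show "((\<lambda>b. pd i h (x + a *\<^sub>R axis i 1 + b *\<^sub>R axis j 1)) has_real_derivative
       pd j (pd i h) (x + a *\<^sub>R axis i 1 + b *\<^sub>R axis j 1)) (at b)"
      by (rule line_deriv[OF h1]) (use inU a b in auto)
  qed
  then obtain b where b: "0 < b" "b < s" and
    e2: "pd i h (x + a *\<^sub>R axis i 1 + s *\<^sub>R axis j 1) - pd i h (x + a *\<^sub>R axis i 1 + 0 *\<^sub>R axis j 1)
     = s * pd j (pd i h) (x + a *\<^sub>R axis i 1 + b *\<^sub>R axis j 1)" by auto
  have "h (x + s *\<^sub>R axis i 1 + s *\<^sub>R axis j 1) - h (x + s *\<^sub>R axis i 1) - h (x + s *\<^sub>R axis j 1) + h x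
     = \<psi> s - \<psi> 0" unfolding \<psi>_def by (simp add: algebra_simps)
  also have "\<dots> = s * s * pd j (pd i h) (x + a *\<^sub>R axis i 1 + b *\<^sub>R axis j 1)"
    using e1 e2 by simp
  finally show ?thesis using a b by blast
qed

lemma small_squares:
  assumes x: "x \<in> U" and d: "d > 0"
  obtains s where "s > 0"
    and "\<And>a b p q. 0 \<le> a \<Longrightarrow> a \<le> s \<Longrightarrow> 0 \<le> b \<Longrightarrow> b \<le> s \<Longrightarrow>
           x + a *\<^sub>R axis p 1 + b *\<^sub>R axis q 1 \<in> U \<and> dist (x + a *\<^sub>R axis p 1 + b *\<^sub>R axis q 1) x < d"
proof -
  obtain e where e: "e > 0" "ball x e \<subseteq> U" using open_U x open_contains_ball by blast
  define s where "s = min e d / 4"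
  have s: "s > 0" using e d by (simp add: s_def)
  have near: "dist (x + a *\<^sub>R axis p 1 + b *\<^sub>R axis q 1) x < min e d"
    if "0 \<le> a" "a \<le> s" "0 \<le> b" "b \<le> s" for a b p q
  proof -
    have "dist (x + a *\<^sub>R axis p 1 + b *\<^sub>R axis q 1) x = norm (a *\<^sub>R axis p (1::real) + b *\<^sub>R axis q 1)"
      by (simp add: dist_norm)
    also have "\<dots> \<le> norm (a *\<^sub>R axis p (1::real)) + norm (b *\<^sub>R axis q (1::real))" by (rule norm_triangle_ineq)
    also have "\<dots> = a + b" using that by simp
    also have "\<dots> < min e d" using that s by (simp add: s_def)
    finally show ?thesis .
  qed
  show ?thesis
  proof (rule that[OF s], intro conjI)
    fix a b :: real and p q
    assume "0 \<le> a" "a \<le> s" "0 \<le> b" "b \<le> s"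
    then have "dist (x + a *\<^sub>R axis p 1 + b *\<^sub>R axis q 1) x < min e d" by (rule near)
    then show "x + a *\<^sub>R axis p 1 + b *\<^sub>R axis q 1 \<in> U" "dist (x + a *\<^sub>R axis p 1 + b *\<^sub>R axis q 1) x < d"
      using e by (auto simp: dist_commute)
  qed
qed

lemma pd_commute_upto:
  assumes h: "smooth_upto U 2 h" and x: "x \<in> U"
  shows "pd i (pd j h) x = pd j (pd i h) x"
proof (rule ccontr)
  assume ne: "pd i (pd j h) x \<noteq> pd j (pd i h) x"
  define A where "A = pd j (pd i h)"
  define B where "B = pd i (pd j h)"
  define \<epsilon> where "\<epsilon> = \<bar>A x - B x\<bar> / 2"
  have ep: "\<epsilon> > 0" using ne unfolding \<epsilon>_def A_def B_def by simp
  have cA: "continuous_on U A" unfolding A_def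
    using h smooth_upto_Suc[of U 1 h] smooth_upto_Suc[of U 0 "pd i h"] smooth_upto_0 by (simp add: numeral_2_eq_2) blast
  have cB: "continuous_on U B" unfolding B_def
    using h smooth_upto_Suc[of U 1 h] smooth_upto_Suc[of U 0 "pd j h"] smooth_upto_0 by (simp add: numeral_2_eq_2) blast
  have "continuous (at x) A" using cA x open_U continuous_on_eq_continuous_at by blast
  then obtain dA where dA: "dA > 0" "\<And>y. dist y x < dA \<Longrightarrow> dist (A y) (A x) < \<epsilon>"
    using ep unfolding continuous_at_eps_delta by blast
  have "continuous (at x) B" using cB x open_U continuous_on_eq_continuous_at by blast
  then obtain dB where dB: "dB > 0" "\<And>y. dist y x < dB \<Longrightarrow> dist (B y) (B x) < \<epsilon>"
    using ep unfolding continuous_at_eps_delta by blast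
  obtain s where s: "s > 0" and sq: "\<And>a b p q. 0 \<le> a \<Longrightarrow> a \<le> s \<Longrightarrow> 0 \<le> b \<Longrightarrow> b \<le> s \<Longrightarrow>
      x + a *\<^sub>R axis p 1 + b *\<^sub>R axis q 1 \<in> U \<and> dist (x + a *\<^sub>R axis p 1 + b *\<^sub>R axis q 1) x < min dA dB"
    using small_squares[OF x, of "min dA dB"] dA dB by auto
  obtain a b where ab: "0 < a" "a < s" "0 < b" "b < s" and
    E1: "h (x + s *\<^sub>R axis i 1 + s *\<^sub>R axis j 1) - h (x + s *\<^sub>R axis i 1) - h (x + s *\<^sub>R axis j 1) + h x
       = s * s * A (x + a *\<^sub>R axis i 1 + b *\<^sub>R axis j 1)"
    using mixed_mvt[OF h s, where x=x and i=i and j=j] sq unfolding A_def by blast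
  obtain a' b' where ab': "0 < a'" "a' < s" "0 < b'" "b' < s" and
    E2: "h (x + s *\<^sub>R axis j 1 + s *\<^sub>R axis i 1) - h (x + s *\<^sub>R axis j 1) - h (x + s *\<^sub>R axis i 1) + h x
       = s * s * B (x + a' *\<^sub>R axis j 1 + b' *\<^sub>R axis i 1)"
    using mixed_mvt[OF h s, where x=x and i=j and j=i] sq unfolding B_def by blast
  have "A (x + a *\<^sub>R axis i 1 + b *\<^sub>R axis j 1) = B (x + a' *\<^sub>R axis j 1 + b' *\<^sub>R axis i 1)"
    using E1 E2 s by (simp add: algebra_simps)
  moreover have "dist (A (x + a *\<^sub>R axis i 1 + b *\<^sub>R axis j 1)) (A x) < \<epsilon>"
    using dA(2) sq[of a b i j] ab by force
  moreover have "dist (B (x + a' *\<^sub>R axis j 1 + b' *\<^sub>R axis i 1)) (B x) < \<epsilon>"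
    using dB(2) sq[of a' b' j i] ab' by force
  ultimately have "\<bar>A x - B x\<bar> < 2 * \<epsilon>" by (simp add: dist_real_def)
  thus False unfolding \<epsilon>_def by simp
qed

lemma pd_commute: "smooth h \<Longrightarrow> x \<in> U \<Longrightarrow> pd i (pd j h) x = pd j (pd i h) x"
  using pd_commute_upto smooth_smooth_upto by blast

end

lemma delta_sum_l[simp]: "(\<Sum>b\<in>(UNIV::'a::finite set). (if a = b then 1 else 0) * (X b::real)) = X a"
  by (simp add: mult.commute[of "X _"] of_bool_def[symmetric])
lemma delta_sum_r[simp]: "(\<Sum>b\<in>(UNIV::'a::finite set). (X b::real) * (if b = a then 1 else 0)) = X a"
  by (simp add: mult.commute[of "X _"] of_bool_def[symmetric])
lemma delta_sum_l'[simp]: "(\<Sum>b\<in>(UNIV::'a::finite set). (if b = a then 1 else 0) * (X b::real)) = X a"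
  by (simp add: mult.commute[of "X _"] of_bool_def[symmetric])
lemma delta_sum_r'[simp]: "(\<Sum>b\<in>(UNIV::'a::finite set). (X b::real) * (if a = b then 1 else 0)) = X a"
  by (simp add: mult.commute[of "X _"] of_bool_def[symmetric])

lemma sum_swap23: "(\<Sum>a\<in>A. \<Sum>b\<in>B. \<Sum>c\<in>C. F a b c) = (\<Sum>a\<in>A. \<Sum>c\<in>C. \<Sum>b\<in>B. F a b c)"
  by (rule sum.cong[OF refl], rule sum.swap)
lemma sum_swap12: "(\<Sum>a\<in>A. \<Sum>b\<in>B. \<Sum>c\<in>C. F a b c) = (\<Sum>b\<in>B. \<Sum>a\<in>A. \<Sum>c\<in>C. F a b c)"
  using sum.swap[of "\<lambda>a b. \<Sum>c\<in>C. F a b c" B A] by simp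
lemma sum_rot3: "(\<Sum>a\<in>A. \<Sum>b\<in>B. \<Sum>c\<in>C. F a b c) = (\<Sum>b\<in>B. \<Sum>c\<in>C. \<Sum>a\<in>A. F a b c)"
proof -
  have "(\<Sum>a\<in>A. \<Sum>b\<in>B. \<Sum>c\<in>C. F a b c) = (\<Sum>b\<in>B. \<Sum>a\<in>A. \<Sum>c\<in>C. F a b c)" by (rule sum_swap12)
  also have "\<dots> = (\<Sum>b\<in>B. \<Sum>c\<in>C. \<Sum>a\<in>A. F a b c)" by (rule sum_swap23)
  finally show ?thesis .
qed
lemma sum_rot3': "(\<Sum>a\<in>A. \<Sum>b\<in>B. \<Sum>c\<in>C. F a b c) = (\<Sum>c\<in>C. \<Sum>a\<in>A. \<Sum>b\<in>B. F a b c)"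
proof -
  have "(\<Sum>a\<in>A. \<Sum>b\<in>B. \<Sum>c\<in>C. F a b c) = (\<Sum>a\<in>A. \<Sum>c\<in>C. \<Sum>b\<in>B. F a b c)" by (rule sum_swap23)
  also have "\<dots> = (\<Sum>c\<in>C. \<Sum>a\<in>A. \<Sum>b\<in>B. F a b c)" by (rule sum_swap12)
  finally show ?thesis .
qed
lemma sum_rev3: "(\<Sum>a\<in>A. \<Sum>b\<in>B. \<Sum>c\<in>C. F a b c) = (\<Sum>c\<in>C. \<Sum>b\<in>B. \<Sum>a\<in>A. F a b c)"
proof -
  have "(\<Sum>a\<in>A. \<Sum>b\<in>B. \<Sum>c\<in>C. F a b c) = (\<Sum>c\<in>C. \<Sum>a\<in>A. \<Sum>b\<in>B. F a b c)" by (rule sum_rot3')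
  also have "\<dots> = (\<Sum>c\<in>C. \<Sum>b\<in>B. \<Sum>a\<in>A. F a b c)" by (rule sum.cong[OF refl], rule sum.swap)
  finally show ?thesis .
qed

lemma sum_swap_pairs: "(\<Sum>k\<in>A. \<Sum>l\<in>B. \<Sum>a\<in>C. \<Sum>b\<in>D. F k l a b) = (\<Sum>a\<in>C. \<Sum>b\<in>D. \<Sum>k\<in>A. \<Sum>l\<in>B. F k l a b)"
proof -
  have "(\<Sum>k\<in>A. \<Sum>l\<in>B. \<Sum>a\<in>C. \<Sum>b\<in>D. F k l a b) = (\<Sum>k\<in>A. \<Sum>a\<in>C. \<Sum>b\<in>D. \<Sum>l\<in>B. F k l a b)"
    by (rule sum.cong[OF refl], rule sum_rot3)
  also have "\<dots> = (\<Sum>a\<in>C. \<Sum>b\<in>D. \<Sum>k\<in>A. \<Sum>l\<in>B. F k l a b)"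
    by (rule sum_rot3)
  finally show ?thesis .
qed

lemma invertible_matrix_inv: "invertible (A::real^'n^'n) \<Longrightarrow> A ** matrix_inv A = mat 1 \<and> matrix_inv A ** A = mat 1"
  unfolding matrix_inv_def invertible_def by (rule someI_ex)

lemma det_leibniz: "det (A::real^'n::finite^'n) =
   (\<Sum>p\<in>{p. p permutes (UNIV::'n set)}. of_int (sign p) * (\<Prod>i\<in>UNIV. A$i$p i))"
  by (simp add: det_def)

locale riemannian_chart = open_domain U for U :: "(real^'n::finite) set" +
  fixes g :: "'n \<Rightarrow> 'n \<Rightarrow> real^'n \<Rightarrow> real"
  assumes metric: "riemannian_metric_on U g"
begin

lemma g_smooth: "smooth (g i j)" using metric unfolding riemannian_metric_on_def by blast
lemma g_sym: "y \<in> U \<Longrightarrow> g i j y = g j i y" using metric unfolding riemannian_metric_on_def by blast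
lemma g_pos: "y \<in> U \<Longrightarrow> v \<noteq> 0 \<Longrightarrow> (\<Sum>i\<in>UNIV. \<Sum>j\<in>UNIV. v$i * g i j y * v$j) > 0"
  using metric unfolding riemannian_metric_on_def by blast

(* The matrix (g_ij) at a point; positive definiteness makes it invertible and
   g^{ij} is its inverse. *)
definition metric_matrix :: "real^'n \<Rightarrow> real^'n^'n" where "metric_matrix y = (\<chi> a b. g a b y)"

lemma metric_matrix_inj: assumes y: "y \<in> U" shows "inj ((*v) (metric_matrix y))"
proof (rule injI)
  fix u w assume e: "metric_matrix y *v u = metric_matrix y *v w"
  show "u = w"
  proof (rule ccontr)
    assume "u \<noteq> w"
    hence v0: "u - w \<noteq> 0" by simp
    have z: "metric_matrix y *v (u - w) = 0" using e by (simp add: matrix_vector_mult_diff_distrib)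
    have "(\<Sum>i\<in>UNIV. \<Sum>j\<in>UNIV. (u-w)$i * g i j y * (u-w)$j) = (\<Sum>i\<in>UNIV. (u-w)$i * (metric_matrix y *v (u - w))$i)"
      by (simp add: matrix_vector_mult_def metric_matrix_def sum_distrib_left mult.assoc)
    also have "\<dots> = 0" using z by simp
    finally show False using g_pos[OF y v0] by simp
  qed
qed

lemma metric_matrix_det: "y \<in> U \<Longrightarrow> det (metric_matrix y) \<noteq> 0"
  using det_nz_iff_inj[OF matrix_vector_mul_linear, of "metric_matrix y"] metric_matrix_inj
  by (simp add: matrix_of_matrix_vector_mul)

lemma metric_matrix_inv: "y \<in> U \<Longrightarrow> metric_matrix y ** matrix_inv (metric_matrix y) = mat 1 \<and> matrix_inv (metric_matrix y) ** metric_matrix y = mat 1"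
  using metric_matrix_det invertible_det_nz invertible_matrix_inv by blast

lemma ginv_metric_matrix: "ginv g i j y = matrix_inv (metric_matrix y) $ i $ j"
  by (simp add: ginv_def metric_matrix_def)

lemma g_ginv: "y \<in> U \<Longrightarrow> (\<Sum>b\<in>UNIV. g a b y * ginv g b c y) = (if a = c then 1 else 0)"
proof -
  assume y: "y \<in> U"
  have "(metric_matrix y ** matrix_inv (metric_matrix y)) $ a $ c = (mat 1 :: real^'n^'n) $ a $ c" using metric_matrix_inv[OF y] by simp
  thus ?thesis by (simp add: matrix_matrix_mult_def metric_matrix_def ginv_metric_matrix mat_def)
qed

lemma ginv_g: "y \<in> U \<Longrightarrow> (\<Sum>b\<in>UNIV. ginv g a b y * g b c y) = (if a = c then 1 else 0)"
proof -
  assume y: "y \<in> U"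
  have "(matrix_inv (metric_matrix y) ** metric_matrix y) $ a $ c = (mat 1 :: real^'n^'n) $ a $ c" using metric_matrix_inv[OF y] by simp
  thus ?thesis by (simp add: matrix_matrix_mult_def metric_matrix_def ginv_metric_matrix mat_def)
qed

lemma ginv_sym: assumes y: "y \<in> U" shows "ginv g i j y = ginv g j i y"
proof -
  have "ginv g i j y = (\<Sum>b\<in>UNIV. (if i = b then 1 else 0) * ginv g b j y)" by simp
  also have "\<dots> = (\<Sum>b\<in>UNIV. (\<Sum>c\<in>UNIV. ginv g c i y * g c b y) * ginv g b j y)"
  proof (rule sum.cong[OF refl])
    fix b
    have "(\<Sum>c\<in>UNIV. ginv g c i y * g c b y) = (\<Sum>c\<in>UNIV. g b c y * ginv g c i y)"
      by (rule sum.cong) (auto simp: g_sym[OF y] mult.commute)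
    also have "\<dots> = (if i = b then 1 else 0)" using g_ginv[OF y] by simp
    finally show "(if i = b then 1 else 0) * ginv g b j y = (\<Sum>c\<in>UNIV. ginv g c i y * g c b y) * ginv g b j y" by simp
  qed
  also have "\<dots> = (\<Sum>b\<in>UNIV. \<Sum>c\<in>UNIV. ginv g c i y * g c b y * ginv g b j y)"
    by (simp add: sum_distrib_right)
  also have "\<dots> = (\<Sum>c\<in>UNIV. \<Sum>b\<in>UNIV. ginv g c i y * g c b y * ginv g b j y)"
    by (rule sum.swap)
  also have "\<dots> = (\<Sum>c\<in>UNIV. ginv g c i y * (\<Sum>b\<in>UNIV. g c b y * ginv g b j y))"
    by (simp add: sum_distrib_left mult.assoc)
  also have "\<dots> = ginv g j i y" using g_ginv[OF y] by simp
  finally show ?thesis .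
qed

(* By Cramer's rule g^{ij} is a quotient of polynomials in the g_ij with
   nonvanishing denominator, hence smooth. *)
lemma smooth_if: "smooth h1 \<Longrightarrow> smooth h2 \<Longrightarrow> smooth (\<lambda>y. if P then h1 y else h2 y)"
  by (cases P) auto

lemma smooth_det: "(\<And>i j. smooth (\<lambda>y. A y $ i $ j)) \<Longrightarrow> smooth (\<lambda>y. det (A y :: real^'n^'n))"
  unfolding det_leibniz
  by (intro smooth_sum smooth_mult smooth_const smooth_prod) auto

lemma ginv_cramer: assumes y: "y \<in> U"
  shows "ginv g k j y = det (\<chi> i l. if l = k then (if i = j then 1 else 0) else g i l y) / det (metric_matrix y)"
proof -
  let ?M = "metric_matrix y" and ?c = "\<chi> k. matrix_inv (metric_matrix y) $ k $ j" and ?b = "axis j (1::real)"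
  have "?M *v ?c = ?b"
  proof -
    have "(?M ** matrix_inv ?M) $ i $ j = (mat 1 :: real^'n^'n) $ i $ j" for i using metric_matrix_inv[OF y] by simp
    thus ?thesis by (simp add: vec_eq_iff matrix_vector_mult_def matrix_matrix_mult_def mat_def axis_def)
  qed
  hence "?c = (\<chi> k. det(\<chi> i l. if l = k then ?b$i else ?M$i$l) / det ?M)"
    using cramer[OF metric_matrix_det[OF y]] by blast
  hence "?c $ k = det(\<chi> i l. if l = k then ?b$i else ?M$i$l) / det ?M" by simp
  moreover have "(\<chi> i l. if l = k then ?b$i else ?M$i$l) = (\<chi> i l. if l = k then (if i = j then 1 else 0) else g i l y)"
    by (simp add: vec_eq_iff axis_def metric_matrix_def)
  ultimately show ?thesis by (simp add: ginv_metric_matrix)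
qed

lemma ginv_smooth: "smooth (ginv g k j)"
proof (rule smooth_cong)
  show "smooth (\<lambda>y. det (\<chi> i l. if l = k then (if i = j then 1 else 0) else g i l y) * inverse (det (metric_matrix y)))"
    by (intro smooth_mult smooth_det smooth_inverse) (auto simp: g_smooth smooth_const metric_matrix_det intro!: smooth_if, simp add: metric_matrix_def g_smooth)
  show "y \<in> U \<Longrightarrow> det (\<chi> i l. if l = k then (if i = j then 1 else 0) else g i l y) * inverse (det (metric_matrix y)) = ginv g k j y" for y
    by (simp add: ginv_cramer divide_inverse)
qed

abbreviation "\<Gamma> \<equiv> christoffel g"
abbreviation "gi \<equiv> ginv g"

lemma pd_g_sym: "y \<in> U \<Longrightarrow> pd k (g i j) y = pd k (g j i) y"
  by (rule pd_cong) (auto simp: g_sym)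

lemma christoffel_sym: "y \<in> U \<Longrightarrow> \<Gamma> k i j y = \<Gamma> k j i y"
  unfolding christoffel_def by (simp add: pd_g_sym[of y _ i j] add.commute)

lemma christoffel_smooth: "smooth (\<Gamma> k i j)"
  unfolding christoffel_def
  by (intro smooth_mult smooth_const smooth_UNIV_sum smooth_add smooth_diff ginv_smooth smooth_pd g_smooth)

lemma christoffel_lowered: assumes y: "y \<in> U"
  shows "(\<Sum>m\<in>UNIV. \<Gamma> m k i y * g m j y) = (pd k (g i j) y + pd i (g k j) y - pd j (g k i) y) / 2"
proof -
  let ?A = "\<lambda>l. pd k (g i l) y + pd i (g k l) y - pd l (g k i) y"
  have "(\<Sum>m\<in>UNIV. \<Gamma> m k i y * g m j y) = (\<Sum>m\<in>UNIV. \<Sum>l\<in>UNIV. (1/2) * (gi m l y * ?A l) * g m j y)"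
    unfolding christoffel_def by (simp add: sum_distrib_left sum_distrib_right mult.assoc)
  also have "\<dots> = (\<Sum>l\<in>UNIV. \<Sum>m\<in>UNIV. (1/2) * (gi m l y * ?A l) * g m j y)" by (rule sum.swap)
  also have "\<dots> = (\<Sum>l\<in>UNIV. (1/2) * ?A l * (\<Sum>m\<in>UNIV. gi l m y * g m j y))"
  proof (rule sum.cong[OF refl])
    fix l
    have "(\<Sum>m\<in>UNIV. (1/2) * (gi m l y * ?A l) * g m j y) = (\<Sum>m\<in>UNIV. (1/2) * ?A l * (gi l m y * g m j y))"
      by (rule sum.cong) (auto simp: ginv_sym[OF y, of m l for m])
    thus "(\<Sum>m\<in>UNIV. (1/2) * (gi m l y * ?A l) * g m j y) = (1/2) * ?A l * (\<Sum>m\<in>UNIV. gi l m y * g m j y)"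
      by (simp add: sum_distrib_left)
  qed
  also have "\<dots> = (1/2) * ?A j" by (simp only: ginv_g[OF y] delta_sum_r)
  finally show ?thesis by simp
qed

lemma metric_compatible: assumes y: "y \<in> U"
  shows "pd k (g i j) y = (\<Sum>m\<in>UNIV. \<Gamma> m k i y * g m j y) + (\<Sum>m\<in>UNIV. \<Gamma> m k j y * g i m y)"
proof -
  have "(\<Sum>m\<in>UNIV. \<Gamma> m k j y * g i m y) = (\<Sum>m\<in>UNIV. \<Gamma> m k j y * g m i y)"
    by (rule sum.cong) (auto simp: g_sym[OF y])
  thus ?thesis using christoffel_lowered[OF y, of k i j] christoffel_lowered[OF y, of k j i]
    by (simp add: pd_g_sym[OF y, of _ k i] pd_g_sym[OF y, of _ i j] pd_g_sym[OF y, of _ j k] field_simps)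
qed

lemma pd_ginv_matrix: assumes y: "y \<in> U"
  shows "pd k (gi i j) y = - (\<Sum>a\<in>UNIV. \<Sum>b\<in>UNIV. gi i a y * pd k (g a b) y * gi b j y)"
proof -
  have z: "(\<Sum>b\<in>UNIV. pd k (g a b) y * gi b c y) + (\<Sum>b\<in>UNIV. g a b y * pd k (gi b c) y) = 0" for a c
  proof -
    have "pd k (\<lambda>z. \<Sum>b\<in>UNIV. g a b z * gi b c z) y = pd k (\<lambda>z. if a = c then 1 else 0) y"
      by (rule pd_cong) (auto simp: g_ginv y)
    also have "\<dots> = 0" by (rule pd_const)
    finally show ?thesis
      by (simp add: pd_sum pd_mult smooth_mult g_smooth ginv_smooth y sum.distrib)
  qed
  have "pd k (gi i j) y = (\<Sum>a\<in>UNIV. (if i = a then 1 else 0) * pd k (gi a j) y)" by simp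
  also have "\<dots> = (\<Sum>a\<in>UNIV. (\<Sum>c\<in>UNIV. gi i c y * g c a y) * pd k (gi a j) y)"
    by (simp add: ginv_g[OF y])
  also have "\<dots> = (\<Sum>a\<in>UNIV. \<Sum>c\<in>UNIV. gi i c y * g c a y * pd k (gi a j) y)"
    by (simp add: sum_distrib_right)
  also have "\<dots> = (\<Sum>c\<in>UNIV. \<Sum>a\<in>UNIV. gi i c y * g c a y * pd k (gi a j) y)"
    by (rule sum.swap)
  also have "\<dots> = (\<Sum>c\<in>UNIV. gi i c y * (\<Sum>a\<in>UNIV. g c a y * pd k (gi a j) y))"
    by (simp add: sum_distrib_left mult.assoc)
  also have "\<dots> = (\<Sum>c\<in>UNIV. gi i c y * (- (\<Sum>b\<in>UNIV. pd k (g c b) y * gi b j y)))"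
  proof (rule sum.cong[OF refl])
    fix c
    have "(\<Sum>a\<in>UNIV. g c a y * pd k (gi a j) y) = - (\<Sum>b\<in>UNIV. pd k (g c b) y * gi b j y)"
      using z[of c j] by linarith
    thus "gi i c y * (\<Sum>a\<in>UNIV. g c a y * pd k (gi a j) y) = gi i c y * (- (\<Sum>b\<in>UNIV. pd k (g c b) y * gi b j y))"
      by simp
  qed
  also have "\<dots> = - (\<Sum>a\<in>UNIV. \<Sum>b\<in>UNIV. gi i a y * pd k (g a b) y * gi b j y)"
    by (simp add: sum_distrib_left sum_negf mult.assoc)
  finally show ?thesis .
qed

end

(* Covariant derivatives of covectors, 2-tensors and 3-tensors, in components:
   nabla1 g w k a = (nabla_k w)_a, and similarly for nabla2, nabla3. *)
definition nabla1 :: "('n::finite \<Rightarrow> 'n \<Rightarrow> real^'n \<Rightarrow> real) \<Rightarrow> ('n \<Rightarrow> real^'n \<Rightarrow> real) \<Rightarrow> 'n \<Rightarrow> 'n \<Rightarrow> real^'n \<Rightarrow> real" where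
  "nabla1 g w k a = (\<lambda>y. pd k (w a) y - (\<Sum>m\<in>UNIV. christoffel g m k a y * w m y))"

definition nabla2 :: "('n::finite \<Rightarrow> 'n \<Rightarrow> real^'n \<Rightarrow> real) \<Rightarrow> ('n \<Rightarrow> 'n \<Rightarrow> real^'n \<Rightarrow> real) \<Rightarrow> 'n \<Rightarrow> 'n \<Rightarrow> 'n \<Rightarrow> real^'n \<Rightarrow> real" where
  "nabla2 g T k a b = (\<lambda>y. pd k (T a b) y - (\<Sum>m\<in>UNIV. christoffel g m k a y * T m b y)
                     - (\<Sum>m\<in>UNIV. christoffel g m k b y * T a m y))"

definition nabla3 :: "('n::finite \<Rightarrow> 'n \<Rightarrow> real^'n \<Rightarrow> real) \<Rightarrow> ('n \<Rightarrow> 'n \<Rightarrow> 'n \<Rightarrow> real^'n \<Rightarrow> real) \<Rightarrow> 'n \<Rightarrow> 'n \<Rightarrow> 'n \<Rightarrow> 'n \<Rightarrow> real^'n \<Rightarrow> real" where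
  "nabla3 g S k a b c = (\<lambda>y. pd k (S a b c) y - (\<Sum>m\<in>UNIV. christoffel g m k a y * S m b c y)
                     - (\<Sum>m\<in>UNIV. christoffel g m k b y * S a m c y) - (\<Sum>m\<in>UNIV. christoffel g m k c y * S a b m y))"

context riemannian_chart begin

lemma pd_ginv: assumes y: "y \<in> U"
  shows "pd k (gi i j) y = - (\<Sum>m\<in>UNIV. \<Gamma> i k m y * gi m j y) - (\<Sum>m\<in>UNIV. \<Gamma> j k m y * gi i m y)"
proof -
  have "(\<Sum>a\<in>UNIV. \<Sum>b\<in>UNIV. gi i a y * pd k (g a b) y * gi b j y)
     = (\<Sum>a\<in>UNIV. \<Sum>b\<in>UNIV. \<Sum>m\<in>UNIV. gi i a y * (\<Gamma> m k a y * g m b y) * gi b j y)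
     + (\<Sum>a\<in>UNIV. \<Sum>b\<in>UNIV. \<Sum>m\<in>UNIV. gi i a y * (\<Gamma> m k b y * g a m y) * gi b j y)"
    by (simp add: metric_compatible[OF y] sum_distrib_left sum_distrib_right distrib_left distrib_right sum.distrib)
  also have "(\<Sum>a\<in>UNIV. \<Sum>b\<in>UNIV. \<Sum>m\<in>UNIV. gi i a y * (\<Gamma> m k a y * g m b y) * gi b j y)
      = (\<Sum>a\<in>UNIV. \<Sum>m\<in>UNIV. gi i a y * \<Gamma> m k a y * (\<Sum>b\<in>UNIV. g m b y * gi b j y))"
    by (subst sum.swap) (simp add: sum_distrib_left mult_ac)
  also have "\<dots> = (\<Sum>a\<in>UNIV. gi i a y * \<Gamma> j k a y)"
    by (simp only: g_ginv[OF y] delta_sum_r delta_sum_r')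
  also have "(\<Sum>a\<in>UNIV. \<Sum>b\<in>UNIV. \<Sum>m\<in>UNIV. gi i a y * (\<Gamma> m k b y * g a m y) * gi b j y)
      = (\<Sum>b\<in>UNIV. \<Sum>a\<in>UNIV. \<Sum>m\<in>UNIV. gi i a y * (\<Gamma> m k b y * g a m y) * gi b j y)"
    by (rule sum.swap)
  also have "\<dots> = (\<Sum>b\<in>UNIV. \<Sum>m\<in>UNIV. (\<Sum>a\<in>UNIV. gi i a y * g a m y) * \<Gamma> m k b y * gi b j y)"
    by (rule sum.cong[OF refl], subst sum.swap, simp add: sum_distrib_right sum_distrib_left mult_ac)
  also have "\<dots> = (\<Sum>b\<in>UNIV. \<Gamma> i k b y * gi b j y)"
    by (simp add: ginv_g[OF y] mult.assoc)
  finally have e: "(\<Sum>a\<in>UNIV. \<Sum>b\<in>UNIV. gi i a y * pd k (g a b) y * gi b j y) =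
     (\<Sum>a\<in>UNIV. gi i a y * \<Gamma> j k a y) + (\<Sum>b\<in>UNIV. \<Gamma> i k b y * gi b j y)" .
  have "(\<Sum>a\<in>UNIV. gi i a y * \<Gamma> j k a y) = (\<Sum>m\<in>UNIV. \<Gamma> j k m y * gi i m y)"
    by (simp add: mult.commute)
  thus ?thesis using pd_ginv_matrix[OF y, of k i j] e by simp
qed

lemma nabla1_smooth: "(\<And>a. smooth (w a)) \<Longrightarrow> smooth (nabla1 g w k a)"
  unfolding nabla1_def by (intro smooth_diff smooth_pd smooth_UNIV_sum smooth_mult christoffel_smooth) auto
lemma nabla2_smooth: "(\<And>a b. smooth (T a b)) \<Longrightarrow> smooth (nabla2 g T k a b)"
  unfolding nabla2_def by (intro smooth_diff smooth_pd smooth_UNIV_sum smooth_mult christoffel_smooth) auto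

lemma nabla1_cong: assumes "\<And>a z. z \<in> U \<Longrightarrow> w a z = w' a z" "y \<in> U"
  shows "nabla1 g w k a y = nabla1 g w' k a y"
  unfolding nabla1_def using assms pd_cong[of "w a" "w' a" y k] by simp
lemma nabla2_cong: assumes "\<And>a b z. z \<in> U \<Longrightarrow> T a b z = T' a b z" "y \<in> U"
  shows "nabla2 g T k a b y = nabla2 g T' k a b y"
  unfolding nabla2_def using assms pd_cong[of "T a b" "T' a b" y k] by simp
lemma nabla3_cong: assumes "\<And>a b c z. z \<in> U \<Longrightarrow> S a b c z = S' a b c z" "y \<in> U"
  shows "nabla3 g S k a b c y = nabla3 g S' k a b c y"
  unfolding nabla3_def using assms pd_cong[of "S a b c" "S' a b c" y k] by simp

lemma nabla3_diff: assumes "\<And>a b c. smooth (S1 a b c)" "\<And>a b c. smooth (S2 a b c)" "y \<in> U"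
  shows "nabla3 g (\<lambda>a b c z. S1 a b c z - S2 a b c z) k a b c y = nabla3 g S1 k a b c y - nabla3 g S2 k a b c y"
  unfolding nabla3_def using assms by (simp add: pd_diff right_diff_distrib sum_subtractf)
lemma nabla3_add: assumes "\<And>a b c. smooth (S1 a b c)" "\<And>a b c. smooth (S2 a b c)" "y \<in> U"
  shows "nabla3 g (\<lambda>a b c z. S1 a b c z + S2 a b c z) k a b c y = nabla3 g S1 k a b c y + nabla3 g S2 k a b c y"
  unfolding nabla3_def using assms by (simp add: pd_add distrib_left sum.distrib)
lemma nabla3_swap12: "nabla3 g (\<lambda>a b c. S b a c) k a b c y = nabla3 g S k b a c y"
  unfolding nabla3_def by simp

lemma nabla2_prod: assumes A: "\<And>a. smooth (A a)" and B: "\<And>b. smooth (B b)" and y: "y \<in> U"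
  shows "nabla2 g (\<lambda>a b z. A a z * B b z) k a b y = nabla1 g A k a y * B b y + A a y * nabla1 g B k b y"
  unfolding nabla2_def nabla1_def using A B y
  by (simp add: pd_mult algebra_simps sum_distrib_left sum_distrib_right)
lemma nabla3_prod21: assumes X: "\<And>a b. smooth (X a b)" and Y: "\<And>b. smooth (Y b)" and y: "y \<in> U"
  shows "nabla3 g (\<lambda>l a b z. X l a z * Y b z) k l a b y = nabla2 g X k l a y * Y b y + X l a y * nabla1 g Y k b y"
  unfolding nabla3_def nabla2_def nabla1_def using X Y y
  by (simp add: pd_mult algebra_simps sum_distrib_left sum_distrib_right)
lemma nabla3_prod12: assumes X: "\<And>a b. smooth (X a b)" and Y: "\<And>b. smooth (Y b)" and y: "y \<in> U"
  shows "nabla3 g (\<lambda>l a b z. Y a z * X l b z) k l a b y = nabla1 g Y k a y * X l b y + Y a y * nabla2 g X k l b y"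
  unfolding nabla3_def nabla2_def nabla1_def using X Y y
  by (simp add: pd_mult algebra_simps sum_distrib_left sum_distrib_right)

lemma nabla2_sym: assumes "\<And>a b z. z \<in> U \<Longrightarrow> T a b z = T b a z" "y \<in> U"
  shows "nabla2 g T k a b y = nabla2 g T k b a y"
proof -
  have "pd k (T a b) y = pd k (T b a) y" by (rule pd_cong) (use assms in auto)
  moreover have "(\<Sum>m\<in>UNIV. \<Gamma> m k a y * T m b y) = (\<Sum>m\<in>UNIV. \<Gamma> m k a y * T b m y)"
    by (rule sum.cong) (use assms in auto)
  moreover have "(\<Sum>m\<in>UNIV. \<Gamma> m k b y * T a m y) = (\<Sum>m\<in>UNIV. \<Gamma> m k b y * T m a y)"
    by (rule sum.cong) (use assms in auto)
  ultimately show ?thesis unfolding nabla2_def by simp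
qed

(* We expand both second derivatives in coordinates;
   Schwarz's theorem and the symmetry of Gamma cancel everything else. *)
lemma nabla2_nabla1_expand:
  assumes w: "\<And>a. smooth (w a)" and y: "y \<in> U"
  shows "nabla2 g (nabla1 g w) i j c y = pd i (pd j (w c)) y
    - (\<Sum>m\<in>UNIV. pd i (\<Gamma> m j c) y * w m y) - (\<Sum>m\<in>UNIV. \<Gamma> m j c y * pd i (w m) y)
    - (\<Sum>m\<in>UNIV. \<Gamma> m i j y * nabla1 g w m c y)
    - (\<Sum>m\<in>UNIV. \<Gamma> m i c y * pd j (w m) y) + (\<Sum>m\<in>UNIV. \<Sum>p\<in>UNIV. \<Gamma> m i c y * \<Gamma> p j m y * w p y)"
proof -
  have a: "pd i (nabla1 g w j c) y = pd i (pd j (w c)) y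
    - ((\<Sum>m\<in>UNIV. pd i (\<Gamma> m j c) y * w m y) + (\<Sum>m\<in>UNIV. \<Gamma> m j c y * pd i (w m) y))"
    unfolding nabla1_def
    by (simp add: pd_diff pd_sum pd_mult smooth_pd smooth_UNIV_sum smooth_mult christoffel_smooth w y sum.distrib)
  have b: "(\<Sum>m\<in>UNIV. \<Gamma> m i c y * nabla1 g w j m y) = (\<Sum>m\<in>UNIV. \<Gamma> m i c y * pd j (w m) y)
     - (\<Sum>m\<in>UNIV. \<Sum>p\<in>UNIV. \<Gamma> m i c y * \<Gamma> p j m y * w p y)"
    unfolding nabla1_def by (simp add: right_diff_distrib sum_subtractf sum_distrib_left mult.assoc)
  show ?thesis unfolding nabla2_def[of g "nabla1 g w" i j c] using a b by simp
qed

lemma ricci_identity_covector: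
  assumes w: "\<And>a. smooth (w a)" and y: "y \<in> U"
  shows "nabla2 g (nabla1 g w) i j c y - nabla2 g (nabla1 g w) j i c y = - (\<Sum>m\<in>UNIV. riem_up g m i j c y * w m y)"
proof -
  have s: "pd i (pd j (w c)) y = pd j (pd i (w c)) y" using pd_commute[OF w y] .
  have t: "(\<Sum>m\<in>UNIV. \<Gamma> m i j y * nabla1 g w m c y) = (\<Sum>m\<in>UNIV. \<Gamma> m j i y * nabla1 g w m c y)"
    by (rule sum.cong) (auto simp: christoffel_sym[OF y, of _ i j])
  have r: "- (\<Sum>m\<in>UNIV. riem_up g m i j c y * w m y) =
      - (\<Sum>m\<in>UNIV. pd i (\<Gamma> m j c) y * w m y) + (\<Sum>m\<in>UNIV. pd j (\<Gamma> m i c) y * w m y)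
      - (\<Sum>p\<in>UNIV. \<Sum>m\<in>UNIV. \<Gamma> m j c y * \<Gamma> p i m y * w p y)
      + (\<Sum>p\<in>UNIV. \<Sum>m\<in>UNIV. \<Gamma> m i c y * \<Gamma> p j m y * w p y)"
    unfolding riem_up_def
    by (simp add: algebra_simps sum_subtractf sum.distrib sum_distrib_right sum_distrib_left)
  have s1: "(\<Sum>m\<in>UNIV. \<Sum>p\<in>UNIV. \<Gamma> m i c y * \<Gamma> p j m y * w p y) = (\<Sum>p\<in>UNIV. \<Sum>m\<in>UNIV. \<Gamma> m i c y * \<Gamma> p j m y * w p y)"
    by (rule sum.swap)
  have s2: "(\<Sum>m\<in>UNIV. \<Sum>p\<in>UNIV. \<Gamma> m j c y * \<Gamma> p i m y * w p y) = (\<Sum>p\<in>UNIV. \<Sum>m\<in>UNIV. \<Gamma> m j c y * \<Gamma> p i m y * w p y)"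
    by (rule sum.swap)
  show ?thesis using nabla2_nabla1_expand[where w=w and i=i and j=j and c=c, OF w y] nabla2_nabla1_expand[where w=w and i=j and j=i and c=c, OF w y] s t r s1 s2 by linarith
qed

lemma nabla3_nabla2_expand:
  assumes T: "\<And>a b. smooth (T a b)" and y: "y \<in> U"
  shows "nabla3 g (nabla2 g T) i j a b y = pd i (pd j (T a b)) y
 - (\<Sum>m\<in>UNIV. pd i (\<Gamma> m j a) y * T m b y) - (\<Sum>m\<in>UNIV. \<Gamma> m j a y * pd i (T m b) y)
 - (\<Sum>m\<in>UNIV. pd i (\<Gamma> m j b) y * T a m y) - (\<Sum>m\<in>UNIV. \<Gamma> m j b y * pd i (T a m) y)
 - (\<Sum>m\<in>UNIV. \<Gamma> m i j y * nabla2 g T m a b y)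
 - (\<Sum>m\<in>UNIV. \<Gamma> m i a y * pd j (T m b) y) + (\<Sum>m\<in>UNIV. \<Sum>p\<in>UNIV. \<Gamma> m i a y * \<Gamma> p j m y * T p b y)
   + (\<Sum>m\<in>UNIV. \<Sum>p\<in>UNIV. \<Gamma> m i a y * \<Gamma> p j b y * T m p y)
 - (\<Sum>m\<in>UNIV. \<Gamma> m i b y * pd j (T a m) y) + (\<Sum>m\<in>UNIV. \<Sum>p\<in>UNIV. \<Gamma> m i b y * \<Gamma> p j a y * T p m y)
   + (\<Sum>m\<in>UNIV. \<Sum>p\<in>UNIV. \<Gamma> m i b y * \<Gamma> p j m y * T a p y)"
proof -
  have a: "pd i (nabla2 g T j a b) y = pd i (pd j (T a b)) y
    - ((\<Sum>m\<in>UNIV. pd i (\<Gamma> m j a) y * T m b y) + (\<Sum>m\<in>UNIV. \<Gamma> m j a y * pd i (T m b) y))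
    - ((\<Sum>m\<in>UNIV. pd i (\<Gamma> m j b) y * T a m y) + (\<Sum>m\<in>UNIV. \<Gamma> m j b y * pd i (T a m) y))"
    unfolding nabla2_def
    by (simp add: pd_diff pd_sum pd_mult smooth_pd smooth_UNIV_sum smooth_mult smooth_diff christoffel_smooth T y sum.distrib)
  have b: "(\<Sum>m\<in>UNIV. \<Gamma> m i a y * nabla2 g T j m b y) = (\<Sum>m\<in>UNIV. \<Gamma> m i a y * pd j (T m b) y)
     - (\<Sum>m\<in>UNIV. \<Sum>p\<in>UNIV. \<Gamma> m i a y * \<Gamma> p j m y * T p b y)
     - (\<Sum>m\<in>UNIV. \<Sum>p\<in>UNIV. \<Gamma> m i a y * \<Gamma> p j b y * T m p y)"
    unfolding nabla2_def by (simp add: right_diff_distrib sum_subtractf sum_distrib_left mult.assoc)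
  have c: "(\<Sum>m\<in>UNIV. \<Gamma> m i b y * nabla2 g T j a m y) = (\<Sum>m\<in>UNIV. \<Gamma> m i b y * pd j (T a m) y)
     - (\<Sum>m\<in>UNIV. \<Sum>p\<in>UNIV. \<Gamma> m i b y * \<Gamma> p j a y * T p m y)
     - (\<Sum>m\<in>UNIV. \<Sum>p\<in>UNIV. \<Gamma> m i b y * \<Gamma> p j m y * T a p y)"
    unfolding nabla2_def by (simp add: right_diff_distrib sum_subtractf sum_distrib_left mult.assoc)
  show ?thesis unfolding nabla3_def[of g "nabla2 g T" i j a b] using a b c by simp
qed

lemma ricci_identity_2tensor:
  assumes T: "\<And>a b. smooth (T a b)" and y: "y \<in> U"
  shows "nabla3 g (nabla2 g T) i j a b y - nabla3 g (nabla2 g T) j i a b y =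
    - (\<Sum>m\<in>UNIV. riem_up g m i j a y * T m b y) - (\<Sum>m\<in>UNIV. riem_up g m i j b y * T a m y)"
proof -
  have s: "pd i (pd j (T a b)) y = pd j (pd i (T a b)) y" using pd_commute[OF T y] .
  have t: "(\<Sum>m\<in>UNIV. \<Gamma> m i j y * nabla2 g T m a b y) = (\<Sum>m\<in>UNIV. \<Gamma> m j i y * nabla2 g T m a b y)"
    by (rule sum.cong) (auto simp: christoffel_sym[OF y, of _ i j])
  have c1: "(\<Sum>m\<in>UNIV. \<Sum>p\<in>UNIV. \<Gamma> m i a y * \<Gamma> p j b y * T m p y) = (\<Sum>m\<in>UNIV. \<Sum>p\<in>UNIV. \<Gamma> m j b y * \<Gamma> p i a y * T p m y)"
    by (subst sum.swap) (simp add: mult_ac)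
  have c2: "(\<Sum>m\<in>UNIV. \<Sum>p\<in>UNIV. \<Gamma> m i b y * \<Gamma> p j a y * T p m y) = (\<Sum>m\<in>UNIV. \<Sum>p\<in>UNIV. \<Gamma> m j a y * \<Gamma> p i b y * T m p y)"
    by (subst sum.swap) (simp add: mult_ac)
  have r: "- (\<Sum>m\<in>UNIV. riem_up g m i j a y * T m b y) - (\<Sum>m\<in>UNIV. riem_up g m i j b y * T a m y) =
      - (\<Sum>m\<in>UNIV. pd i (\<Gamma> m j a) y * T m b y) + (\<Sum>m\<in>UNIV. pd j (\<Gamma> m i a) y * T m b y)
      - (\<Sum>p\<in>UNIV. \<Sum>m\<in>UNIV. \<Gamma> m j a y * \<Gamma> p i m y * T p b y)
      + (\<Sum>p\<in>UNIV. \<Sum>m\<in>UNIV. \<Gamma> m i a y * \<Gamma> p j m y * T p b y)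
      - (\<Sum>m\<in>UNIV. pd i (\<Gamma> m j b) y * T a m y) + (\<Sum>m\<in>UNIV. pd j (\<Gamma> m i b) y * T a m y)
      - (\<Sum>p\<in>UNIV. \<Sum>m\<in>UNIV. \<Gamma> m j b y * \<Gamma> p i m y * T a p y)
      + (\<Sum>p\<in>UNIV. \<Sum>m\<in>UNIV. \<Gamma> m i b y * \<Gamma> p j m y * T a p y)"
    unfolding riem_up_def
    by (simp add: algebra_simps sum_subtractf sum.distrib sum_distrib_right sum_distrib_left)
  have s1: "(\<Sum>m\<in>UNIV. \<Sum>p\<in>UNIV. \<Gamma> m i a y * \<Gamma> p j m y * T p b y) = (\<Sum>p\<in>UNIV. \<Sum>m\<in>UNIV. \<Gamma> m i a y * \<Gamma> p j m y * T p b y)"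
    by (rule sum.swap)
  have s2: "(\<Sum>m\<in>UNIV. \<Sum>p\<in>UNIV. \<Gamma> m j a y * \<Gamma> p i m y * T p b y) = (\<Sum>p\<in>UNIV. \<Sum>m\<in>UNIV. \<Gamma> m j a y * \<Gamma> p i m y * T p b y)"
    by (rule sum.swap)
  have s3: "(\<Sum>m\<in>UNIV. \<Sum>p\<in>UNIV. \<Gamma> m i b y * \<Gamma> p j m y * T a p y) = (\<Sum>p\<in>UNIV. \<Sum>m\<in>UNIV. \<Gamma> m i b y * \<Gamma> p j m y * T a p y)"
    by (rule sum.swap)
  have s4: "(\<Sum>m\<in>UNIV. \<Sum>p\<in>UNIV. \<Gamma> m j b y * \<Gamma> p i m y * T a p y) = (\<Sum>p\<in>UNIV. \<Sum>m\<in>UNIV. \<Gamma> m j b y * \<Gamma> p i m y * T a p y)"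
    by (rule sum.swap)
  show ?thesis using nabla3_nabla2_expand[where T=T and i=i and j=j and a=a and b=b, OF T y]
      nabla3_nabla2_expand[where T=T and i=j and j=i and a=a and b=b, OF T y] s t c1 c2 r s1 s2 s3 s4 by linarith
qed

abbreviation "Rm \<equiv> riem_up g"

lemma riem_up_antisym: "Rm l i j k y = - Rm l j i k y"
  unfolding riem_up_def by (simp add: sum_subtractf)

lemma riem_up_smooth: "smooth (Rm l i j k)"
proof -
  have "smooth (\<lambda>y. pd i (\<Gamma> l j k) y - pd j (\<Gamma> l i k) y
     + (\<Sum>m\<in>UNIV. \<Gamma> m j k y * \<Gamma> l i m y - \<Gamma> m i k y * \<Gamma> l j m y))"
    by (intro smooth_add smooth_diff smooth_pd christoffel_smooth smooth_UNIV_sum smooth_mult)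
  thus ?thesis unfolding riem_up_def[abs_def] by simp
qed

lemma ric_smooth: "smooth (ric g j k)"
  unfolding ric_def[abs_def] by (intro smooth_UNIV_sum riem_up_smooth)

lemma pd_christoffel_sym: "y \<in> U \<Longrightarrow> pd i (\<Gamma> l j k) y = pd i (\<Gamma> l k j) y"
  by (rule pd_cong) (auto simp: christoffel_sym)

lemma first_bianchi: assumes y: "y \<in> U"
  shows "Rm l i j k y + Rm l j k i y + Rm l k i j y = 0"
proof -
  have e1: "(\<Sum>m\<in>UNIV. \<Gamma> m j k y * \<Gamma> l i m y) = (\<Sum>m\<in>UNIV. \<Gamma> m k j y * \<Gamma> l i m y)"
    by (rule sum.cong) (auto simp: christoffel_sym[OF y, of _ j k])
  have e2: "(\<Sum>m\<in>UNIV. \<Gamma> m i k y * \<Gamma> l j m y) = (\<Sum>m\<in>UNIV. \<Gamma> m k i y * \<Gamma> l j m y)"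
    by (rule sum.cong) (auto simp: christoffel_sym[OF y, of _ i k])
  have e3: "(\<Sum>m\<in>UNIV. \<Gamma> m j i y * \<Gamma> l k m y) = (\<Sum>m\<in>UNIV. \<Gamma> m i j y * \<Gamma> l k m y)"
    by (rule sum.cong) (auto simp: christoffel_sym[OF y, of _ j i])
  show ?thesis unfolding riem_up_def
    using e1 e2 e3 pd_christoffel_sym[OF y, of i l j k] pd_christoffel_sym[OF y, of j l k i] pd_christoffel_sym[OF y, of k l i j]
    by (simp add: sum_subtractf)
qed

(* The metric is parallel; applied to g, the Ricci identity for 2-tensors yields
   the antisymmetry of R in its last two arguments. *)
lemma nabla2_g_zero: "y \<in> U \<Longrightarrow> nabla2 g g k a b y = 0"
  unfolding nabla2_def by (simp add: metric_compatible g_sym[of y _ b] mult.commute)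

lemma nabla3_nabla2_g_zero: assumes y: "y \<in> U" shows "nabla3 g (nabla2 g g) i j a b y = 0"
proof -
  have "pd i (nabla2 g g j a b) y = pd i (\<lambda>z. 0) y" by (rule pd_cong) (auto simp: nabla2_g_zero y)
  thus ?thesis unfolding nabla3_def[of g "nabla2 g g"] by (simp add: pd_const nabla2_g_zero y)
qed

lemma riem_antisym_34: assumes y: "y \<in> U" shows "riem g i j a b y = - riem g i j b a y"
proof -
  have "0 = - (\<Sum>m\<in>UNIV. Rm m i j a y * g m b y) - (\<Sum>m\<in>UNIV. Rm m i j b y * g a m y)"
    using ricci_identity_2tensor[where T=g and i=i and j=j and a=a and b=b, OF g_smooth y] nabla3_nabla2_g_zero[OF y] by simp
  moreover have "(\<Sum>m\<in>UNIV. Rm m i j b y * g a m y) = riem g i j b a y"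
    unfolding riem_def by (rule sum.cong) (auto simp: g_sym[OF y, of a])
  ultimately show ?thesis unfolding riem_def by linarith
qed

lemma riem_antisym_12: "riem g i j a b y = - riem g j i a b y"
  unfolding riem_def by (simp add: riem_up_antisym[of _ i j] sum_negf)

lemma riem_up_raise: assumes y: "y \<in> U" shows "Rm m i j k y = (\<Sum>q\<in>UNIV. gi m q y * riem g i j k q y)"
proof -
  have "(\<Sum>q\<in>UNIV. gi m q y * riem g i j k q y) = (\<Sum>q\<in>UNIV. \<Sum>p\<in>UNIV. Rm p i j k y * (g p q y * gi q m y))"
    unfolding riem_def by (simp add: sum_distrib_left ginv_sym[OF y, of m] mult_ac)
  also have "\<dots> = (\<Sum>p\<in>UNIV. Rm p i j k y * (\<Sum>q\<in>UNIV. g p q y * gi q m y))"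
    by (subst sum.swap) (simp add: sum_distrib_left)
  also have "\<dots> = Rm m i j k y" by (simp add: g_ginv[OF y])
  finally show ?thesis by simp
qed

lemma riem_trace_14: assumes y: "y \<in> U" shows "(\<Sum>c\<in>UNIV. \<Sum>b\<in>UNIV. gi c b y * riem g c a q b y) = ric g a q y"
proof -
  have "(\<Sum>c\<in>UNIV. \<Sum>b\<in>UNIV. gi c b y * riem g c a q b y) = (\<Sum>c\<in>UNIV. \<Sum>p\<in>UNIV. Rm p c a q y * (\<Sum>b\<in>UNIV. g p b y * gi b c y))"
    unfolding riem_def
  proof (rule sum.cong[OF refl])
    fix c
    have "(\<Sum>b\<in>UNIV. gi c b y * (\<Sum>p\<in>UNIV. Rm p c a q y * g p b y)) = (\<Sum>b\<in>UNIV. \<Sum>p\<in>UNIV. Rm p c a q y * (g p b y * gi b c y))"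
      by (simp add: sum_distrib_left ginv_sym[OF y, of c] mult_ac)
    also have "\<dots> = (\<Sum>p\<in>UNIV. \<Sum>b\<in>UNIV. Rm p c a q y * (g p b y * gi b c y))" by (rule sum.swap)
    finally show "(\<Sum>b\<in>UNIV. gi c b y * (\<Sum>p\<in>UNIV. Rm p c a q y * g p b y)) = (\<Sum>p\<in>UNIV. Rm p c a q y * (\<Sum>b\<in>UNIV. g p b y * gi b c y))"
      by (simp add: sum_distrib_left)
  qed
  also have "\<dots> = (\<Sum>c\<in>UNIV. Rm c c a q y)" by (simp add: g_ginv[OF y])
  finally show ?thesis by (simp add: ric_def)
qed

lemma riem_trace_13: assumes y: "y \<in> U" shows "(\<Sum>c\<in>UNIV. \<Sum>b\<in>UNIV. gi c b y * riem g c a b q y) = - ric g a q y"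
  using riem_trace_14[OF y, of a q] by (simp add: riem_antisym_34[OF y, of _ a _ q] sum_negf)

end

definition nabla_riem :: "('n::finite \<Rightarrow> 'n \<Rightarrow> real^'n \<Rightarrow> real) \<Rightarrow> 'n \<Rightarrow> 'n \<Rightarrow> 'n \<Rightarrow> 'n \<Rightarrow> 'n \<Rightarrow> real^'n \<Rightarrow> real" where
  "nabla_riem g m d c a b y = pd d (riem_up g m c a b) y + (\<Sum>p\<in>UNIV. christoffel g m d p y * riem_up g p c a b y)
     - (\<Sum>p\<in>UNIV. christoffel g p d c y * riem_up g m p a b y)
     - (\<Sum>p\<in>UNIV. christoffel g p d a y * riem_up g m c p b y)
     - (\<Sum>p\<in>UNIV. christoffel g p d b y * riem_up g m c a p y)"

context riemannian_chart begin

(* Applying the Ricci identities to the second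
   covariant derivative of du for an arbitrary smooth u expresses the cyclic sum
   of nabla R contracted with du through the first Bianchi identity; choosing
   u = x_p, a coordinate function, isolates each component. *)
lemma nabla3_riem_contract:
  assumes w: "\<And>a. smooth (w a)" and y: "y \<in> U"
  shows "nabla3 g (\<lambda>c a b z. \<Sum>m\<in>UNIV. Rm m c a b z * w m z) d c a b y
    = (\<Sum>m\<in>UNIV. nabla_riem g m d c a b y * w m y) + (\<Sum>m\<in>UNIV. Rm m c a b y * nabla1 g w d m y)"
proof -
  have sw: "(\<Sum>m\<in>UNIV. \<Sum>p\<in>UNIV. \<Gamma> m d p y * Rm p c a b y * w m y) = (\<Sum>m\<in>UNIV. \<Sum>p\<in>UNIV. Rm m c a b y * (\<Gamma> p d m y * w p y))"
    by (subst sum.swap) (simp add: mult_ac)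
  have sw1: "(\<Sum>p\<in>UNIV. \<Gamma> p d c y * (\<Sum>m\<in>UNIV. Rm m p a b y * w m y)) = (\<Sum>m\<in>UNIV. (\<Sum>p\<in>UNIV. \<Gamma> p d c y * Rm m p a b y) * w m y)"
    by (simp add: sum_distrib_left sum_distrib_right mult_ac, subst sum.swap, simp)
  have sw2: "(\<Sum>p\<in>UNIV. \<Gamma> p d a y * (\<Sum>m\<in>UNIV. Rm m c p b y * w m y)) = (\<Sum>m\<in>UNIV. (\<Sum>p\<in>UNIV. \<Gamma> p d a y * Rm m c p b y) * w m y)"
    by (simp add: sum_distrib_left sum_distrib_right mult_ac, subst sum.swap, simp)
  have sw3: "(\<Sum>p\<in>UNIV. \<Gamma> p d b y * (\<Sum>m\<in>UNIV. Rm m c a p y * w m y)) = (\<Sum>m\<in>UNIV. (\<Sum>p\<in>UNIV. \<Gamma> p d b y * Rm m c a p y) * w m y)"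
    by (simp add: sum_distrib_left sum_distrib_right mult_ac, subst sum.swap, simp)
  have pdW: "pd d (\<lambda>z. \<Sum>m\<in>UNIV. Rm m c a b z * w m z) y = (\<Sum>m\<in>UNIV. pd d (Rm m c a b) y * w m y + Rm m c a b y * pd d (w m) y)"
    by (simp add: pd_sum pd_mult smooth_mult riem_up_smooth w y)
  have "nabla3 g (\<lambda>c a b z. \<Sum>m\<in>UNIV. Rm m c a b z * w m z) d c a b y =
     (\<Sum>m\<in>UNIV. pd d (Rm m c a b) y * w m y + Rm m c a b y * pd d (w m) y)
     - (\<Sum>m\<in>UNIV. (\<Sum>p\<in>UNIV. \<Gamma> p d c y * Rm m p a b y) * w m y)
     - (\<Sum>m\<in>UNIV. (\<Sum>p\<in>UNIV. \<Gamma> p d a y * Rm m c p b y) * w m y)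
     - (\<Sum>m\<in>UNIV. (\<Sum>p\<in>UNIV. \<Gamma> p d b y * Rm m c a p y) * w m y)"
    unfolding nabla3_def using pdW sw1 sw2 sw3 by simp
  also have "\<dots> = (\<Sum>m\<in>UNIV. nabla_riem g m d c a b y * w m y) + (\<Sum>m\<in>UNIV. Rm m c a b y * nabla1 g w d m y)"
    unfolding nabla_riem_def nabla1_def using sw
    by (simp add: algebra_simps sum.distrib sum_subtractf sum_distrib_left sum_distrib_right)
  finally show ?thesis .
qed

(* By the Ricci identity, the curvature applied to a covector w is an
   antisymmetrised second covariant derivative of w; differentiate once more. *)
lemma nabla3_riem_contract_ricci:
  assumes w: "\<And>m. smooth (w m)" and y: "y \<in> U"
  shows "nabla3 g (\<lambda>c a b z. \<Sum>m\<in>UNIV. Rm m c a b z * w m z) d c a b y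
    = nabla3 g (nabla2 g (nabla1 g w)) d a c b y - nabla3 g (nabla2 g (nabla1 g w)) d c a b y"
proof -
  define F3 where "F3 = nabla2 g (nabla1 g w)"
  have F3: "\<And>a b c. smooth (F3 a b c)" unfolding F3_def using nabla2_smooth nabla1_smooth w by blast
  have curv: "(\<Sum>m\<in>UNIV. Rm m c a b z * w m z) = F3 a c b z - F3 c a b z" if "z \<in> U" for c a b z
    using ricci_identity_covector[where w=w and i=c and j=a and c=b, OF w that] unfolding F3_def by simp
  have "nabla3 g (\<lambda>c a b z. \<Sum>m\<in>UNIV. Rm m c a b z * w m z) d c a b y
      = nabla3 g (\<lambda>c a b z. F3 a c b z - F3 c a b z) d c a b y"
    by (rule nabla3_cong) (auto simp: curv y)
  also have "\<dots> = nabla3 g (\<lambda>c a b. F3 a c b) d c a b y - nabla3 g F3 d c a b y"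
    by (rule nabla3_diff[OF _ F3 y]) (rule F3)
  also have "\<dots> = nabla3 g F3 d a c b y - nabla3 g F3 d c a b y"
    using nabla3_swap12[of F3] by simp
  finally show ?thesis unfolding F3_def .
qed

lemma second_bianchi_contract:
  assumes u: "smooth u" and y: "y \<in> U"
  shows "(\<Sum>m\<in>UNIV. (nabla_riem g m d c a b y + nabla_riem g m c a d b y + nabla_riem g m a d c b y) * pd m u y) = 0"
proof -
  define du where "du = (\<lambda>m. pd m u)"
  define F where "F = nabla1 g du"
  define F3 where "F3 = nabla2 g F"
  define W where "W = (\<lambda>c a b z. \<Sum>m\<in>UNIV. Rm m c a b z * du m z)"
  have du: "\<And>m. smooth (du m)" unfolding du_def using u smooth_pd by blast
  have F: "\<And>a b. smooth (F a b)" unfolding F_def using nabla1_smooth du by blast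
  have cW: "nabla3 g W d' c' a' b' y = nabla3 g F3 d' a' c' b' y - nabla3 g F3 d' c' a' b' y" for d' c' a' b'
    unfolding W_def F3_def F_def by (rule nabla3_riem_contract_ricci[OF du y])
  have LW: "nabla3 g W d' c' a' b' y = (\<Sum>m\<in>UNIV. nabla_riem g m d' c' a' b' y * du m y) + (\<Sum>m\<in>UNIV. Rm m c' a' b' y * F d' m y)"
    for d' c' a' b' unfolding W_def F_def by (rule nabla3_riem_contract[OF du y])
  have R2: "nabla3 g F3 i j a' b' y - nabla3 g F3 j i a' b' y =
    - (\<Sum>m\<in>UNIV. Rm m i j a' y * F m b' y) - (\<Sum>m\<in>UNIV. Rm m i j b' y * F a' m y)" for i j a' b'
    unfolding F3_def by (rule ricci_identity_2tensor[OF F y])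
  have B: "(\<Sum>m\<in>UNIV. Rm m d a c y * F m b y) + (\<Sum>m\<in>UNIV. Rm m c d a y * F m b y) + (\<Sum>m\<in>UNIV. Rm m a c d y * F m b y) = 0"
  proof -
    have "(\<Sum>m\<in>UNIV. Rm m d a c y * F m b y) + (\<Sum>m\<in>UNIV. Rm m c d a y * F m b y) + (\<Sum>m\<in>UNIV. Rm m a c d y * F m b y)
       = (\<Sum>m\<in>UNIV. (Rm m d a c y + Rm m a c d y + Rm m c d a y) * F m b y)"
      by (simp add: sum.distrib distrib_right)
    also have "\<dots> = 0" by (simp add: first_bianchi[OF y])
    finally show ?thesis .
  qed
  have A1: "(\<Sum>m\<in>UNIV. Rm m d a b y * F c m y) = - (\<Sum>m\<in>UNIV. Rm m a d b y * F c m y)"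
    by (simp add: riem_up_antisym[of _ d a] sum_negf)
  have A2: "(\<Sum>m\<in>UNIV. Rm m c d b y * F a m y) = - (\<Sum>m\<in>UNIV. Rm m d c b y * F a m y)"
    by (simp add: riem_up_antisym[of _ c d] sum_negf)
  have A3: "(\<Sum>m\<in>UNIV. Rm m a c b y * F d m y) = - (\<Sum>m\<in>UNIV. Rm m c a b y * F d m y)"
    by (simp add: riem_up_antisym[of _ a c] sum_negf)
  have "(\<Sum>m\<in>UNIV. nabla_riem g m d c a b y * du m y) + (\<Sum>m\<in>UNIV. nabla_riem g m c a d b y * du m y)
      + (\<Sum>m\<in>UNIV. nabla_riem g m a d c b y * du m y) = 0"
    using cW[of d c a b] cW[of c a d b] cW[of a d c b] LW[of d c a b] LW[of c a d b] LW[of a d c b]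
      R2[of d a c b] R2[of c d a b] R2[of a c d b] B A1 A2 A3 by linarith
  thus ?thesis unfolding du_def by (simp add: sum.distrib distrib_right)
qed

lemma second_bianchi: assumes y: "y \<in> U"
  shows "nabla_riem g p d c a b y + nabla_riem g p c a d b y + nabla_riem g p a d c b y = 0"
  using second_bianchi_contract[OF smooth_coord y, of d c a b p] by (simp add: pd_coord)

lemma nabla_riem_antisym: assumes y: "y \<in> U" shows "nabla_riem g m d c a b y = - nabla_riem g m d a c b y"
proof -
  have "pd d (Rm m c a b) y = pd d (\<lambda>z. - Rm m a c b z) y"
    by (rule pd_cong) (auto simp: riem_up_antisym[of _ c a] y)
  also have "\<dots> = - pd d (Rm m a c b) y" by (simp add: pd_uminus riem_up_smooth y)
  finally have e: "pd d (Rm m c a b) y = - pd d (Rm m a c b) y" .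
  have r1: "\<And>p. Rm p c a b y = - Rm p a c b y" by (rule riem_up_antisym)
  have r2: "\<And>p. Rm m p a b y = - Rm m a p b y" by (rule riem_up_antisym)
  have r3: "\<And>p. Rm m c p b y = - Rm m p c b y" by (rule riem_up_antisym)
  have r4: "\<And>p. Rm m c a p y = - Rm m a c p y" by (rule riem_up_antisym)
  show ?thesis unfolding nabla_riem_def e
    by (simp only: r1 r2 r3 r4 sum_negf mult_minus_right)
qed

lemma nabla_riem_trace_1: assumes y: "y \<in> U" shows "(\<Sum>d\<in>UNIV. nabla_riem g d x d z b y) = nabla2 g (ric g) x z b y"
proof -
  have e1: "pd x (ric g z b) y = (\<Sum>d\<in>UNIV. pd x (Rm d d z b) y)"
    unfolding ric_def[abs_def] by (simp add: pd_sum riem_up_smooth y)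
  have e2: "(\<Sum>d\<in>UNIV. \<Sum>p\<in>UNIV. \<Gamma> d x p y * Rm p d z b y) = (\<Sum>d\<in>UNIV. \<Sum>p\<in>UNIV. \<Gamma> p x d y * Rm d p z b y)"
    by (rule sum.swap)
  have e3: "(\<Sum>d\<in>UNIV. \<Sum>p\<in>UNIV. \<Gamma> p x z y * Rm d d p b y) = (\<Sum>p\<in>UNIV. \<Gamma> p x z y * ric g p b y)"
    unfolding ric_def by (subst sum.swap) (simp add: sum_distrib_left)
  have e4: "(\<Sum>d\<in>UNIV. \<Sum>p\<in>UNIV. \<Gamma> p x b y * Rm d d z p y) = (\<Sum>p\<in>UNIV. \<Gamma> p x b y * ric g z p y)"
    unfolding ric_def by (subst sum.swap) (simp add: sum_distrib_left)
  show ?thesis unfolding nabla_riem_def nabla2_def using e1 e2 e3 e4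
    by (simp add: sum.distrib sum_subtractf)
qed

lemma nabla_riem_trace_2: assumes y: "y \<in> U" shows "(\<Sum>d\<in>UNIV. nabla_riem g d x z d b y) = - nabla2 g (ric g) x z b y"
  using nabla_riem_trace_1[OF y, of x z b] by (simp add: nabla_riem_antisym[OF y, of _ x z] sum_negf)

lemma second_bianchi_traced: assumes y: "y \<in> U"
  shows "(\<Sum>d\<in>UNIV. nabla_riem g d d c a b y) = nabla2 g (ric g) c a b y - nabla2 g (ric g) a c b y"
proof -
  have "(\<Sum>d\<in>UNIV. nabla_riem g d d c a b y + nabla_riem g d c a d b y + nabla_riem g d a d c b y) = 0"
    by (simp add: second_bianchi[OF y])
  hence "(\<Sum>d\<in>UNIV. nabla_riem g d d c a b y) + (\<Sum>d\<in>UNIV. nabla_riem g d c a d b y) + (\<Sum>d\<in>UNIV. nabla_riem g d a d c b y) = 0"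
    by (simp add: sum.distrib)
  thus ?thesis using nabla_riem_trace_1[OF y, of a c b] nabla_riem_trace_2[OF y, of c a b] by linarith
qed

(* Partial derivatives of traces and of tensors with a raised index are computed
   by covariant derivatives, since g^{ij} is parallel. *)
lemma pd_trace: assumes T: "\<And>a b. smooth (T a b)" and y: "y \<in> U"
  shows "pd a (\<lambda>z. \<Sum>c\<in>UNIV. \<Sum>b\<in>UNIV. gi c b z * T c b z) y = (\<Sum>c\<in>UNIV. \<Sum>b\<in>UNIV. gi c b y * nabla2 g T a c b y)"
proof -
  have p: "pd a (\<lambda>z. \<Sum>c\<in>UNIV. \<Sum>b\<in>UNIV. gi c b z * T c b z) y
     = (\<Sum>c\<in>UNIV. \<Sum>b\<in>UNIV. pd a (gi c b) y * T c b y + gi c b y * pd a (T c b) y)"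
    by (simp add: pd_sum pd_mult smooth_mult ginv_smooth T smooth_UNIV_sum y)
  have g1: "(\<Sum>c\<in>UNIV. \<Sum>b\<in>UNIV. \<Sum>m\<in>UNIV. \<Gamma> c a m y * gi m b y * T c b y)
     = (\<Sum>c\<in>UNIV. \<Sum>b\<in>UNIV. gi c b y * (\<Sum>m\<in>UNIV. \<Gamma> m a c y * T m b y))"
    by (subst sum_rev3) (simp add: sum_distrib_left mult_ac)
  have g2: "(\<Sum>c\<in>UNIV. \<Sum>b\<in>UNIV. \<Sum>m\<in>UNIV. \<Gamma> b a m y * gi c m y * T c b y)
     = (\<Sum>c\<in>UNIV. \<Sum>b\<in>UNIV. gi c b y * (\<Sum>m\<in>UNIV. \<Gamma> m a b y * T c m y))"
    by (subst sum_swap23) (simp add: sum_distrib_left mult_ac)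
  have "pd a (\<lambda>z. \<Sum>c\<in>UNIV. \<Sum>b\<in>UNIV. gi c b z * T c b z) y
     = - (\<Sum>c\<in>UNIV. \<Sum>b\<in>UNIV. \<Sum>m\<in>UNIV. \<Gamma> c a m y * gi m b y * T c b y)
       - (\<Sum>c\<in>UNIV. \<Sum>b\<in>UNIV. \<Sum>m\<in>UNIV. \<Gamma> b a m y * gi c m y * T c b y)
       + (\<Sum>c\<in>UNIV. \<Sum>b\<in>UNIV. gi c b y * pd a (T c b) y)"
    unfolding p by (simp add: pd_ginv[OF y] algebra_simps sum.distrib sum_subtractf sum_distrib_left sum_distrib_right sum_negf)
  thus ?thesis unfolding nabla2_def using g1 g2
    by (simp add: algebra_simps sum.distrib sum_subtractf sum_distrib_left)
qed

lemma pd_raised_tensor: assumes T: "\<And>a b. smooth (T a b)" and y: "y \<in> U"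
  shows "pd e (\<lambda>z. \<Sum>q\<in>UNIV. gi d q z * T a q z) y + (\<Sum>p\<in>UNIV. \<Gamma> d e p y * (\<Sum>q\<in>UNIV. gi p q y * T a q y))
     - (\<Sum>p\<in>UNIV. \<Gamma> p e a y * (\<Sum>q\<in>UNIV. gi d q y * T p q y))
   = (\<Sum>q\<in>UNIV. gi d q y * nabla2 g T e a q y)"
proof -
  have p: "pd e (\<lambda>z. \<Sum>q\<in>UNIV. gi d q z * T a q z) y = (\<Sum>q\<in>UNIV. pd e (gi d q) y * T a q y + gi d q y * pd e (T a q) y)"
    by (simp add: pd_sum pd_mult smooth_mult ginv_smooth T y)
  have f1: "(\<Sum>q\<in>UNIV. \<Sum>m\<in>UNIV. \<Gamma> d e m y * gi m q y * T a q y) = (\<Sum>p\<in>UNIV. \<Gamma> d e p y * (\<Sum>q\<in>UNIV. gi p q y * T a q y))"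
    by (subst sum.swap) (simp add: sum_distrib_left mult_ac)
  have f2: "(\<Sum>q\<in>UNIV. \<Sum>m\<in>UNIV. \<Gamma> q e m y * gi d m y * T a q y) = (\<Sum>q\<in>UNIV. gi d q y * (\<Sum>m\<in>UNIV. \<Gamma> m e q y * T a m y))"
    by (subst sum.swap) (simp add: sum_distrib_left mult_ac)
  have f3: "(\<Sum>p\<in>UNIV. \<Gamma> p e a y * (\<Sum>q\<in>UNIV. gi d q y * T p q y)) = (\<Sum>q\<in>UNIV. gi d q y * (\<Sum>m\<in>UNIV. \<Gamma> m e a y * T m q y))"
    by (simp add: sum_distrib_left mult_ac, subst sum.swap, simp)
  show ?thesis unfolding p nabla2_def using f1 f2 f3
    by (simp add: pd_ginv[OF y] algebra_simps sum.distrib sum_subtractf sum_distrib_left sum_distrib_right)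
qed

lemma riem_up_trace: assumes y: "y \<in> U"
  shows "(\<Sum>c\<in>UNIV. \<Sum>b\<in>UNIV. gi c b y * Rm d c a b y) = - (\<Sum>q\<in>UNIV. gi d q y * ric g a q y)"
proof -
  have "(\<Sum>c\<in>UNIV. \<Sum>b\<in>UNIV. gi c b y * Rm d c a b y) = (\<Sum>c\<in>UNIV. \<Sum>b\<in>UNIV. \<Sum>q\<in>UNIV. gi d q y * (gi c b y * riem g c a b q y))"
    by (simp add: riem_up_raise[OF y] sum_distrib_left mult_ac)
  also have "\<dots> = (\<Sum>q\<in>UNIV. \<Sum>c\<in>UNIV. \<Sum>b\<in>UNIV. gi d q y * (gi c b y * riem g c a b q y))"
    by (rule sum_rot3')
  also have "\<dots> = (\<Sum>q\<in>UNIV. gi d q y * (\<Sum>c\<in>UNIV. \<Sum>b\<in>UNIV. gi c b y * riem g c a b q y))"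
    by (simp add: sum_distrib_left)
  also have "\<dots> = - (\<Sum>q\<in>UNIV. gi d q y * ric g a q y)"
    by (simp add: riem_trace_13[OF y] sum_negf)
  finally show ?thesis .
qed

lemma trace_nabla_riem_expand: assumes y: "y \<in> U"
  shows "(\<Sum>c\<in>UNIV. \<Sum>b\<in>UNIV. gi c b y * nabla_riem g d e c a b y) =
     pd e (\<lambda>z. \<Sum>c\<in>UNIV. \<Sum>b\<in>UNIV. gi c b z * Rm d c a b z) y
     + (\<Sum>p\<in>UNIV. \<Gamma> d e p y * (\<Sum>c\<in>UNIV. \<Sum>b\<in>UNIV. gi c b y * Rm p c a b y))
     - (\<Sum>p\<in>UNIV. \<Gamma> p e a y * (\<Sum>c\<in>UNIV. \<Sum>b\<in>UNIV. gi c b y * Rm d c p b y))"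
proof -
  have p: "pd e (\<lambda>z. \<Sum>c\<in>UNIV. \<Sum>b\<in>UNIV. gi c b z * Rm d c a b z) y
     = (\<Sum>c\<in>UNIV. \<Sum>b\<in>UNIV. pd e (gi c b) y * Rm d c a b y + gi c b y * pd e (Rm d c a b) y)"
    by (simp add: pd_sum pd_mult smooth_mult ginv_smooth riem_up_smooth smooth_UNIV_sum y)
  have g1: "(\<Sum>c\<in>UNIV. \<Sum>b\<in>UNIV. \<Sum>m\<in>UNIV. \<Gamma> c e m y * gi m b y * Rm d c a b y)
     = (\<Sum>c\<in>UNIV. \<Sum>b\<in>UNIV. gi c b y * (\<Sum>p\<in>UNIV. \<Gamma> p e c y * Rm d p a b y))"
    by (subst sum_rev3) (simp add: sum_distrib_left mult_ac)
  have g2: "(\<Sum>c\<in>UNIV. \<Sum>b\<in>UNIV. \<Sum>m\<in>UNIV. \<Gamma> b e m y * gi c m y * Rm d c a b y)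
     = (\<Sum>c\<in>UNIV. \<Sum>b\<in>UNIV. gi c b y * (\<Sum>p\<in>UNIV. \<Gamma> p e b y * Rm d c a p y))"
    by (subst sum_swap23) (simp add: sum_distrib_left mult_ac)
  have g3: "(\<Sum>p\<in>UNIV. \<Gamma> d e p y * (\<Sum>c\<in>UNIV. \<Sum>b\<in>UNIV. gi c b y * Rm p c a b y))
     = (\<Sum>c\<in>UNIV. \<Sum>b\<in>UNIV. gi c b y * (\<Sum>p\<in>UNIV. \<Gamma> d e p y * Rm p c a b y))"
  proof -
    have "(\<Sum>p\<in>UNIV. \<Gamma> d e p y * (\<Sum>c\<in>UNIV. \<Sum>b\<in>UNIV. gi c b y * Rm p c a b y))
       = (\<Sum>p\<in>UNIV. \<Sum>c\<in>UNIV. \<Sum>b\<in>UNIV. \<Gamma> d e p y * (gi c b y * Rm p c a b y))"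
      by (simp add: sum_distrib_left)
    also have "\<dots> = (\<Sum>c\<in>UNIV. \<Sum>b\<in>UNIV. \<Sum>p\<in>UNIV. \<Gamma> d e p y * (gi c b y * Rm p c a b y))"
      by (rule sum_rot3)
    finally show ?thesis by (simp add: sum_distrib_left mult_ac)
  qed
  have g4: "(\<Sum>p\<in>UNIV. \<Gamma> p e a y * (\<Sum>c\<in>UNIV. \<Sum>b\<in>UNIV. gi c b y * Rm d c p b y))
     = (\<Sum>c\<in>UNIV. \<Sum>b\<in>UNIV. gi c b y * (\<Sum>p\<in>UNIV. \<Gamma> p e a y * Rm d c p b y))"
  proof -
    have "(\<Sum>p\<in>UNIV. \<Gamma> p e a y * (\<Sum>c\<in>UNIV. \<Sum>b\<in>UNIV. gi c b y * Rm d c p b y))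
       = (\<Sum>p\<in>UNIV. \<Sum>c\<in>UNIV. \<Sum>b\<in>UNIV. \<Gamma> p e a y * (gi c b y * Rm d c p b y))"
      by (simp add: sum_distrib_left)
    also have "\<dots> = (\<Sum>c\<in>UNIV. \<Sum>b\<in>UNIV. \<Sum>p\<in>UNIV. \<Gamma> p e a y * (gi c b y * Rm d c p b y))"
      by (rule sum_rot3)
    finally show ?thesis by (simp add: sum_distrib_left mult_ac)
  qed
  have "pd e (\<lambda>z. \<Sum>c\<in>UNIV. \<Sum>b\<in>UNIV. gi c b z * Rm d c a b z) y
     = - (\<Sum>c\<in>UNIV. \<Sum>b\<in>UNIV. \<Sum>m\<in>UNIV. \<Gamma> c e m y * gi m b y * Rm d c a b y)
       - (\<Sum>c\<in>UNIV. \<Sum>b\<in>UNIV. \<Sum>m\<in>UNIV. \<Gamma> b e m y * gi c m y * Rm d c a b y)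
       + (\<Sum>c\<in>UNIV. \<Sum>b\<in>UNIV. gi c b y * pd e (Rm d c a b) y)"
    unfolding p by (simp add: pd_ginv[OF y] algebra_simps sum.distrib sum_subtractf sum_distrib_left sum_distrib_right sum_negf)
  thus ?thesis unfolding nabla_riem_def using g1 g2 g3 g4
    by (simp add: algebra_simps sum.distrib sum_subtractf sum_distrib_left)
qed

lemma nabla_riem_double_trace: assumes y: "y \<in> U"
  shows "(\<Sum>c\<in>UNIV. \<Sum>b\<in>UNIV. gi c b y * nabla_riem g d e c a b y) = - (\<Sum>q\<in>UNIV. gi d q y * nabla2 g (ric g) e a q y)"
proof -
  have pe: "pd e (\<lambda>z. \<Sum>c\<in>UNIV. \<Sum>b\<in>UNIV. gi c b z * Rm d c a b z) y
       = - pd e (\<lambda>z. \<Sum>q\<in>UNIV. gi d q z * ric g a q z) y"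
  proof -
    have "pd e (\<lambda>z. \<Sum>c\<in>UNIV. \<Sum>b\<in>UNIV. gi c b z * Rm d c a b z) y
       = pd e (\<lambda>z. - (\<Sum>q\<in>UNIV. gi d q z * ric g a q z)) y"
      by (rule pd_cong) (auto simp: riem_up_trace y)
    thus ?thesis by (simp add: pd_uminus smooth_UNIV_sum smooth_mult ginv_smooth ric_smooth y)
  qed
  have q2: "(\<Sum>p\<in>UNIV. \<Gamma> d e p y * (\<Sum>c\<in>UNIV. \<Sum>b\<in>UNIV. gi c b y * Rm p c a b y))
     = - (\<Sum>p\<in>UNIV. \<Gamma> d e p y * (\<Sum>q\<in>UNIV. gi p q y * ric g a q y))"
    by (simp add: riem_up_trace[OF y] sum_negf)
  have q3: "(\<Sum>p\<in>UNIV. \<Gamma> p e a y * (\<Sum>c\<in>UNIV. \<Sum>b\<in>UNIV. gi c b y * Rm d c p b y))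
     = - (\<Sum>p\<in>UNIV. \<Gamma> p e a y * (\<Sum>q\<in>UNIV. gi d q y * ric g p q y))"
    by (simp add: riem_up_trace[OF y] sum_negf)
  show ?thesis using trace_nabla_riem_expand[OF y, of d e a] pe q2 q3 pd_raised_tensor[where T="ric g" and e=e and d=d and a=a, OF ric_smooth y] by linarith
qed

lemma contracted_bianchi: assumes y: "y \<in> U"
  shows "(\<Sum>c\<in>UNIV. \<Sum>b\<in>UNIV. gi c b y * nabla2 g (ric g) c a b y) = pd a (scal g) y / 2"
proof -
  let ?D = "(\<Sum>c\<in>UNIV. \<Sum>b\<in>UNIV. gi c b y * nabla2 g (ric g) c a b y)"
  have sc: "pd a (scal g) y = (\<Sum>c\<in>UNIV. \<Sum>b\<in>UNIV. gi c b y * nabla2 g (ric g) a c b y)"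
    unfolding scal_def[abs_def] by (rule pd_trace[OF ric_smooth y])
  have "(\<Sum>c\<in>UNIV. \<Sum>b\<in>UNIV. gi c b y * (\<Sum>d\<in>UNIV. nabla_riem g d d c a b y)) = ?D - pd a (scal g) y"
    unfolding sc second_bianchi_traced[OF y] by (simp add: right_diff_distrib sum_subtractf)
  moreover have "(\<Sum>c\<in>UNIV. \<Sum>b\<in>UNIV. gi c b y * (\<Sum>d\<in>UNIV. nabla_riem g d d c a b y))
      = (\<Sum>d\<in>UNIV. \<Sum>c\<in>UNIV. \<Sum>b\<in>UNIV. gi c b y * nabla_riem g d d c a b y)"
    by (simp add: sum_distrib_left, subst sum_rot3', simp)
  moreover have "\<dots> = - ?D" by (simp add: nabla_riem_double_trace[OF y] sum_negf)
  ultimately show ?thesis by linarith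
qed

(* Bochner's formula.  The Hessian is the covariant derivative of du; its
   divergence commutes with the trace up to a Ricci term. *)
lemma hess_nabla1: "hess g u = nabla1 g (\<lambda>a. pd a u)"
  by (intro ext) (simp add: hess_def nabla1_def)

lemma hess_smooth: "smooth u \<Longrightarrow> smooth (hess g u k a)"
  unfolding hess_nabla1 by (intro nabla1_smooth smooth_pd)

lemma laplacian_smooth: "smooth u \<Longrightarrow> smooth (laplacian g u)"
  unfolding laplacian_def[abs_def] by (intro smooth_UNIV_sum smooth_mult ginv_smooth hess_smooth)

lemma hess_sym: assumes u: "smooth u" and y: "y \<in> U" shows "hess g u i j y = hess g u j i y"
  unfolding hess_def using pd_commute[OF u y, of i j] christoffel_sym[OF y] by simp

lemma pd_inner: assumes A: "\<And>a. smooth (A a)" and B: "\<And>b. smooth (B b)" and y: "y \<in> U"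
  shows "pd l (\<lambda>z. \<Sum>a\<in>UNIV. \<Sum>b\<in>UNIV. gi a b z * A a z * B b z) y
    = (\<Sum>a\<in>UNIV. \<Sum>b\<in>UNIV. gi a b y * (nabla1 g A l a y * B b y + A a y * nabla1 g B l b y))"
proof -
  have "pd l (\<lambda>z. \<Sum>a\<in>UNIV. \<Sum>b\<in>UNIV. gi a b z * A a z * B b z) y
      = pd l (\<lambda>z. \<Sum>a\<in>UNIV. \<Sum>b\<in>UNIV. gi a b z * (\<lambda>a b z. A a z * B b z) a b z) y"
    by (simp add: mult.assoc)
  also have "\<dots> = (\<Sum>a\<in>UNIV. \<Sum>b\<in>UNIV. gi a b y * nabla2 g (\<lambda>a b z. A a z * B b z) l a b y)"
    by (rule pd_trace) (auto intro: smooth_mult A B y)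
  finally show ?thesis by (simp add: nabla2_prod[OF A B y])
qed

lemma nabla1_trace: assumes S: "\<And>l a b. smooth (S l a b)" and y: "y \<in> U"
  shows "nabla1 g (\<lambda>l z. \<Sum>a\<in>UNIV. \<Sum>b\<in>UNIV. gi a b z * S l a b z) k l y
    = (\<Sum>a\<in>UNIV. \<Sum>b\<in>UNIV. gi a b y * nabla3 g S k l a b y)"
proof -
  have p: "pd k (\<lambda>z. \<Sum>a\<in>UNIV. \<Sum>b\<in>UNIV. gi a b z * S l a b z) y
     = (\<Sum>a\<in>UNIV. \<Sum>b\<in>UNIV. gi a b y * nabla2 g (S l) k a b y)"
    by (rule pd_trace) (auto intro: S y)
  have e: "(\<Sum>m\<in>UNIV. \<Gamma> m k l y * (\<Sum>a\<in>UNIV. \<Sum>b\<in>UNIV. gi a b y * S m a b y))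
     = (\<Sum>a\<in>UNIV. \<Sum>b\<in>UNIV. gi a b y * (\<Sum>m\<in>UNIV. \<Gamma> m k l y * S m a b y))"
  proof -
    have "(\<Sum>m\<in>UNIV. \<Gamma> m k l y * (\<Sum>a\<in>UNIV. \<Sum>b\<in>UNIV. gi a b y * S m a b y))
       = (\<Sum>m\<in>UNIV. \<Sum>a\<in>UNIV. \<Sum>b\<in>UNIV. \<Gamma> m k l y * (gi a b y * S m a b y))"
      by (simp add: sum_distrib_left)
    also have "\<dots> = (\<Sum>a\<in>UNIV. \<Sum>b\<in>UNIV. \<Sum>m\<in>UNIV. \<Gamma> m k l y * (gi a b y * S m a b y))"
      by (rule sum_rot3)
    finally show ?thesis by (simp add: sum_distrib_left mult_ac)
  qed
  show ?thesis unfolding nabla1_def nabla3_def p nabla2_def using e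
    by (simp add: algebra_simps sum.distrib sum_subtractf sum_distrib_left)
qed

lemma div_hess: assumes u: "smooth u" and y: "y \<in> U"
  shows "(\<Sum>k\<in>UNIV. \<Sum>l\<in>UNIV. gi k l y * nabla2 g (hess g u) k l a y)
     = pd a (laplacian g u) y + (\<Sum>m\<in>UNIV. \<Sum>q\<in>UNIV. gi m q y * pd m u y * ric g a q y)"
proof -
  let ?H = "hess g u"
  have du: "\<And>a. smooth (pd a u)" using u smooth_pd by blast
  have Hs: "\<And>a b. smooth (?H a b)" using hess_smooth[OF u] .
  have sy: "nabla2 g ?H k l a y = nabla2 g ?H k a l y" for k l
    by (rule nabla2_sym) (auto simp: hess_sym[OF u] y)
  have ri: "nabla2 g ?H k a l y = nabla2 g ?H a k l y - (\<Sum>m\<in>UNIV. Rm m k a l y * pd m u y)" for k l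
    using ricci_identity_covector[where w="\<lambda>a. pd a u" and i=k and j=a and c=l, OF du y] unfolding hess_nabla1 by simp
  have "(\<Sum>k\<in>UNIV. \<Sum>l\<in>UNIV. gi k l y * nabla2 g ?H k l a y)
      = (\<Sum>k\<in>UNIV. \<Sum>l\<in>UNIV. gi k l y * nabla2 g ?H a k l y) - (\<Sum>k\<in>UNIV. \<Sum>l\<in>UNIV. gi k l y * (\<Sum>m\<in>UNIV. Rm m k a l y * pd m u y))"
    by (simp add: sy ri right_diff_distrib sum_subtractf)
  also have "(\<Sum>k\<in>UNIV. \<Sum>l\<in>UNIV. gi k l y * nabla2 g ?H a k l y) = pd a (laplacian g u) y"
    unfolding laplacian_def[abs_def] by (rule pd_trace[OF Hs y, symmetric])
  also have "(\<Sum>k\<in>UNIV. \<Sum>l\<in>UNIV. gi k l y * (\<Sum>m\<in>UNIV. Rm m k a l y * pd m u y))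
     = (\<Sum>m\<in>UNIV. pd m u y * (\<Sum>k\<in>UNIV. \<Sum>l\<in>UNIV. gi k l y * Rm m k a l y))"
  proof -
    have "(\<Sum>k\<in>UNIV. \<Sum>l\<in>UNIV. gi k l y * (\<Sum>m\<in>UNIV. Rm m k a l y * pd m u y))
      = (\<Sum>k\<in>UNIV. \<Sum>l\<in>UNIV. \<Sum>m\<in>UNIV. pd m u y * (gi k l y * Rm m k a l y))"
      by (simp add: sum_distrib_left mult_ac)
    also have "\<dots> = (\<Sum>m\<in>UNIV. \<Sum>k\<in>UNIV. \<Sum>l\<in>UNIV. pd m u y * (gi k l y * Rm m k a l y))"
      by (rule sum_rot3')
    finally show ?thesis by (simp add: sum_distrib_left)
  qed
  also have "\<dots> = - (\<Sum>m\<in>UNIV. \<Sum>q\<in>UNIV. gi m q y * pd m u y * ric g a q y)"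
    by (simp add: riem_up_trace[OF y] sum_distrib_left sum_negf mult_ac)
  finally show ?thesis by simp
qed

lemma laplacian_inner:
  assumes u: "smooth u" and w: "smooth w" and y: "y \<in> U"
  shows "laplacian g (\<lambda>z. \<Sum>a\<in>UNIV. \<Sum>b\<in>UNIV. gi a b z * pd a u z * pd b w z) y =
      (\<Sum>k\<in>UNIV. \<Sum>l\<in>UNIV. \<Sum>a\<in>UNIV. \<Sum>b\<in>UNIV. gi k l y * gi a b y * nabla2 g (hess g u) k l a y * pd b w y)
    + (\<Sum>k\<in>UNIV. \<Sum>l\<in>UNIV. \<Sum>a\<in>UNIV. \<Sum>b\<in>UNIV. gi k l y * gi a b y * hess g u l a y * hess g w k b y)
    + (\<Sum>k\<in>UNIV. \<Sum>l\<in>UNIV. \<Sum>a\<in>UNIV. \<Sum>b\<in>UNIV. gi k l y * gi a b y * hess g u k a y * hess g w l b y)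
    + (\<Sum>k\<in>UNIV. \<Sum>l\<in>UNIV. \<Sum>a\<in>UNIV. \<Sum>b\<in>UNIV. gi k l y * gi a b y * pd a u y * nabla2 g (hess g w) k l b y)"
proof -
  define Q where "Q = (\<lambda>z. \<Sum>a\<in>UNIV. \<Sum>b\<in>UNIV. gi a b z * pd a u z * pd b w z)"
  define HA where "HA = hess g u"
  define HB where "HB = hess g w"
  define S where "S = (\<lambda>l a b z. HA l a z * pd b w z + pd a u z * HB l b z)"
  define G where "G = (\<lambda>l z. \<Sum>a\<in>UNIV. \<Sum>b\<in>UNIV. gi a b z * S l a b z)"
  have A: "\<And>a. smooth (pd a u)" using u smooth_pd by blast
  have B: "\<And>a. smooth (pd a w)" using w smooth_pd by blast
  have HA: "\<And>a b. smooth (HA a b)" unfolding HA_def using hess_smooth[OF u] .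
  have HB: "\<And>a b. smooth (HB a b)" unfolding HB_def using hess_smooth[OF w] .
  have dQ: "pd l Q z = G l z" if z: "z \<in> U" for l z
    unfolding Q_def G_def S_def HA_def HB_def using pd_inner[OF A B z, of l] by (simp add: hess_nabla1 distrib_left)
  have hQ: "hess g Q k l y = (\<Sum>a\<in>UNIV. \<Sum>b\<in>UNIV. gi a b y * nabla3 g S k l a b y)" for k l
  proof -
    have "hess g Q k l y = nabla1 g G k l y" unfolding hess_nabla1 by (rule nabla1_cong) (auto simp: dQ y)
    also have "\<dots> = (\<Sum>a\<in>UNIV. \<Sum>b\<in>UNIV. gi a b y * nabla3 g S k l a b y)"
      unfolding G_def by (rule nabla1_trace) (auto simp: S_def intro!: smooth_add smooth_mult HA HB A B y)
    finally show ?thesis .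
  qed
  have nS: "nabla3 g S k l a b y = nabla2 g HA k l a y * pd b w y + HA l a y * HB k b y
      + (HA k a y * HB l b y + pd a u y * nabla2 g HB k l b y)" for k l a b
  proof -
    have "nabla3 g S k l a b y = nabla3 g (\<lambda>l a b z. HA l a z * pd b w z) k l a b y
        + nabla3 g (\<lambda>l a b z. pd a u z * HB l b z) k l a b y"
      unfolding S_def by (rule nabla3_add) (auto intro!: smooth_mult HA HB A B y)
    thus ?thesis using nabla3_prod21[OF HA B y, where k=k and l=l and a=a and b=b]
        nabla3_prod12[OF HB A y, where k=k and l=l and a=a and b=b]
      by (simp add: HA_def HB_def hess_nabla1)
  qed
  show ?thesis
    unfolding Q_def[symmetric] HA_def[symmetric] HB_def[symmetric] laplacian_def hQ nS
    by (simp add: algebra_simps sum.distrib sum_distrib_left)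
qed

lemma bochner: assumes u: "smooth u" and w: "smooth w" and y: "y \<in> U"
  shows "laplacian g (\<lambda>z. \<Sum>a\<in>UNIV. \<Sum>b\<in>UNIV. gi a b z * pd a u z * pd b w z) y =
    (\<Sum>a\<in>UNIV. \<Sum>b\<in>UNIV. gi a b y * pd a (laplacian g u) y * pd b w y)
  + (\<Sum>a\<in>UNIV. \<Sum>b\<in>UNIV. gi a b y * pd a u y * pd b (laplacian g w) y)
  + 2 * (\<Sum>k\<in>UNIV. \<Sum>l\<in>UNIV. \<Sum>a\<in>UNIV. \<Sum>b\<in>UNIV. gi k l y * gi a b y * hess g u k a y * hess g w l b y)
  + (\<Sum>a\<in>UNIV. \<Sum>b\<in>UNIV. gi a b y * (\<Sum>m\<in>UNIV. \<Sum>q\<in>UNIV. gi m q y * pd m u y * ric g a q y) * pd b w y)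
  + (\<Sum>a\<in>UNIV. \<Sum>b\<in>UNIV. gi a b y * pd a u y * (\<Sum>m\<in>UNIV. \<Sum>q\<in>UNIV. gi m q y * pd m w y * ric g b q y))"
proof -
  define HA where "HA = hess g u"
  define HB where "HB = hess g w"
  have div_u: "(\<Sum>k\<in>UNIV. \<Sum>l\<in>UNIV. \<Sum>a\<in>UNIV. \<Sum>b\<in>UNIV. gi k l y * gi a b y * nabla2 g HA k l a y * pd b w y)
     = (\<Sum>a\<in>UNIV. \<Sum>b\<in>UNIV. gi a b y * (\<Sum>k\<in>UNIV. \<Sum>l\<in>UNIV. gi k l y * nabla2 g HA k l a y) * pd b w y)"
    by (subst sum_swap_pairs) (simp add: sum_distrib_left sum_distrib_right mult_ac)
  have div_w: "(\<Sum>k\<in>UNIV. \<Sum>l\<in>UNIV. \<Sum>a\<in>UNIV. \<Sum>b\<in>UNIV. gi k l y * gi a b y * pd a u y * nabla2 g HB k l b y)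
     = (\<Sum>a\<in>UNIV. \<Sum>b\<in>UNIV. gi a b y * pd a u y * (\<Sum>k\<in>UNIV. \<Sum>l\<in>UNIV. gi k l y * nabla2 g HB k l b y))"
    by (subst sum_swap_pairs) (simp add: sum_distrib_left sum_distrib_right mult_ac)
  have hess_pair_sym: "(\<Sum>k\<in>UNIV. \<Sum>l\<in>UNIV. \<Sum>a\<in>UNIV. \<Sum>b\<in>UNIV. gi k l y * gi a b y * HA l a y * HB k b y)
     = (\<Sum>k\<in>UNIV. \<Sum>l\<in>UNIV. \<Sum>a\<in>UNIV. \<Sum>b\<in>UNIV. gi k l y * gi a b y * HA k a y * HB l b y)"
  proof -
    have "(\<Sum>k\<in>UNIV. \<Sum>l\<in>UNIV. \<Sum>a\<in>UNIV. \<Sum>b\<in>UNIV. gi k l y * gi a b y * HA l a y * HB k b y)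
       = (\<Sum>l\<in>UNIV. \<Sum>k\<in>UNIV. \<Sum>a\<in>UNIV. \<Sum>b\<in>UNIV. gi k l y * gi a b y * HA l a y * HB k b y)"
      by (rule sum.swap)
    also have "\<dots> = (\<Sum>k\<in>UNIV. \<Sum>l\<in>UNIV. \<Sum>a\<in>UNIV. \<Sum>b\<in>UNIV. gi k l y * gi a b y * HA k a y * HB l b y)"
      by (simp add: ginv_sym[OF y, of _ k for k])
    finally show ?thesis .
  qed
  show ?thesis
    unfolding laplacian_inner[OF u w y, folded HA_def HB_def] div_u div_w hess_pair_sym
      div_hess[OF u y, folded HA_def] div_hess[OF w y, folded HB_def]
    by (simp add: HA_def HB_def algebra_simps sum.distrib sum_distrib_left sum_distrib_right)
qed
lemma dir_grad_sym_form: "dir_grad g f u = (\<lambda>z. \<Sum>a\<in>UNIV. \<Sum>b\<in>UNIV. gi a b z * pd a u z * pd b f z)"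
proof (rule ext)
  fix z
  have "dir_grad g f u z = (\<Sum>a\<in>UNIV. \<Sum>b\<in>UNIV. gi a b z * pd b f z * pd a u z)"
    unfolding dir_grad_def grad_def by (simp add: sum_distrib_right)
  thus "dir_grad g f u z = (\<Sum>a\<in>UNIV. \<Sum>b\<in>UNIV. gi a b z * pd a u z * pd b f z)" by (simp add: mult_ac)
qed

lemma dir_grad_smooth: "smooth f \<Longrightarrow> smooth u \<Longrightarrow> smooth (dir_grad g f u)"
  unfolding dir_grad_sym_form by (intro smooth_UNIV_sum smooth_mult ginv_smooth smooth_pd)

lemma dir_grad_cong: assumes "\<And>z. z \<in> U \<Longrightarrow> u z = u' z" "y \<in> U" shows "dir_grad g f u y = dir_grad g f u' y"
  unfolding dir_grad_def using pd_cong[of u u' y, OF assms(1) assms(2)] by simp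

lemma hess_cong: assumes "\<And>z. z \<in> U \<Longrightarrow> u z = u' z" "y \<in> U" shows "hess g u i j y = hess g u' i j y"
  unfolding hess_nabla1 by (rule nabla1_cong) (use assms pd_cong[of u u'] in auto)

lemma laplacian_cong: assumes "\<And>z. z \<in> U \<Longrightarrow> u z = u' z" "y \<in> U" shows "laplacian g u y = laplacian g u' y"
  unfolding laplacian_def using hess_cong[OF assms] assms(2) by simp

lemma f_laplacian_cong: assumes "\<And>z. z \<in> U \<Longrightarrow> u z = u' z" "y \<in> U" shows "f_laplacian g f u y = f_laplacian g f u' y"
  unfolding f_laplacian_def using laplacian_cong[OF assms] dir_grad_cong[OF assms] by simp

lemma hess_cmult: "smooth u \<Longrightarrow> y \<in> U \<Longrightarrow> hess g (\<lambda>z. c * u z) i j y = c * hess g u i j y"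
proof -
  assume u: "smooth u" and y: "y \<in> U"
  have "pd i (pd j (\<lambda>z. c * u z)) y = pd i (\<lambda>z. c * pd j u z) y"
    by (rule pd_cong) (auto simp: pd_cmult u y)
  also have "\<dots> = c * pd i (pd j u) y" by (simp add: pd_cmult smooth_pd u y)
  finally show ?thesis unfolding hess_def by (simp add: pd_cmult u y algebra_simps sum_distrib_left)
qed

lemma f_laplacian_cmult: assumes u: "smooth u" and y: "y \<in> U" shows "f_laplacian g f (\<lambda>z. c * u z) y = c * f_laplacian g f u y"
proof -
  have "laplacian g (\<lambda>z. c * u z) y = c * laplacian g u y"
    unfolding laplacian_def using hess_cmult[OF u y] by (simp add: sum_distrib_left mult_ac)
  moreover have "dir_grad g f (\<lambda>z. c * u z) y = c * dir_grad g f u y"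
    unfolding dir_grad_def using pd_cmult[OF u y] by (simp add: sum_distrib_left mult_ac)
  ultimately show ?thesis unfolding f_laplacian_def by (simp add: right_diff_distrib)
qed

definition nabla_mixed :: "('n \<Rightarrow> 'n \<Rightarrow> real^'n \<Rightarrow> real) \<Rightarrow> 'n \<Rightarrow> 'n \<Rightarrow> 'n \<Rightarrow> real^'n \<Rightarrow> real" where
  "nabla_mixed P q i j y = pd q (P i j) y + (\<Sum>p\<in>UNIV. \<Gamma> i q p y * P p j y) - (\<Sum>p\<in>UNIV. \<Gamma> p q j y * P i p y)"

lemma pd_trace_product: assumes P: "\<And>i j. smooth (P i j)" and S: "\<And>i j. smooth (S i j)" and y: "y \<in> U"
  shows "pd q (\<lambda>z. \<Sum>i\<in>UNIV. \<Sum>j\<in>UNIV. P i j z * S j i z) y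
     = (\<Sum>i\<in>UNIV. \<Sum>j\<in>UNIV. nabla_mixed P q i j y * S j i y + P i j y * nabla_mixed S q j i y)"
proof -
  have t14: "(\<Sum>i\<in>UNIV. \<Sum>j\<in>UNIV. \<Sum>p\<in>UNIV. \<Gamma> i q p y * P p j y * S j i y)
     = (\<Sum>i\<in>UNIV. \<Sum>j\<in>UNIV. \<Sum>p\<in>UNIV. P i j y * (\<Gamma> p q i y * S j p y))"
    by (subst sum_rev3) (simp add: mult_ac)
  have t23: "(\<Sum>i\<in>UNIV. \<Sum>j\<in>UNIV. \<Sum>p\<in>UNIV. \<Gamma> p q j y * P i p y * S j i y)
     = (\<Sum>i\<in>UNIV. \<Sum>j\<in>UNIV. \<Sum>p\<in>UNIV. P i j y * (\<Gamma> j q p y * S p i y))"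
    by (subst sum_swap23) (simp add: mult_ac)
  show ?thesis unfolding nabla_mixed_def using t14 t23 P S y
    by (simp add: pd_sum pd_mult smooth_mult smooth_UNIV_sum algebra_simps sum.distrib sum_subtractf sum_distrib_left sum_distrib_right)
qed

lemma nabla_mixed_raise: assumes T: "\<And>a b. smooth (T a b)" and y: "y \<in> U"
  shows "nabla_mixed (\<lambda>d a z. \<Sum>q\<in>UNIV. gi d q z * T a q z) e d a y = (\<Sum>q\<in>UNIV. gi d q y * nabla2 g T e a q y)"
  unfolding nabla_mixed_def using pd_raised_tensor[where T=T and e=e and d=d and a=a, OF T y] by simp

end

locale ricci_soliton_chart = riemannian_chart U g for U :: "(real^'n::finite) set" and g +
  fixes f :: "real^'n \<Rightarrow> real" and lam :: real
  assumes f_smooth: "smooth_on_coord U f"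
    and soliton_eq: "\<And>y i j. y \<in> U \<Longrightarrow> ric g i j y + hess g f i j y = lam * g i j y"
begin

abbreviation "H \<equiv> hess g f"

lemma df_smooth: "smooth (pd a f)" using f_smooth smooth_pd by blast
lemma H_smooth: "smooth (H a b)" using hess_smooth[OF f_smooth] .
lemma scal_smooth: "smooth (scal g)" unfolding scal_def[abs_def] by (intro smooth_UNIV_sum smooth_mult ginv_smooth ric_smooth)

lemma ric_eq_soliton: "y \<in> U \<Longrightarrow> ric g i j y = lam * g i j y - H i j y"
  using soliton_eq by (simp add: algebra_simps)

lemma ric_sym: "y \<in> U \<Longrightarrow> ric g i j y = ric g j i y"
  using ric_eq_soliton hess_sym[OF f_smooth] g_sym by simp

(* nabla Ric = - nabla Hess f, so the Ricci identity for df controls the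
   antisymmetrised derivative of Ric. *)
lemma nabla2_ric: assumes y: "y \<in> U" shows "nabla2 g (ric g) k a b y = - nabla2 g H k a b y"
proof -
  have "nabla2 g (ric g) k a b y = nabla2 g (\<lambda>a b z. lam * g a b z - H a b z) k a b y"
    by (rule nabla2_cong) (auto simp: ric_eq_soliton y)
  also have "\<dots> = lam * nabla2 g g k a b y - nabla2 g H k a b y"
    unfolding nabla2_def using y
    by (simp add: pd_diff pd_cmult smooth_mult smooth_const g_smooth H_smooth algebra_simps sum_subtractf sum_distrib_left)
  finally show ?thesis by (simp add: nabla2_g_zero y)
qed

lemma ricci_identity_ric: assumes y: "y \<in> U"
  shows "nabla2 g (ric g) i j c y - nabla2 g (ric g) j i c y = (\<Sum>m\<in>UNIV. Rm m i j c y * pd m f y)"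
  using ricci_identity_covector[where w="\<lambda>a. pd a f" and i=i and j=j and c=c, OF df_smooth y]
  by (simp add: nabla2_ric y hess_nabla1[symmetric])

lemma nabla2_ric_sym: "y \<in> U \<Longrightarrow> nabla2 g (ric g) k a b y = nabla2 g (ric g) k b a y"
  by (rule nabla2_sym) (auto simp: ric_sym)

lemma trace_g: "y \<in> U \<Longrightarrow> (\<Sum>i\<in>UNIV. \<Sum>j\<in>UNIV. gi i j y * g i j y) = of_nat CARD('n)"
  using ginv_g[of y] by (simp add: g_sym[of y] )

lemma laplacian_f: assumes y: "y \<in> U" shows "laplacian g f y = lam * of_nat CARD('n) - scal g y"
proof -
  have "laplacian g f y = (\<Sum>i\<in>UNIV. \<Sum>j\<in>UNIV. gi i j y * (lam * g i j y - ric g i j y))"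
    unfolding laplacian_def by (simp add: ric_eq_soliton y)
  also have "\<dots> = lam * (\<Sum>i\<in>UNIV. \<Sum>j\<in>UNIV. gi i j y * g i j y) - scal g y"
    unfolding scal_def by (simp add: algebra_simps sum_subtractf sum_distrib_left)
  finally show ?thesis by (simp add: trace_g y)
qed

lemma pd_laplacian_f: assumes y: "y \<in> U" shows "pd a (laplacian g f) y = - pd a (scal g) y"
proof -
  have "pd a (laplacian g f) y = pd a (\<lambda>z. lam * of_nat CARD('n) - scal g z) y"
    by (rule pd_cong) (auto simp: laplacian_f y)
  thus ?thesis by (simp add: pd_diff smooth_const scal_smooth y pd_const)
qed

definition ric_df :: "'n \<Rightarrow> real^'n \<Rightarrow> real" where
  "ric_df a y = (\<Sum>m\<in>UNIV. \<Sum>q\<in>UNIV. gi m q y * pd m f y * ric g a q y)"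

lemma ric_df_smooth: "smooth (ric_df a)" unfolding ric_df_def[abs_def] by (intro smooth_UNIV_sum smooth_mult ginv_smooth df_smooth ric_smooth)

(* dR = 2 Ric(grad f): compare the contracted Bianchi identity with the
   divergence of Hess f computed by the Ricci identity. *)
lemma pd_scal_soliton: assumes y: "y \<in> U" shows "pd a (scal g) y = 2 * ric_df a y"
proof -
  have cb: "(\<Sum>c\<in>UNIV. \<Sum>b\<in>UNIV. gi c b y * nabla2 g (ric g) c a b y) = pd a (scal g) y / 2"
    by (rule contracted_bianchi[OF y])
  have "(\<Sum>c\<in>UNIV. \<Sum>b\<in>UNIV. gi c b y * nabla2 g (ric g) c a b y) = - (\<Sum>c\<in>UNIV. \<Sum>b\<in>UNIV. gi c b y * nabla2 g H c b a y)"
  proof -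
    have hs: "\<And>c b. nabla2 g H c a b y = nabla2 g H c b a y" by (rule nabla2_sym) (auto simp: hess_sym[OF f_smooth] y)
    show ?thesis by (simp add: nabla2_ric y hs sum_negf)
  qed
  also have "\<dots> = - (pd a (laplacian g f) y + ric_df a y)"
    unfolding ric_df_def by (simp add: div_hess[OF f_smooth y])
  also have "\<dots> = pd a (scal g) y - ric_df a y" by (simp add: pd_laplacian_f y)
  finally show ?thesis using cb by simp
qed

abbreviation "ds a \<equiv> pd a (scal g)"

(* <Hess R, Hess f>, the second-order term of Bochner's formula for <dR, df>. *)
definition hess_pair :: "real^'n \<Rightarrow> real" where
  "hess_pair y = (\<Sum>k\<in>UNIV. \<Sum>l\<in>UNIV. \<Sum>a\<in>UNIV. \<Sum>b\<in>UNIV. gi k l y * gi a b y * hess g (scal g) k a y * H l b y)"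

lemma ric_dscal_df: assumes y: "y \<in> U"
  shows "(\<Sum>a\<in>UNIV. \<Sum>b\<in>UNIV. gi a b y * (\<Sum>m\<in>UNIV. \<Sum>q\<in>UNIV. gi m q y * ds m y * ric g a q y) * pd b f y)
    = (\<Sum>m\<in>UNIV. \<Sum>q\<in>UNIV. gi m q y * ds m y * ric_df q y)"
proof -
  have "(\<Sum>a\<in>UNIV. \<Sum>b\<in>UNIV. gi a b y * (\<Sum>m\<in>UNIV. \<Sum>q\<in>UNIV. gi m q y * ds m y * ric g a q y) * pd b f y)
     = (\<Sum>a\<in>UNIV. \<Sum>b\<in>UNIV. \<Sum>m\<in>UNIV. \<Sum>q\<in>UNIV. gi m q y * ds m y * (gi a b y * pd b f y * ric g a q y))"
    by (simp add: sum_distrib_left sum_distrib_right mult_ac)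
  also have "\<dots> = (\<Sum>m\<in>UNIV. \<Sum>q\<in>UNIV. \<Sum>a\<in>UNIV. \<Sum>b\<in>UNIV. gi m q y * ds m y * (gi a b y * pd b f y * ric g a q y))"
    by (rule sum_swap_pairs)
  also have "\<dots> = (\<Sum>m\<in>UNIV. \<Sum>q\<in>UNIV. \<Sum>b\<in>UNIV. \<Sum>a\<in>UNIV. gi m q y * ds m y * (gi b a y * pd b f y * ric g q a y))"
    by (rule sum.cong[OF refl], rule sum.cong[OF refl], subst sum.swap, rule sum.cong[OF refl], rule sum.cong[OF refl])
       (simp add: ginv_sym[OF y] ric_sym[OF y])
  also have "\<dots> = (\<Sum>m\<in>UNIV. \<Sum>q\<in>UNIV. gi m q y * ds m y * ric_df q y)"
    unfolding ric_df_def by (simp add: sum_distrib_left)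
  finally show ?thesis .
qed

(* Bochner's formula with u = R, w = f, simplified with dR = 2 Ric(grad f) and
   Delta f = n lambda - R:  Delta_f (D_{grad f} R) = D_{grad f} (Delta_f R) + 2 <Hess R, Hess f>. *)
lemma f_laplacian_dir_grad_scal: assumes y: "y \<in> U"
  shows "f_laplacian g f (dir_grad g f (scal g)) y = dir_grad g f (f_laplacian g f (scal g)) y + 2 * hess_pair y"
proof -
  let ?Q = "dir_grad g f (scal g)"
  have Qsm: "smooth ?Q" using dir_grad_smooth[OF f_smooth scal_smooth] .
  have boch: "laplacian g ?Q y = dir_grad g f (laplacian g (scal g)) y
    + (\<Sum>a\<in>UNIV. \<Sum>b\<in>UNIV. gi a b y * ds a y * pd b (laplacian g f) y) + 2 * hess_pair y
    + (\<Sum>a\<in>UNIV. \<Sum>b\<in>UNIV. gi a b y * (\<Sum>m\<in>UNIV. \<Sum>q\<in>UNIV. gi m q y * ds m y * ric g a q y) * pd b f y)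
    + (\<Sum>a\<in>UNIV. \<Sum>b\<in>UNIV. gi a b y * ds a y * (\<Sum>m\<in>UNIV. \<Sum>q\<in>UNIV. gi m q y * pd m f y * ric g b q y))"
    unfolding dir_grad_sym_form hess_pair_def using bochner[OF scal_smooth f_smooth y] by simp
  have dd: "dir_grad g f (f_laplacian g f (scal g)) y = dir_grad g f (laplacian g (scal g)) y - dir_grad g f ?Q y"
  proof -
    have "\<And>i. pd i (f_laplacian g f (scal g)) y = pd i (laplacian g (scal g)) y - pd i ?Q y"
      unfolding f_laplacian_def[abs_def] by (rule pd_diff[OF laplacian_smooth[OF scal_smooth] Qsm y])
    thus ?thesis unfolding dir_grad_def[of g f] by (simp add: right_diff_distrib sum_subtractf)
  qed
  have tb: "(\<Sum>a\<in>UNIV. \<Sum>b\<in>UNIV. gi a b y * ds a y * pd b (laplacian g f) y)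
      = - (\<Sum>a\<in>UNIV. \<Sum>b\<in>UNIV. gi a b y * ds a y * ds b y)"
    by (simp add: pd_laplacian_f y sum_negf)
  have te: "(\<Sum>a\<in>UNIV. \<Sum>b\<in>UNIV. gi a b y * ds a y * (\<Sum>m\<in>UNIV. \<Sum>q\<in>UNIV. gi m q y * pd m f y * ric g b q y))
      = (\<Sum>a\<in>UNIV. \<Sum>b\<in>UNIV. gi a b y * ds a y * ds b y) / 2"
  proof -
    have r: "\<And>b. (\<Sum>m\<in>UNIV. \<Sum>q\<in>UNIV. gi m q y * pd m f y * ric g b q y) = ric_df b y" by (simp add: ric_df_def)
    have "(\<Sum>a\<in>UNIV. \<Sum>b\<in>UNIV. gi a b y * ds a y * ds b y) / 2 = (\<Sum>a\<in>UNIV. \<Sum>b\<in>UNIV. gi a b y * ds a y * (2 * ric_df b y)) / 2"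
      by (simp only: pd_scal_soliton[OF y])
    also have "\<dots> = (\<Sum>a\<in>UNIV. \<Sum>b\<in>UNIV. gi a b y * ds a y * ric_df b y)"
      by (simp add: sum_divide_distrib mult_ac)
    finally show ?thesis by (simp only: r)
  qed
  have td: "(\<Sum>a\<in>UNIV. \<Sum>b\<in>UNIV. gi a b y * (\<Sum>m\<in>UNIV. \<Sum>q\<in>UNIV. gi m q y * ds m y * ric g a q y) * pd b f y)
      = (\<Sum>a\<in>UNIV. \<Sum>b\<in>UNIV. gi a b y * ds a y * ds b y) / 2"
    unfolding ric_dscal_df[OF y] by (simp add: pd_scal_soliton[OF y, of b for b] sum_divide_distrib sum_distrib_left mult_ac)
  show ?thesis unfolding f_laplacian_def[of g f ?Q] using boch dd tb te td by linarith
qed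

lemma nabla_ric_df: assumes y: "y \<in> U"
  shows "nabla1 g ric_df k a y = (\<Sum>m\<in>UNIV. \<Sum>q\<in>UNIV. gi m q y * (H k m y * ric g a q y + pd m f y * nabla2 g (ric g) k a q y))"
proof -
  have e: "ric_df = (\<lambda>l z. \<Sum>m\<in>UNIV. \<Sum>q\<in>UNIV. gi m q z * (\<lambda>l m q z. pd m f z * ric g l q z) l m q z)"
    by (intro ext) (simp add: ric_df_def mult.assoc)
  have "nabla1 g ric_df k a y = (\<Sum>m\<in>UNIV. \<Sum>q\<in>UNIV. gi m q y * nabla3 g (\<lambda>l m q z. pd m f z * ric g l q z) k a m q y)"
    by (subst e, rule nabla1_trace) (auto intro!: smooth_mult df_smooth ric_smooth y)
  also have "\<dots> = (\<Sum>m\<in>UNIV. \<Sum>q\<in>UNIV. gi m q y * (H k m y * ric g a q y + pd m f y * nabla2 g (ric g) k a q y))"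
    using nabla3_prod12[where X="ric g" and Y="\<lambda>m. pd m f", OF ric_smooth df_smooth y] by (simp add: hess_nabla1)
  finally show ?thesis .
qed

lemma hess_scal: assumes y: "y \<in> U" shows "hess g (scal g) k a y = 2 * nabla1 g ric_df k a y"
proof -
  have "hess g (scal g) k a y = nabla1 g (\<lambda>a z. 2 * ric_df a z) k a y"
    unfolding hess_nabla1 by (rule nabla1_cong) (auto simp: pd_scal_soliton y)
  also have "\<dots> = 2 * nabla1 g ric_df k a y"
    unfolding nabla1_def using y by (simp add: pd_cmult ric_df_smooth algebra_simps sum_distrib_left)
  finally show ?thesis .
qed

lemma div_ric: assumes y: "y \<in> U" shows "(\<Sum>k\<in>UNIV. \<Sum>l\<in>UNIV. gi k l y * nabla2 g (ric g) k l q y) = ds q y / 2"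
  using contracted_bianchi[OF y, of q] by (simp add: nabla2_ric_sym[OF y, of _ _ q])

lemma trace_contract: assumes y: "y \<in> U"
  shows "(\<Sum>k\<in>UNIV. \<Sum>l\<in>UNIV. \<Sum>m\<in>UNIV. \<Sum>q\<in>UNIV. gi k l y * gi m q y * g k m y * T l q) = (\<Sum>l\<in>UNIV. \<Sum>q\<in>UNIV. gi l q y * T l q)"
proof -
  have "(\<Sum>k\<in>UNIV. \<Sum>l\<in>UNIV. \<Sum>m\<in>UNIV. \<Sum>q\<in>UNIV. gi k l y * gi m q y * g k m y * T l q)
     = (\<Sum>l\<in>UNIV. \<Sum>k\<in>UNIV. \<Sum>m\<in>UNIV. \<Sum>q\<in>UNIV. gi k l y * gi m q y * g k m y * T l q)" by (rule sum.swap)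
  also have "\<dots> = (\<Sum>l\<in>UNIV. \<Sum>m\<in>UNIV. (\<Sum>k\<in>UNIV. gi l k y * g k m y) * (\<Sum>q\<in>UNIV. gi m q y * T l q))"
    by (rule sum.cong[OF refl], subst sum.swap) (simp add: sum_distrib_left sum_distrib_right ginv_sym[OF y, of _ l for l] mult_ac)
  also have "\<dots> = (\<Sum>l\<in>UNIV. \<Sum>q\<in>UNIV. gi l q y * T l q)" by (simp add: ginv_g[OF y])
  finally show ?thesis .
qed

lemma lap_scal: assumes y: "y \<in> U"
  shows "laplacian g (scal g) y = 2 * lam * scal g y - 2 * ric_norm2 g y + dir_grad g f (scal g) y"
proof -
  have "laplacian g (scal g) y = 2 * (\<Sum>k\<in>UNIV. \<Sum>l\<in>UNIV. \<Sum>m\<in>UNIV. \<Sum>q\<in>UNIV. gi k l y * gi m q y * H k m y * ric g l q y)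
      + 2 * (\<Sum>m\<in>UNIV. \<Sum>q\<in>UNIV. gi m q y * pd m f y * (\<Sum>k\<in>UNIV. \<Sum>l\<in>UNIV. gi k l y * nabla2 g (ric g) k l q y))"
  proof -
    have "laplacian g (scal g) y = 2 * (\<Sum>k\<in>UNIV. \<Sum>l\<in>UNIV. \<Sum>m\<in>UNIV. \<Sum>q\<in>UNIV. gi k l y * gi m q y * H k m y * ric g l q y)
      + 2 * (\<Sum>k\<in>UNIV. \<Sum>l\<in>UNIV. \<Sum>m\<in>UNIV. \<Sum>q\<in>UNIV. gi k l y * (gi m q y * pd m f y * nabla2 g (ric g) k l q y))"
      unfolding laplacian_def hess_scal[OF y] nabla_ric_df[OF y]
      by (simp add: algebra_simps sum.distrib sum_distrib_left)
    also have "(\<Sum>k\<in>UNIV. \<Sum>l\<in>UNIV. \<Sum>m\<in>UNIV. \<Sum>q\<in>UNIV. gi k l y * (gi m q y * pd m f y * nabla2 g (ric g) k l q y))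
       = (\<Sum>m\<in>UNIV. \<Sum>q\<in>UNIV. \<Sum>k\<in>UNIV. \<Sum>l\<in>UNIV. gi k l y * (gi m q y * pd m f y * nabla2 g (ric g) k l q y))"
      by (rule sum_swap_pairs)
    finally show ?thesis by (simp add: sum_distrib_left mult_ac)
  qed
  also have "(\<Sum>k\<in>UNIV. \<Sum>l\<in>UNIV. \<Sum>m\<in>UNIV. \<Sum>q\<in>UNIV. gi k l y * gi m q y * H k m y * ric g l q y)
     = lam * scal g y - ric_norm2 g y"
  proof -
    have "(\<Sum>k\<in>UNIV. \<Sum>l\<in>UNIV. \<Sum>m\<in>UNIV. \<Sum>q\<in>UNIV. gi k l y * gi m q y * H k m y * ric g l q y)
      = lam * (\<Sum>k\<in>UNIV. \<Sum>l\<in>UNIV. \<Sum>m\<in>UNIV. \<Sum>q\<in>UNIV. gi k l y * gi m q y * g k m y * ric g l q y)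
        - (\<Sum>k\<in>UNIV. \<Sum>l\<in>UNIV. \<Sum>m\<in>UNIV. \<Sum>q\<in>UNIV. gi k l y * gi m q y * ric g k m y * ric g l q y)"
    proof -
      have hr: "\<And>i j. H i j y = lam * g i j y - ric g i j y" using ric_eq_soliton[OF y] by simp
      show ?thesis by (simp only: hr) (simp add: algebra_simps sum_subtractf sum_distrib_left)
    qed
    also have "(\<Sum>k\<in>UNIV. \<Sum>l\<in>UNIV. \<Sum>m\<in>UNIV. \<Sum>q\<in>UNIV. gi k l y * gi m q y * g k m y * ric g l q y) = scal g y"
      unfolding trace_contract[OF y] scal_def ..
    also have "(\<Sum>k\<in>UNIV. \<Sum>l\<in>UNIV. \<Sum>m\<in>UNIV. \<Sum>q\<in>UNIV. gi k l y * gi m q y * ric g k m y * ric g l q y) = ric_norm2 g y"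
      unfolding ric_norm2_def by (rule sum.cong[OF refl], subst sum.swap) (simp add: mult_ac)
    finally show ?thesis .
  qed
  also have "(\<Sum>m\<in>UNIV. \<Sum>q\<in>UNIV. gi m q y * pd m f y * (\<Sum>k\<in>UNIV. \<Sum>l\<in>UNIV. gi k l y * nabla2 g (ric g) k l q y))
      = dir_grad g f (scal g) y / 2"
    unfolding div_ric[OF y] dir_grad_sym_form
    by (simp add: sum_divide_distrib, subst sum.swap, simp add: ginv_sym[OF y] mult_ac)
  finally show ?thesis by (simp add: algebra_simps)
qed

lemma f_laplacian_scal: "y \<in> U \<Longrightarrow> f_laplacian g f (scal g) y = 2 * lam * scal g y - 2 * ric_norm2 g y"
  unfolding f_laplacian_def by (simp add: lap_scal)

definition ric_raised :: "'n \<Rightarrow> 'n \<Rightarrow> real^'n \<Rightarrow> real" where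
  "ric_raised k a y = (\<Sum>l\<in>UNIV. \<Sum>b\<in>UNIV. gi k l y * gi a b y * ric g l b y)"

lemma ric_norm2_trace_form: assumes y: "y \<in> U"
  shows "ric_norm2 g y = (\<Sum>i\<in>UNIV. \<Sum>j\<in>UNIV. (\<Sum>r\<in>UNIV. gi i r y * ric g j r y) * (\<Sum>s\<in>UNIV. gi j s y * ric g i s y))"
proof -
  have "ric_norm2 g y = (\<Sum>i\<in>UNIV. \<Sum>j\<in>UNIV. \<Sum>a\<in>UNIV. \<Sum>b\<in>UNIV. gi i a y * gi j b y * ric g i j y * ric g a b y)"
    by (simp add: ric_norm2_def)
  also have "\<dots> = (\<Sum>i\<in>UNIV. \<Sum>b\<in>UNIV. \<Sum>j\<in>UNIV. \<Sum>a\<in>UNIV. gi i a y * gi j b y * ric g i j y * ric g a b y)"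
    by (rule sum.cong[OF refl], rule sum_rot3')
  also have "\<dots> = (\<Sum>i\<in>UNIV. \<Sum>j\<in>UNIV. (\<Sum>r\<in>UNIV. gi i r y * ric g j r y) * (\<Sum>s\<in>UNIV. gi j s y * ric g i s y))"
    by (simp add: sum_distrib_left sum_distrib_right mult_ac ginv_sym[OF y, of j b for j b] ric_sym[OF y, of a b for a b])
  finally show ?thesis .
qed

lemma pd_ric_norm2: assumes y: "y \<in> U"
  shows "pd q (ric_norm2 g) y = 2 * (\<Sum>k\<in>UNIV. \<Sum>a\<in>UNIV. nabla2 g (ric g) q k a y * ric_raised k a y)"
proof -
  define M where "M = (\<lambda>d a z. \<Sum>r\<in>UNIV. gi d r z * ric g a r z)"
  have Ms: "\<And>i j. smooth (M i j)" unfolding M_def by (intro smooth_UNIV_sum smooth_mult ginv_smooth ric_smooth)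
  have "pd q (ric_norm2 g) y = pd q (\<lambda>z. \<Sum>i\<in>UNIV. \<Sum>j\<in>UNIV. M i j z * M j i z) y"
    by (rule pd_cong) (auto simp: ric_norm2_trace_form M_def y)
  also have "\<dots> = (\<Sum>i\<in>UNIV. \<Sum>j\<in>UNIV. nabla_mixed M q i j y * M j i y + M i j y * nabla_mixed M q j i y)"
    by (rule pd_trace_product[OF Ms Ms y])
  also have "\<dots> = 2 * (\<Sum>i\<in>UNIV. \<Sum>j\<in>UNIV. nabla_mixed M q i j y * M j i y)"
  proof -
    have "(\<Sum>i\<in>UNIV. \<Sum>j\<in>UNIV. M i j y * nabla_mixed M q j i y) = (\<Sum>i\<in>UNIV. \<Sum>j\<in>UNIV. nabla_mixed M q i j y * M j i y)"
      by (subst sum.swap) (simp add: mult.commute)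
    thus ?thesis by (simp add: sum.distrib)
  qed
  also have "(\<Sum>i\<in>UNIV. \<Sum>j\<in>UNIV. nabla_mixed M q i j y * M j i y)
      = (\<Sum>i\<in>UNIV. \<Sum>j\<in>UNIV. (\<Sum>r\<in>UNIV. gi i r y * nabla2 g (ric g) q j r y) * (\<Sum>s\<in>UNIV. gi j s y * ric g i s y))"
    unfolding M_def by (simp add: nabla_mixed_raise[OF ric_smooth y])
  also have "\<dots> = (\<Sum>k\<in>UNIV. \<Sum>a\<in>UNIV. nabla2 g (ric g) q k a y * ric_raised k a y)"
  proof -
    have "(\<Sum>i\<in>UNIV. \<Sum>j\<in>UNIV. (\<Sum>r\<in>UNIV. gi i r y * nabla2 g (ric g) q j r y) * (\<Sum>s\<in>UNIV. gi j s y * ric g i s y))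
       = (\<Sum>i\<in>UNIV. \<Sum>j\<in>UNIV. \<Sum>r\<in>UNIV. \<Sum>s\<in>UNIV. nabla2 g (ric g) q j r y * (gi j s y * gi r i y * ric g s i y))"
      by (simp add: sum_distrib_left sum_distrib_right ginv_sym[OF y, of _ i for i] ric_sym[OF y, of _ s for s] mult_ac)
    also have "\<dots> = (\<Sum>j\<in>UNIV. \<Sum>r\<in>UNIV. \<Sum>s\<in>UNIV. \<Sum>i\<in>UNIV. nabla2 g (ric g) q j r y * (gi j s y * gi r i y * ric g s i y))"
    proof -
      have "(\<Sum>i\<in>UNIV. \<Sum>j\<in>UNIV. \<Sum>r\<in>UNIV. \<Sum>s\<in>UNIV. nabla2 g (ric g) q j r y * (gi j s y * gi r i y * ric g s i y))
         = (\<Sum>j\<in>UNIV. \<Sum>r\<in>UNIV. \<Sum>i\<in>UNIV. \<Sum>s\<in>UNIV. nabla2 g (ric g) q j r y * (gi j s y * gi r i y * ric g s i y))"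
        by (rule sum_rot3)
      also have "\<dots> = (\<Sum>j\<in>UNIV. \<Sum>r\<in>UNIV. \<Sum>s\<in>UNIV. \<Sum>i\<in>UNIV. nabla2 g (ric g) q j r y * (gi j s y * gi r i y * ric g s i y))"
        by (rule sum.cong[OF refl], rule sum.cong[OF refl], rule sum.swap)
      finally show ?thesis .
    qed
    also have "\<dots> = (\<Sum>k\<in>UNIV. \<Sum>a\<in>UNIV. nabla2 g (ric g) q k a y * ric_raised k a y)"
      unfolding ric_raised_def by (simp add: sum_distrib_left mult_ac)
    finally show ?thesis .
  qed
  finally show ?thesis .
qed

lemma ric_norm2_smooth: "smooth (ric_norm2 g)"
  unfolding ric_norm2_def[abs_def] by (intro smooth_UNIV_sum smooth_mult ginv_smooth ric_smooth)

abbreviation "V \<equiv> grad g f"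

definition hess_raised :: "'n \<Rightarrow> 'n \<Rightarrow> real^'n \<Rightarrow> real" where
  "hess_raised k a y = (\<Sum>l\<in>UNIV. \<Sum>b\<in>UNIV. gi k l y * gi a b y * H l b y)"

lemma grad_contract: assumes y: "y \<in> U" shows "(\<Sum>m\<in>UNIV. gi m q y * pd m f y) = V q y"
  unfolding grad_def by (rule sum.cong) (auto simp: ginv_sym[OF y])

lemma ric_df_grad: assumes y: "y \<in> U" shows "ric_df a y = (\<Sum>q\<in>UNIV. ric g a q y * V q y)"
proof -
  have "ric_df a y = (\<Sum>q\<in>UNIV. \<Sum>m\<in>UNIV. gi m q y * pd m f y * ric g a q y)"
    unfolding ric_df_def by (rule sum.swap)
  also have "\<dots> = (\<Sum>q\<in>UNIV. ric g a q y * V q y)"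
    by (simp add: grad_contract[OF y, symmetric] sum_distrib_left sum_distrib_right mult_ac)
  finally show ?thesis .
qed

lemma dir_grad_scal: assumes y: "y \<in> U" shows "dir_grad g f (scal g) y = 2 * ric_grad_grad g f y"
proof -
  have "dir_grad g f (scal g) y = (\<Sum>a\<in>UNIV. V a y * ds a y)" by (simp add: dir_grad_def)
  also have "\<dots> = 2 * (\<Sum>a\<in>UNIV. \<Sum>q\<in>UNIV. ric g a q y * V a y * V q y)"
    by (simp add: pd_scal_soliton[OF y] ric_df_grad[OF y] sum_distrib_left sum_distrib_right mult_ac)
  finally show ?thesis unfolding ric_grad_grad_def .
qed

lemma hess_raised_eq: assumes y: "y \<in> U" shows "hess_raised k a y = lam * gi k a y - ric_raised k a y"
proof -
  have hr: "\<And>i j. H i j y = lam * g i j y - ric g i j y" using ric_eq_soliton[OF y] by simp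
  have c: "(\<Sum>l\<in>UNIV. \<Sum>b\<in>UNIV. gi k l y * gi a b y * g l b y) = gi k a y"
  proof -
    have "(\<Sum>l\<in>UNIV. \<Sum>b\<in>UNIV. gi k l y * gi a b y * g l b y) = (\<Sum>l\<in>UNIV. gi k l y * (\<Sum>b\<in>UNIV. g l b y * gi b a y))"
      by (simp add: sum_distrib_left ginv_sym[OF y, of a] mult_ac)
    also have "\<dots> = gi k a y" by (simp add: g_ginv[OF y])
    finally show ?thesis .
  qed
  have "hess_raised k a y = lam * (\<Sum>l\<in>UNIV. \<Sum>b\<in>UNIV. gi k l y * gi a b y * g l b y) - ric_raised k a y"
    unfolding hess_raised_def ric_raised_def by (simp only: hr) (simp add: algebra_simps sum_subtractf sum_distrib_left)
  thus ?thesis using c by simp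
qed

lemma ric_raised_sym: assumes y: "y \<in> U" shows "ric_raised k a y = ric_raised a k y"
  unfolding ric_raised_def by (subst sum.swap) (simp add: ric_sym[OF y, of _ b for b] mult_ac)

lemma hess_pair_split: assumes y: "y \<in> U"
  shows "hess_pair y = 2 * (\<Sum>k\<in>UNIV. \<Sum>a\<in>UNIV. (\<Sum>m\<in>UNIV. \<Sum>q\<in>UNIV. gi m q y * H k m y * ric g a q y) * hess_raised k a y)
     + 2 * (\<Sum>k\<in>UNIV. \<Sum>a\<in>UNIV. (\<Sum>q\<in>UNIV. V q y * nabla2 g (ric g) k a q y) * hess_raised k a y)"
proof -
  have "hess_pair y = (\<Sum>k\<in>UNIV. \<Sum>a\<in>UNIV. \<Sum>l\<in>UNIV. \<Sum>b\<in>UNIV. gi k l y * gi a b y * hess g (scal g) k a y * H l b y)"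
    unfolding hess_pair_def by (rule sum.cong[OF refl], rule sum.swap)
  also have "\<dots> = (\<Sum>k\<in>UNIV. \<Sum>a\<in>UNIV. hess g (scal g) k a y * hess_raised k a y)"
    unfolding hess_raised_def by (simp add: sum_distrib_left mult_ac)
  also have "\<dots> = (\<Sum>k\<in>UNIV. \<Sum>a\<in>UNIV. 2 * ((\<Sum>m\<in>UNIV. \<Sum>q\<in>UNIV. gi m q y * H k m y * ric g a q y)
      + (\<Sum>q\<in>UNIV. V q y * nabla2 g (ric g) k a q y)) * hess_raised k a y)"
  proof (rule sum.cong[OF refl], rule sum.cong[OF refl])
    fix k a
    have "(\<Sum>m\<in>UNIV. \<Sum>q\<in>UNIV. gi m q y * pd m f y * nabla2 g (ric g) k a q y) = (\<Sum>q\<in>UNIV. V q y * nabla2 g (ric g) k a q y)"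
      by (subst sum.swap) (simp add: grad_contract[OF y, symmetric] sum_distrib_right)
    thus "hess g (scal g) k a y * hess_raised k a y = 2 * ((\<Sum>m\<in>UNIV. \<Sum>q\<in>UNIV. gi m q y * H k m y * ric g a q y)
      + (\<Sum>q\<in>UNIV. V q y * nabla2 g (ric g) k a q y)) * hess_raised k a y"
      unfolding hess_scal[OF y] nabla_ric_df[OF y] by (simp add: algebra_simps sum.distrib)
  qed
  finally show ?thesis by (simp add: algebra_simps sum.distrib sum_distrib_left)
qed

abbreviation "A \<equiv> hess_up g f"

lemma hess_ric_part: assumes y: "y \<in> U"
  shows "(\<Sum>k\<in>UNIV. \<Sum>a\<in>UNIV. (\<Sum>m\<in>UNIV. \<Sum>q\<in>UNIV. gi m q y * H k m y * ric g a q y) * hess_raised k a y) = ric_hess_term g f y"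
proof -
  have i: "(\<Sum>m\<in>UNIV. \<Sum>q\<in>UNIV. gi m q y * H k m y * ric g a q y) = (\<Sum>q\<in>UNIV. A q k y * ric g a q y)" for k a
  proof -
    have "(\<Sum>m\<in>UNIV. \<Sum>q\<in>UNIV. gi m q y * H k m y * ric g a q y) = (\<Sum>q\<in>UNIV. \<Sum>m\<in>UNIV. gi m q y * H k m y * ric g a q y)"
      by (rule sum.swap)
    also have "\<dots> = (\<Sum>q\<in>UNIV. A q k y * ric g a q y)"
      unfolding hess_up_def by (simp add: sum_distrib_right ginv_sym[OF y, of _ q for q])
    finally show ?thesis .
  qed
  have ii: "hess_raised k a y = (\<Sum>l\<in>UNIV. gi k l y * A a l y)" for k a
    unfolding hess_raised_def hess_up_def by (simp add: sum_distrib_left mult_ac)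
  have "(\<Sum>k\<in>UNIV. \<Sum>a\<in>UNIV. (\<Sum>m\<in>UNIV. \<Sum>q\<in>UNIV. gi m q y * H k m y * ric g a q y) * hess_raised k a y)
     = (\<Sum>k\<in>UNIV. \<Sum>a\<in>UNIV. \<Sum>q\<in>UNIV. \<Sum>l\<in>UNIV. ric g a q y * A q k y * gi k l y * A a l y)"
    unfolding i ii by (simp add: sum_distrib_left sum_distrib_right mult_ac)
  also have "\<dots> = (\<Sum>k\<in>UNIV. \<Sum>l\<in>UNIV. \<Sum>q\<in>UNIV. \<Sum>a\<in>UNIV. ric g a q y * A q k y * gi k l y * A a l y)"
    by (rule sum.cong[OF refl], rule sum_rev3)
  also have "\<dots> = ric_hess_term g f y"
    unfolding ric_hess_term_def by (simp add: ric_sym[OF y, of _ q for q] mult_ac)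
  finally show ?thesis .
qed

definition curv_part :: "real^'n \<Rightarrow> real" where
  "curv_part y = (\<Sum>k\<in>UNIV. \<Sum>a\<in>UNIV. (\<Sum>q\<in>UNIV. V q y * (\<Sum>m\<in>UNIV. Rm m k q a y * pd m f y)) * ric_raised k a y)"

lemma trace_nabla_ric_along_grad: assumes y: "y \<in> U"
  shows "(\<Sum>k\<in>UNIV. \<Sum>a\<in>UNIV. (\<Sum>q\<in>UNIV. V q y * nabla2 g (ric g) k a q y) * gi k a y) = dir_grad g f (scal g) y / 2"
proof -
  have "(\<Sum>k\<in>UNIV. \<Sum>a\<in>UNIV. (\<Sum>q\<in>UNIV. V q y * nabla2 g (ric g) k a q y) * gi k a y)
     = (\<Sum>k\<in>UNIV. \<Sum>a\<in>UNIV. \<Sum>q\<in>UNIV. V q y * (gi k a y * nabla2 g (ric g) k a q y))"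
    by (simp add: sum_distrib_right sum_distrib_left mult_ac)
  also have "\<dots> = (\<Sum>q\<in>UNIV. \<Sum>k\<in>UNIV. \<Sum>a\<in>UNIV. V q y * (gi k a y * nabla2 g (ric g) k a q y))"
    by (rule sum_rot3')
  also have "\<dots> = (\<Sum>q\<in>UNIV. V q y * (ds q y / 2))"
    by (simp add: sum_distrib_left[symmetric] div_ric[OF y])
  finally show ?thesis by (simp add: dir_grad_def sum_divide_distrib)
qed

lemma nabla_ric_ric_along_grad: assumes y: "y \<in> U"
  shows "(\<Sum>k\<in>UNIV. \<Sum>a\<in>UNIV. (\<Sum>q\<in>UNIV. V q y * nabla2 g (ric g) q k a y) * ric_raised k a y) = dir_grad g f (ric_norm2 g) y / 2"
proof -
  have "(\<Sum>k\<in>UNIV. \<Sum>a\<in>UNIV. (\<Sum>q\<in>UNIV. V q y * nabla2 g (ric g) q k a y) * ric_raised k a y)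
     = (\<Sum>k\<in>UNIV. \<Sum>a\<in>UNIV. \<Sum>q\<in>UNIV. V q y * (nabla2 g (ric g) q k a y * ric_raised k a y))"
    by (simp add: sum_distrib_right sum_distrib_left mult_ac)
  also have "\<dots> = (\<Sum>q\<in>UNIV. \<Sum>k\<in>UNIV. \<Sum>a\<in>UNIV. V q y * (nabla2 g (ric g) q k a y * ric_raised k a y))"
    by (rule sum_rot3')
  also have "\<dots> = (\<Sum>q\<in>UNIV. V q y * (pd q (ric_norm2 g) y / 2))"
    by (simp add: sum_distrib_left[symmetric] pd_ric_norm2[OF y])
  finally show ?thesis by (simp add: dir_grad_def sum_divide_distrib)
qed

(* In the nabla Ric part, the Ricci identity moves the derivative onto the
   direction grad f, producing derivatives of R and |Ric|^2 plus the curvature part. *)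
lemma nabla_ric_part: assumes y: "y \<in> U"
  shows "(\<Sum>k\<in>UNIV. \<Sum>a\<in>UNIV. (\<Sum>q\<in>UNIV. V q y * nabla2 g (ric g) k a q y) * hess_raised k a y)
     = lam * dir_grad g f (scal g) y / 2 - dir_grad g f (ric_norm2 g) y / 2 - curv_part y"
proof -
  have cr: "nabla2 g (ric g) k a q y = nabla2 g (ric g) q k a y + (\<Sum>m\<in>UNIV. Rm m k q a y * pd m f y)" for k a q
    using nabla2_ric_sym[OF y, of k a q] ricci_identity_ric[OF y, of k q a] by simp
  have "(\<Sum>k\<in>UNIV. \<Sum>a\<in>UNIV. (\<Sum>q\<in>UNIV. V q y * nabla2 g (ric g) k a q y) * hess_raised k a y)
     = lam * (\<Sum>k\<in>UNIV. \<Sum>a\<in>UNIV. (\<Sum>q\<in>UNIV. V q y * nabla2 g (ric g) k a q y) * gi k a y)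
       - (\<Sum>k\<in>UNIV. \<Sum>a\<in>UNIV. (\<Sum>q\<in>UNIV. V q y * nabla2 g (ric g) k a q y) * ric_raised k a y)"
    by (simp add: hess_raised_eq[OF y] algebra_simps sum_subtractf sum_distrib_left)
  also have "(\<Sum>k\<in>UNIV. \<Sum>a\<in>UNIV. (\<Sum>q\<in>UNIV. V q y * nabla2 g (ric g) k a q y) * ric_raised k a y)
     = (\<Sum>k\<in>UNIV. \<Sum>a\<in>UNIV. (\<Sum>q\<in>UNIV. V q y * nabla2 g (ric g) q k a y) * ric_raised k a y) + curv_part y"
  proof -
    have "\<And>k a. (\<Sum>q\<in>UNIV. V q y * nabla2 g (ric g) k a q y)
       = (\<Sum>q\<in>UNIV. V q y * nabla2 g (ric g) q k a y) + (\<Sum>q\<in>UNIV. V q y * (\<Sum>m\<in>UNIV. Rm m k q a y * pd m f y))"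
      by (subst sum.distrib[symmetric], rule sum.cong[OF refl], subst cr, simp add: distrib_left)
    thus ?thesis unfolding curv_part_def by (simp add: distrib_right sum.distrib)
  qed
  finally show ?thesis
    using trace_nabla_ric_along_grad[OF y] nabla_ric_ric_along_grad[OF y] by simp
qed

lemma riem_up_df_lower: assumes y: "y \<in> U"
  shows "(\<Sum>m\<in>UNIV. Rm m k q a y * pd m f y) = (\<Sum>s\<in>UNIV. riem g k q a s y * V s y)"
proof -
  have "(\<Sum>s\<in>UNIV. riem g k q a s y * V s y) = (\<Sum>s\<in>UNIV. \<Sum>p\<in>UNIV. \<Sum>j\<in>UNIV. Rm p k q a y * (g p s y * gi s j y * pd j f y))"
    unfolding riem_def grad_def by (simp add: sum_distrib_left sum_distrib_right mult_ac)
  also have "\<dots> = (\<Sum>p\<in>UNIV. \<Sum>j\<in>UNIV. \<Sum>s\<in>UNIV. Rm p k q a y * (g p s y * gi s j y * pd j f y))"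
    by (rule sum_rot3)
  also have "\<dots> = (\<Sum>p\<in>UNIV. \<Sum>j\<in>UNIV. Rm p k q a y * pd j f y * (\<Sum>s\<in>UNIV. g p s y * gi s j y))"
    by (simp add: sum_distrib_left mult_ac)
  also have "\<dots> = (\<Sum>m\<in>UNIV. Rm m k q a y * pd m f y)"
    by (simp add: g_ginv[OF y] mult.assoc[symmetric])
  finally show ?thesis by simp
qed

lemma riem_ric_term_raised: assumes y: "y \<in> U"
  shows "riem_ric_term g f y
    = (\<Sum>i\<in>UNIV. \<Sum>a\<in>UNIV. \<Sum>k\<in>UNIV. \<Sum>b\<in>UNIV. riem g a i k b y * V a y * V b y * ric_raised k i y)"
proof -
  have "riem_ric_term g f y = (\<Sum>i\<in>UNIV. \<Sum>a\<in>UNIV. \<Sum>k\<in>UNIV. \<Sum>b\<in>UNIV. \<Sum>j\<in>UNIV.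
      gi i j y * riem g a i k b y * V a y * ric_up g k j y * V b y)"
  proof -
    have "riem_ric_term g f y = (\<Sum>i\<in>UNIV. \<Sum>j\<in>UNIV. \<Sum>a\<in>UNIV. \<Sum>k\<in>UNIV. \<Sum>b\<in>UNIV.
      gi i j y * riem g a i k b y * V a y * ric_up g k j y * V b y)" by (simp add: riem_ric_term_def)
    also have "\<dots> = (\<Sum>i\<in>UNIV. \<Sum>a\<in>UNIV. \<Sum>j\<in>UNIV. \<Sum>k\<in>UNIV. \<Sum>b\<in>UNIV.
      gi i j y * riem g a i k b y * V a y * ric_up g k j y * V b y)"
      by (rule sum.cong[OF refl], rule sum.swap)
    also have "\<dots> = (\<Sum>i\<in>UNIV. \<Sum>a\<in>UNIV. \<Sum>k\<in>UNIV. \<Sum>b\<in>UNIV. \<Sum>j\<in>UNIV.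
      gi i j y * riem g a i k b y * V a y * ric_up g k j y * V b y)"
      by (rule sum.cong[OF refl], rule sum.cong[OF refl], rule sum_rot3)
    finally show ?thesis .
  qed
  also have "\<dots> = (\<Sum>i\<in>UNIV. \<Sum>a\<in>UNIV. \<Sum>k\<in>UNIV. \<Sum>b\<in>UNIV. riem g a i k b y * V a y * V b y * ric_raised k i y)"
  proof (intro sum.cong refl)
    fix i a k b
    have "(\<Sum>j\<in>UNIV. gi i j y * ric_up g k j y) = ric_raised k i y"
      unfolding ric_up_def ric_raised_def by (subst sum.swap) (simp add: sum_distrib_left mult_ac)
    moreover have "(\<Sum>j\<in>UNIV. gi i j y * riem g a i k b y * V a y * ric_up g k j y * V b y)
       = (\<Sum>j\<in>UNIV. gi i j y * ric_up g k j y) * (riem g a i k b y * V a y * V b y)"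
      by (simp add: sum_distrib_right sum_distrib_left mult_ac)
    ultimately show "(\<Sum>j\<in>UNIV. gi i j y * riem g a i k b y * V a y * ric_up g k j y * V b y) = riem g a i k b y * V a y * V b y * ric_raised k i y"
      by (simp add: mult_ac)
  qed
  finally show ?thesis .
qed

(* The curvature part is minus the curvature term of the theorem, by the
   antisymmetry of R in its first two arguments. *)
lemma curv_part_eq: assumes y: "y \<in> U" shows "curv_part y = - riem_ric_term g f y"
proof -
  have "riem_ric_term g f y
    = (\<Sum>i\<in>UNIV. \<Sum>a\<in>UNIV. \<Sum>k\<in>UNIV. \<Sum>b\<in>UNIV. riem g a i k b y * V a y * V b y * ric_raised k i y)"
    by (rule riem_ric_term_raised[OF y])
  also have "\<dots> = - (\<Sum>i\<in>UNIV. \<Sum>a\<in>UNIV. \<Sum>k\<in>UNIV. \<Sum>b\<in>UNIV. riem g i a k b y * V a y * V b y * ric_raised i k y)"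
  proof -
    have "(\<Sum>i\<in>UNIV. \<Sum>a\<in>UNIV. \<Sum>k\<in>UNIV. \<Sum>b\<in>UNIV. riem g a i k b y * V a y * V b y * ric_raised k i y)
       = (\<Sum>i\<in>UNIV. \<Sum>a\<in>UNIV. \<Sum>k\<in>UNIV. \<Sum>b\<in>UNIV. - (riem g i a k b y * V a y * V b y * ric_raised i k y))"
    proof (intro sum.cong refl)
      fix i a k b
      show "riem g a i k b y * V a y * V b y * ric_raised k i y = - (riem g i a k b y * V a y * V b y * ric_raised i k y)"
        using riem_antisym_12[of a i k b y] ric_raised_sym[OF y, of k i] by simp
    qed
    thus ?thesis by (simp add: sum_negf)
  qed
  also have "(\<Sum>i\<in>UNIV. \<Sum>a\<in>UNIV. \<Sum>k\<in>UNIV. \<Sum>b\<in>UNIV. riem g i a k b y * V a y * V b y * ric_raised i k y) = curv_part y"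
  proof -
    have "curv_part y = (\<Sum>i\<in>UNIV. \<Sum>k\<in>UNIV. \<Sum>a\<in>UNIV. \<Sum>b\<in>UNIV. riem g i a k b y * V a y * V b y * ric_raised i k y)"
      unfolding curv_part_def riem_up_df_lower[OF y] by (simp add: sum_distrib_left sum_distrib_right mult_ac)
    also have "\<dots> = (\<Sum>i\<in>UNIV. \<Sum>a\<in>UNIV. \<Sum>k\<in>UNIV. \<Sum>b\<in>UNIV. riem g i a k b y * V a y * V b y * ric_raised i k y)"
      by (rule sum.cong[OF refl], rule sum.swap)
    finally show ?thesis by simp
  qed
  finally show ?thesis by simp
qed

lemma hess_pair_value: assumes y: "y \<in> U"
  shows "hess_pair y = 2 * ric_hess_term g f y + lam * dir_grad g f (scal g) y - dir_grad g f (ric_norm2 g) y + 2 * riem_ric_term g f y"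
  using hess_pair_split[OF y] hess_ric_part[OF y] nabla_ric_part[OF y] curv_part_eq[OF y] by simp

lemma dir_grad_f_laplacian_scal: assumes y: "y \<in> U"
  shows "dir_grad g f (f_laplacian g f (scal g)) y = 2 * lam * dir_grad g f (scal g) y - 2 * dir_grad g f (ric_norm2 g) y"
proof -
  have "dir_grad g f (f_laplacian g f (scal g)) y = dir_grad g f (\<lambda>z. 2 * lam * scal g z - 2 * ric_norm2 g z) y"
    by (rule dir_grad_cong) (auto simp: f_laplacian_scal y)
  also have "\<dots> = 2 * lam * dir_grad g f (scal g) y - 2 * dir_grad g f (ric_norm2 g) y"
  proof -
    have e: "\<And>i. pd i (\<lambda>z. 2 * lam * scal g z - 2 * ric_norm2 g z) y = 2 * lam * pd i (scal g) y - 2 * pd i (ric_norm2 g) y"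
    proof -
      fix i
      have "pd i (\<lambda>z. 2 * lam * scal g z - 2 * ric_norm2 g z) y = pd i (\<lambda>z. (2 * lam) * scal g z) y - pd i (\<lambda>z. 2 * ric_norm2 g z) y"
        by (rule pd_diff) (auto intro: smooth_mult smooth_const scal_smooth ric_norm2_smooth y)
      also have "\<dots> = 2 * lam * pd i (scal g) y - 2 * pd i (ric_norm2 g) y"
        by (simp add: pd_cmult[OF scal_smooth y] pd_cmult[OF ric_norm2_smooth y])
      finally show "pd i (\<lambda>z. 2 * lam * scal g z - 2 * ric_norm2 g z) y = 2 * lam * pd i (scal g) y - 2 * pd i (ric_norm2 g) y" .
    qed
    show ?thesis unfolding dir_grad_def e by (simp add: algebra_simps sum_subtractf sum_distrib_left)
  qed
  finally show ?thesis .
qed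

lemma second_identity: assumes y: "y \<in> U"
  shows "(1/2) * f_laplacian g f (dir_grad g f (scal g)) y =
           dir_grad g f (f_laplacian g f (scal g)) y
           + 2 * ric_hess_term g f y + 2 * riem_ric_term g f y"
  using f_laplacian_dir_grad_scal[OF y] hess_pair_value[OF y] dir_grad_f_laplacian_scal[OF y] by simp

lemma first_identity: assumes y: "y \<in> U"
  shows "f_laplacian g f (ric_grad_grad g f) y =
           4 * lam * ric_grad_grad g f y - 2 * dir_grad g f (ric_norm2 g) y
           + 2 * ric_hess_term g f y + 2 * riem_ric_term g f y"
proof -
  have Qs: "smooth (dir_grad g f (scal g))" using dir_grad_smooth[OF f_smooth scal_smooth] .
  have "f_laplacian g f (ric_grad_grad g f) y = f_laplacian g f (\<lambda>z. (1/2) * dir_grad g f (scal g) z) y"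
    by (rule f_laplacian_cong) (auto simp: dir_grad_scal y)
  also have "\<dots> = (1/2) * f_laplacian g f (dir_grad g f (scal g)) y" by (rule f_laplacian_cmult[OF Qs y])
  finally show ?thesis using second_identity[OF y] dir_grad_f_laplacian_scal[OF y] dir_grad_scal[OF y] by simp
qed

end

theorem lemma2p3:
  fixes U :: "(real^'n::finite) set"
    and g :: "'n \<Rightarrow> 'n \<Rightarrow> real^'n \<Rightarrow> real"
    and f :: "real^'n \<Rightarrow> real"
    and lam :: real
  assumes "open U"
    and "gradient_ricci_soliton_on U g f lam"
    and "x \<in> U"
  shows "(f_laplacian g f (ric_grad_grad g f) x =
           4 * lam * ric_grad_grad g f x - 2 * dir_grad g f (ric_norm2 g) x
           + 2 * ric_hess_term g f x + 2 * riem_ric_term g f x)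
         \<and> ((1/2) * f_laplacian g f (dir_grad g f (scal g)) x =
           dir_grad g f (f_laplacian g f (scal g)) x
           + 2 * ric_hess_term g f x + 2 * riem_ric_term g f x)"
proof -
  interpret S: ricci_soliton_chart U g f lam
    using assms(1,2) unfolding gradient_ricci_soliton_on_def
    by unfold_locales auto
  show ?thesis using S.first_identity[OF assms(3)] S.second_identity[OF assms(3)] by blast
qed

end
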